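(* Let $\sigma$ be a skeleton in $\widehat P$ with $\underline{\dim}\,\sigma=\mathbf d$ such that $\mathfrak{Grass}(\sigma)\neq\varnothing$. Then there is an isomorphism $\phi$ from $\mathfrak{Grass}(\sigma)$ onto a closed subvariety of $\operatorname{Rep}(A,\mathbf d)$ such that, for every $C\in\mathfrak{Grass}(\sigma)$, the points $C$ and $\phi(C)$ parametrize isomorphic $A$-modules (i.e. $P/C\cong$ the module given by $\phi(C)$).
   Context: $K$ is an algebraically closed field and $A=KQ/I$, where $Q$ is a finite quiver with vertices $e_1,\dots,e_n$ and $I$ an admissible ideal; $J$ is the Jacobson radical of $A$ and $L+1$ its Loewy length. Paths are composed right to left ($pq$ = "$p$ after $q$"). For $\mathbf d=(d_1,\dots,d_n)$, $\operatorname{Rep}(A,\mathbf d)$ is the affine variety of tuples $(x_\alpha)_{\alpha\in Q_1}$, $x_\alpha\in\operatorname{Hom}_K(K^{d_{\mathrm{start}(\alpha)}},K^{d_{\mathrm{end}(\alpha)}})$, satisfying the relations in $I$. The radical layering of a module $M$ is $\mathbb S(M)=(J^lM/J^{l+1}M)_{0\le l\le L}$; a semisimple sequence $\mathbb S=(\mathbb S_0,\dots,\mathbb S_L)$ with top $T=\mathbb S_0$ and dimension vector $\mathbf d=\underline{\dim}\bigoplus_l\mathbb S_l$ is a sequence of semisimple modules. Write $\mathbb S_l=\bigoplus_i S_i^{m(l,i)}$. Let $t=\dim T$, $P=\bigoplus_{r=1}^tAz_r$ a projective cover of $T$ with top elements $z_r$, each normed by a vertex $e(r)$ (i.e. $e(r)z_r=z_r$),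 and $\widehat P=\bigoplus_{r=1}^t KQz_r$ the corresponding projective $KQ$-module. A path in $\widehat P$ is an element $pz_r$ with $p$ a path of $Q$ starting at $e(r)$; its length is the length of $p$. A skeleton in $\widehat P$ with radical layering $\mathbb S$ is a set $\sigma$ of paths in $\widehat P$ of length $\le L$ containing all $z_1,\dots,z_t$, containing exactly $m(l,i)$ paths of length $l$ ending in $e_i$ for all $l,i$, and closed under initial subpaths ($p_2p_1z_r\in\sigma\Rightarrow p_1z_r\in\sigma$); $\underline{\dim}\,\sigma:=\underline{\dim}\,\mathbb S$. $\mathfrak{Grass}(\sigma)$ is the set of $A$-submodules $C\subseteq P$ with $\mathbb S(P/C)=\mathbb S$ such that the residue classes $\{b+C: b\in\sigma\}$ (images of the paths of $\sigma$ in $P/C$) form a $K$-basis of $P/C$; it is a locally closed (affine) subvariety of the Grassmannian of $(\dim P-|\mathbf d|)$-dimensional subspaces of $P$. *)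

theory Defs
  imports Main "HOL-Computational_Algebra.Polynomial"
begin

(* Quiver Q: vertices 0..<n (vertex i stands for e_(i+1) of the paper), *)
(* A path is a pair (i, as): start vertex i and the list of arrows as   *)
(* in order of traversal (first arrow first).  Hence the paper's path   *)
(* p2 p1 ("p2 after p1") is (i, as1 @ as2), and p1 is an initial        *)
(* subpath of it.                                                       *)

type_synonym 'a qpath = "nat \<times> 'a list"

definition alg_closed_field :: "'k::field itself \<Rightarrow> bool" where
  "alg_closed_field _ \<longleftrightarrow> (\<forall>p::'k poly. degree p > 0 \<longrightarrow> (\<exists>x. poly p x = 0))"

definition pend :: "('a \<Rightarrow> nat) \<Rightarrow> 'a qpath \<Rightarrow> nat" where
  "pend tgt p = (if snd p = [] then fst p else tgt (last (snd p)))"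

definition plen :: "'a qpath \<Rightarrow> nat" where
  "plen p = length (snd p)"

definition valid_path :: "nat \<Rightarrow> 'a set \<Rightarrow> ('a \<Rightarrow> nat) \<Rightarrow> ('a \<Rightarrow> nat) \<Rightarrow> 'a qpath \<Rightarrow> bool" where
  "valid_path n Q1 src tgt p \<longleftrightarrow>
     fst p < n \<and> set (snd p) \<subseteq> Q1 \<and>
     (\<forall>k < length (snd p). src (snd p ! k) = (if k = 0 then fst p else tgt (snd p ! (k - 1))))"

definition KQ :: "nat \<Rightarrow> 'a set \<Rightarrow> ('a \<Rightarrow> nat) \<Rightarrow> ('a \<Rightarrow> nat) \<Rightarrow> ('a qpath \<Rightarrow> 'k::field) set" where
  "KQ n Q1 src tgt = {f. finite {p. f p \<noteq> 0} \<and> (\<forall>p. f p \<noteq> 0 \<longrightarrow> valid_path n Q1 src tgt p)}"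

(* multiplication in KQ: pmult tgt f g = f g  ("f after g") *)
definition pmult :: "('a \<Rightarrow> nat) \<Rightarrow> ('a qpath \<Rightarrow> 'k::field) \<Rightarrow> ('a qpath \<Rightarrow> 'k) \<Rightarrow> 'a qpath \<Rightarrow> 'k" where
  "pmult tgt f g = (\<lambda>p. \<Sum>k\<le>length (snd p).
       g (fst p, take k (snd p)) * f (pend tgt (fst p, take k (snd p)), drop k (snd p)))"

(* l-th power of the arrow ideal of KQ: combinations of paths of length >= l *)
definition Rpow :: "nat \<Rightarrow> 'a set \<Rightarrow> ('a \<Rightarrow> nat) \<Rightarrow> ('a \<Rightarrow> nat) \<Rightarrow> nat \<Rightarrow> ('a qpath \<Rightarrow> 'k::field) set" where
  "Rpow n Q1 src tgt l = {f \<in> KQ n Q1 src tgt. \<forall>p. plen p < l \<longrightarrow> f p = 0}"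

definition is_ideal_KQ :: "nat \<Rightarrow> 'a set \<Rightarrow> ('a \<Rightarrow> nat) \<Rightarrow> ('a \<Rightarrow> nat) \<Rightarrow> ('a qpath \<Rightarrow> 'k::field) set \<Rightarrow> bool" where
  "is_ideal_KQ n Q1 src tgt I \<longleftrightarrow>
     I \<subseteq> KQ n Q1 src tgt \<and> (\<lambda>_. 0) \<in> I \<and>
     (\<forall>f\<in>I. \<forall>g\<in>I. (\<lambda>p. f p + g p) \<in> I) \<and>
     (\<forall>f\<in>I. \<forall>c. (\<lambda>p. c * f p) \<in> I) \<and>
     (\<forall>f\<in>I. \<forall>a\<in>KQ n Q1 src tgt. pmult tgt a f \<in> I \<and> pmult tgt f a \<in> I)"

definition admissible :: "nat \<Rightarrow> 'a set \<Rightarrow> ('a \<Rightarrow> nat) \<Rightarrow> ('a \<Rightarrow> nat) \<Rightarrow> ('a qpath \<Rightarrow> 'k::field) set \<Rightarrow> bool" where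
  "admissible n Q1 src tgt I \<longleftrightarrow>
     is_ideal_KQ n Q1 src tgt I \<and>
     (\<exists>m\<ge>2. Rpow n Q1 src tgt m \<subseteq> I) \<and> I \<subseteq> Rpow n Q1 src tgt 2"

(* The projective KQ-module  Phat = (+)_{r<t} KQ z_r, z_r normed by e r.*)
(* Elements: finitely supported functions on pairs (r, path p) with p   *)
(* starting at e r; the pair (r,p) is the path p z_r.                   *)
(* The projective A-module P = Phat / I Phat; A-submodules C of P       *)
(* correspond bijectively to KQ-submodules Chat of Phat containing      *)
(* I Phat, with P/C = Phat/Chat.  We work with Chat throughout.         *)

definition Phat :: "nat \<Rightarrow> 'a set \<Rightarrow> ('a \<Rightarrow> nat) \<Rightarrow> ('a \<Rightarrow> nat) \<Rightarrow> nat \<Rightarrow> (nat \<Rightarrow> nat)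
                    \<Rightarrow> (nat \<times> 'a qpath \<Rightarrow> 'k::field) set" where
  "Phat n Q1 src tgt t e = {x. finite {y. x y \<noteq> 0} \<and>
      (\<forall>r p. x (r, p) \<noteq> 0 \<longrightarrow> r < t \<and> valid_path n Q1 src tgt p \<and> fst p = e r)}"

definition pact :: "('a \<Rightarrow> nat) \<Rightarrow> ('a qpath \<Rightarrow> 'k::field) \<Rightarrow> (nat \<times> 'a qpath \<Rightarrow> 'k) \<Rightarrow> nat \<times> 'a qpath \<Rightarrow> 'k" where
  "pact tgt f x = (\<lambda>y. pmult tgt f (\<lambda>q. x (fst y, q)) (snd y))"

definition IPhat :: "nat \<Rightarrow> 'a set \<Rightarrow> ('a \<Rightarrow> nat) \<Rightarrow> ('a \<Rightarrow> nat) \<Rightarrow> nat \<Rightarrow> (nat \<Rightarrow> nat)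
                    \<Rightarrow> ('a qpath \<Rightarrow> 'k::field) set \<Rightarrow> (nat \<times> 'a qpath \<Rightarrow> 'k) set" where
  "IPhat n Q1 src tgt t e I = {x \<in> Phat n Q1 src tgt t e. \<forall>r. (\<lambda>q. x (r, q)) \<in> I}"

definition RPhat :: "nat \<Rightarrow> 'a set \<Rightarrow> ('a \<Rightarrow> nat) \<Rightarrow> ('a \<Rightarrow> nat) \<Rightarrow> nat \<Rightarrow> (nat \<Rightarrow> nat)
                    \<Rightarrow> nat \<Rightarrow> (nat \<times> 'a qpath \<Rightarrow> 'k::field) set" where
  "RPhat n Q1 src tgt t e l = {x \<in> Phat n Q1 src tgt t e. \<forall>r p. plen p < l \<longrightarrow> x (r, p) = 0}"

definition path_vec :: "nat \<times> 'a qpath \<Rightarrow> nat \<times> 'a qpath \<Rightarrow> 'k::field" where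
  "path_vec b = (\<lambda>y. if y = b then 1 else 0)"

definition lincomb :: "(('x \<Rightarrow> 'k) \<Rightarrow> 'k::field) \<Rightarrow> ('x \<Rightarrow> 'k) set \<Rightarrow> 'x \<Rightarrow> 'k" where
  "lincomb c B = (\<lambda>y. \<Sum>b\<in>B. c b * b y)"

definition is_subspace :: "('x \<Rightarrow> 'k::field) set \<Rightarrow> ('x \<Rightarrow> 'k) set \<Rightarrow> bool" where
  "is_subspace V W \<longleftrightarrow> W \<subseteq> V \<and> (\<lambda>_. 0) \<in> W \<and>
      (\<forall>u\<in>W. \<forall>w\<in>W. (\<lambda>y. u y + w y) \<in> W) \<and> (\<forall>u\<in>W. \<forall>c. (\<lambda>y. c * u y) \<in> W)"

definition indep_mod :: "('x \<Rightarrow> 'k::field) set \<Rightarrow> ('x \<Rightarrow> 'k) set \<Rightarrow> bool" where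
  "indep_mod W B \<longleftrightarrow> finite B \<and> (\<forall>c. lincomb c B \<in> W \<longrightarrow> (\<forall>b\<in>B. c b = 0))"

definition spans_mod :: "('x \<Rightarrow> 'k::field) set \<Rightarrow> ('x \<Rightarrow> 'k) set \<Rightarrow> ('x \<Rightarrow> 'k) set \<Rightarrow> bool" where
  "spans_mod W U B \<longleftrightarrow> (\<forall>u\<in>U. \<exists>c. (\<lambda>y. u y - lincomb c B y) \<in> W)"

definition quot_dim :: "('x \<Rightarrow> 'k::field) set \<Rightarrow> ('x \<Rightarrow> 'k) set \<Rightarrow> nat \<Rightarrow> bool" where
  "quot_dim U W k \<longleftrightarrow> (\<exists>B. B \<subseteq> U \<and> finite B \<and> card B = k \<and> indep_mod W B \<and> spans_mod W U B)"

definition set_plus :: "('x \<Rightarrow> 'k::field) set \<Rightarrow> ('x \<Rightarrow> 'k) set \<Rightarrow> ('x \<Rightarrow> 'k) set" where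
  "set_plus U W = {(\<lambda>y. u y + w y) | u w. u \<in> U \<and> w \<in> W}"

definition at_vertex :: "('a \<Rightarrow> nat) \<Rightarrow> nat \<Rightarrow> (nat \<times> 'a qpath \<Rightarrow> 'k::field) set \<Rightarrow> (nat \<times> 'a qpath \<Rightarrow> 'k) set" where
  "at_vertex tgt i U = {x \<in> U. \<forall>r p. x (r, p) \<noteq> 0 \<longrightarrow> pend tgt p = i}"

definition is_submodule :: "nat \<Rightarrow> 'a set \<Rightarrow> ('a \<Rightarrow> nat) \<Rightarrow> ('a \<Rightarrow> nat) \<Rightarrow> nat \<Rightarrow> (nat \<Rightarrow> nat)
                    \<Rightarrow> (nat \<times> 'a qpath \<Rightarrow> 'k::field) set \<Rightarrow> bool" where
  "is_submodule n Q1 src tgt t e C \<longleftrightarrow> is_subspace (Phat n Q1 src tgt t e) C \<and>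
      (\<forall>f\<in>KQ n Q1 src tgt. \<forall>x\<in>C. pact tgt f x \<in> C)"

(* S(Phat/C) = S, where S_l = (+)_i S_i^(m l i):
   m l i = dim e_i (J^l M / J^(l+1) M) with M = Phat/C,
   J^l M = (J^l Phat + C)/C *)
definition radical_layering_is ::
  "nat \<Rightarrow> 'a set \<Rightarrow> ('a \<Rightarrow> nat) \<Rightarrow> ('a \<Rightarrow> nat) \<Rightarrow> nat \<Rightarrow> (nat \<Rightarrow> nat) \<Rightarrow> nat
     \<Rightarrow> (nat \<Rightarrow> nat \<Rightarrow> nat) \<Rightarrow> (nat \<times> 'a qpath \<Rightarrow> 'k::field) set \<Rightarrow> bool" where
  "radical_layering_is n Q1 src tgt t e L m C \<longleftrightarrow>
     (\<forall>l\<le>L. \<forall>i<n.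
        quot_dim (at_vertex tgt i (set_plus (RPhat n Q1 src tgt t e l) C))
                 (at_vertex tgt i (set_plus (RPhat n Q1 src tgt t e (Suc l)) C)) (m l i))"

definition is_skeleton ::
  "nat \<Rightarrow> 'a set \<Rightarrow> ('a \<Rightarrow> nat) \<Rightarrow> ('a \<Rightarrow> nat) \<Rightarrow> nat \<Rightarrow> (nat \<Rightarrow> nat) \<Rightarrow> nat
     \<Rightarrow> (nat \<Rightarrow> nat \<Rightarrow> nat) \<Rightarrow> (nat \<times> 'a qpath) set \<Rightarrow> bool" where
  "is_skeleton n Q1 src tgt t e L m \<sigma> \<longleftrightarrow>
     (\<forall>(r, p)\<in>\<sigma>. r < t \<and> valid_path n Q1 src tgt p \<and> fst p = e r \<and> plen p \<le> L) \<and>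
     (\<forall>r<t. (r, (e r, [])) \<in> \<sigma>) \<and>
     (\<forall>l\<le>L. \<forall>i<n. card {(r, p) \<in> \<sigma>. plen p = l \<and> pend tgt p = i} = m l i) \<and>
     (\<forall>r i as k. (r, (i, as)) \<in> \<sigma> \<longrightarrow> k \<le> length as \<longrightarrow> (r, (i, take k as)) \<in> \<sigma>)"

definition Grass ::
  "nat \<Rightarrow> 'a set \<Rightarrow> ('a \<Rightarrow> nat) \<Rightarrow> ('a \<Rightarrow> nat) \<Rightarrow> ('a qpath \<Rightarrow> 'k::field) set \<Rightarrow> nat \<Rightarrow> (nat \<Rightarrow> nat) \<Rightarrow> nat
     \<Rightarrow> (nat \<Rightarrow> nat \<Rightarrow> nat) \<Rightarrow> (nat \<times> 'a qpath) set \<Rightarrow> (nat \<times> 'a qpath \<Rightarrow> 'k) set set" where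
  "Grass n Q1 src tgt I t e L m \<sigma> =
     {C. is_submodule n Q1 src tgt t e C \<and> IPhat n Q1 src tgt t e I \<subseteq> C \<and>
         radical_layering_is n Q1 src tgt t e L m C \<and>
         indep_mod C (path_vec ` \<sigma>) \<and> spans_mod C (Phat n Q1 src tgt t e) (path_vec ` \<sigma>)}"

(* Representations: x alpha is a d(tgt alpha) x d(src alpha) matrix,   *)
(* entries outside the box are 0.                                       *)

definition rep_ambient :: "'a set \<Rightarrow> ('a \<Rightarrow> nat) \<Rightarrow> ('a \<Rightarrow> nat) \<Rightarrow> (nat \<Rightarrow> nat)
                    \<Rightarrow> ('a \<Rightarrow> nat \<Rightarrow> nat \<Rightarrow> 'k::field) set" where
  "rep_ambient Q1 src tgt d = {x. \<forall>\<alpha> j k. x \<alpha> j k \<noteq> 0 \<longrightarrow> \<alpha> \<in> Q1 \<and> j < d (tgt \<alpha>) \<and> k < d (src \<alpha>)}"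

(* matrix x_p of a path p = (i,[a1,...,ak]):  x_ak ... x_a1 *)
definition eval_path :: "('a \<Rightarrow> nat) \<Rightarrow> (nat \<Rightarrow> nat) \<Rightarrow> ('a \<Rightarrow> nat \<Rightarrow> nat \<Rightarrow> 'k::field) \<Rightarrow> 'a qpath
                    \<Rightarrow> nat \<Rightarrow> nat \<Rightarrow> 'k" where
  "eval_path src d x p = foldl (\<lambda>M \<alpha>. \<lambda>j k. \<Sum>l<d (src \<alpha>). x \<alpha> j l * M l k)
                              (\<lambda>j k. if j = k then 1 else 0) (snd p)"

definition Rep :: "nat \<Rightarrow> 'a set \<Rightarrow> ('a \<Rightarrow> nat) \<Rightarrow> ('a \<Rightarrow> nat) \<Rightarrow> ('a qpath \<Rightarrow> 'k::field) set \<Rightarrow> (nat \<Rightarrow> nat)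
                    \<Rightarrow> ('a \<Rightarrow> nat \<Rightarrow> nat \<Rightarrow> 'k) set" where
  "Rep n Q1 src tgt I d = {x \<in> rep_ambient Q1 src tgt d.
      \<forall>\<rho>\<in>I. \<forall>i<n. \<forall>j<n. \<forall>a<d j. \<forall>b<d i.
        (\<Sum>p\<in>{p. \<rho> p \<noteq> 0 \<and> fst p = i \<and> pend tgt p = j}. \<rho> p * eval_path src d x p a b) = 0}"

(* the module M_x = (+)_{i<n} K^(d i) given by x: vectors v with v i a, a < d i *)
definition Mvec :: "nat \<Rightarrow> (nat \<Rightarrow> nat) \<Rightarrow> (nat \<Rightarrow> nat \<Rightarrow> 'k::field) set" where
  "Mvec n d = {v. \<forall>i a. v i a \<noteq> 0 \<longrightarrow> i < n \<and> a < d i}"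

definition mact :: "nat \<Rightarrow> ('a \<Rightarrow> nat) \<Rightarrow> ('a \<Rightarrow> nat) \<Rightarrow> (nat \<Rightarrow> nat) \<Rightarrow> ('a \<Rightarrow> nat \<Rightarrow> nat \<Rightarrow> 'k::field)
                    \<Rightarrow> ('a qpath \<Rightarrow> 'k) \<Rightarrow> (nat \<Rightarrow> nat \<Rightarrow> 'k) \<Rightarrow> nat \<Rightarrow> nat \<Rightarrow> 'k" where
  "mact n src tgt d x f v = (\<lambda>j a. if j < n \<and> a < d j then
      (\<Sum>p\<in>{p. f p \<noteq> 0 \<and> pend tgt p = j}. f p * (\<Sum>b<d (fst p). eval_path src d x p a b * v (fst p) b))
      else 0)"

(* Phat/C is isomorphic, as a KQ-module (equivalently A-module), to M_x *)
definition quot_iso_rep ::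
  "nat \<Rightarrow> 'a set \<Rightarrow> ('a \<Rightarrow> nat) \<Rightarrow> ('a \<Rightarrow> nat) \<Rightarrow> nat \<Rightarrow> (nat \<Rightarrow> nat) \<Rightarrow> (nat \<Rightarrow> nat)
     \<Rightarrow> (nat \<times> 'a qpath \<Rightarrow> 'k::field) set \<Rightarrow> ('a \<Rightarrow> nat \<Rightarrow> nat \<Rightarrow> 'k) \<Rightarrow> bool" where
  "quot_iso_rep n Q1 src tgt t e d C x \<longleftrightarrow>
     (\<exists>\<Psi> :: (nat \<times> 'a qpath \<Rightarrow> 'k) \<Rightarrow> nat \<Rightarrow> nat \<Rightarrow> 'k.
        (\<forall>u\<in>Phat n Q1 src tgt t e. \<forall>w\<in>Phat n Q1 src tgt t e.
            \<Psi> (\<lambda>y. u y + w y) = (\<lambda>i a. \<Psi> u i a + \<Psi> w i a)) \<and>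
        (\<forall>u\<in>Phat n Q1 src tgt t e. \<forall>c. \<Psi> (\<lambda>y. c * u y) = (\<lambda>i a. c * \<Psi> u i a)) \<and>
        \<Psi> ` Phat n Q1 src tgt t e = Mvec n d \<and>
        (\<forall>u\<in>Phat n Q1 src tgt t e. \<Psi> u = (\<lambda>_ _. 0) \<longleftrightarrow> u \<in> C) \<and>
        (\<forall>f\<in>KQ n Q1 src tgt. \<forall>u\<in>Phat n Q1 src tgt t e.
            \<Psi> (pact tgt f u) = mact n src tgt d x f (\<Psi> u)))"

inductive_set polys_over :: "('x \<Rightarrow> 'k::field) set \<Rightarrow> ('x \<Rightarrow> 'k) set" for atoms where
  const: "(\<lambda>_. c) \<in> polys_over atoms"
| atom: "a \<in> atoms \<Longrightarrow> a \<in> polys_over atoms"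
| add: "f \<in> polys_over atoms \<Longrightarrow> g \<in> polys_over atoms \<Longrightarrow> (\<lambda>x. f x + g x) \<in> polys_over atoms"
| mult: "f \<in> polys_over atoms \<Longrightarrow> g \<in> polys_over atoms \<Longrightarrow> (\<lambda>x. f x * g x) \<in> polys_over atoms"

definition regular_on :: "('x \<Rightarrow> 'k::field) set \<Rightarrow> 'x set \<Rightarrow> ('x \<Rightarrow> 'k) \<Rightarrow> bool" where
  "regular_on atoms X f \<longleftrightarrow>
     (\<forall>x\<in>X. \<exists>g\<in>polys_over atoms. \<exists>h\<in>polys_over atoms. h x \<noteq> 0 \<and>
        (\<forall>y\<in>X. h y \<noteq> 0 \<longrightarrow> f y = g y / h y))"

definition rep_coords :: "(('a \<Rightarrow> nat \<Rightarrow> nat \<Rightarrow> 'k::field) \<Rightarrow> 'k) set" where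
  "rep_coords = {(\<lambda>x. x \<alpha> j k) | \<alpha> j k. True}"

definition zariski_closed_rep :: "'a set \<Rightarrow> ('a \<Rightarrow> nat) \<Rightarrow> ('a \<Rightarrow> nat) \<Rightarrow> (nat \<Rightarrow> nat)
                    \<Rightarrow> ('a \<Rightarrow> nat \<Rightarrow> nat \<Rightarrow> 'k::field) set \<Rightarrow> bool" where
  "zariski_closed_rep Q1 src tgt d Z \<longleftrightarrow>
     (\<exists>G \<subseteq> polys_over rep_coords. Z = {x \<in> rep_ambient Q1 src tgt d. \<forall>g\<in>G. g x = 0})"

(* Grassmannian of subspaces W of V (here V = Phat, W containing I Phat, which
   amounts to the Grassmannian of subspaces of P = Phat / I Phat).
   Standard affine charts: for a finite set S of vectors, U_S = {W. S is a basis mod W};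
   the chart coordinates of W are the coefficients of v + W in the basis S + W. *)
definition in_chart :: "('x \<Rightarrow> 'k::field) set \<Rightarrow> ('x \<Rightarrow> 'k) set \<Rightarrow> ('x \<Rightarrow> 'k) set \<Rightarrow> bool" where
  "in_chart V S W \<longleftrightarrow> S \<subseteq> V \<and> indep_mod W S \<and> spans_mod W V S"

definition chart_coord :: "('x \<Rightarrow> 'k::field) set \<Rightarrow> ('x \<Rightarrow> 'k) \<Rightarrow> ('x \<Rightarrow> 'k) \<Rightarrow> ('x \<Rightarrow> 'k) set \<Rightarrow> 'k" where
  "chart_coord S v s W =
     (THE c. (\<forall>b. b \<notin> S \<longrightarrow> c b = 0) \<and> (\<lambda>y. v y - lincomb c S y) \<in> W) s"

definition chart_atoms :: "('x \<Rightarrow> 'k::field) set \<Rightarrow> ('x \<Rightarrow> 'k) set \<Rightarrow> (('x \<Rightarrow> 'k) set \<Rightarrow> 'k) set" where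
  "chart_atoms V S = {chart_coord S v s | v s. v \<in> V \<and> s \<in> S}"

definition gr_regular_on :: "('x \<Rightarrow> 'k::field) set \<Rightarrow> ('x \<Rightarrow> 'k) set set \<Rightarrow> (('x \<Rightarrow> 'k) set \<Rightarrow> 'k) \<Rightarrow> bool" where
  "gr_regular_on V X f \<longleftrightarrow>
     (\<forall>W\<in>X. \<exists>S. in_chart V S W \<and>
        (\<exists>g\<in>polys_over (chart_atoms V S). \<exists>h\<in>polys_over (chart_atoms V S). h W \<noteq> 0 \<and>
           (\<forall>W'\<in>X. in_chart V S W' \<longrightarrow> h W' \<noteq> 0 \<longrightarrow> f W' = g W' / h W')))"

definition gr_to_rep_morphism :: "('x \<Rightarrow> 'k::field) set \<Rightarrow> ('x \<Rightarrow> 'k) set set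
                    \<Rightarrow> (('x \<Rightarrow> 'k) set \<Rightarrow> 'a \<Rightarrow> nat \<Rightarrow> nat \<Rightarrow> 'k) \<Rightarrow> bool" where
  "gr_to_rep_morphism V X \<phi> \<longleftrightarrow> (\<forall>\<alpha> j k. gr_regular_on V X (\<lambda>W. \<phi> W \<alpha> j k))"

definition rep_to_gr_morphism :: "('x \<Rightarrow> 'k::field) set \<Rightarrow> ('a \<Rightarrow> nat \<Rightarrow> nat \<Rightarrow> 'k) set
                    \<Rightarrow> (('a \<Rightarrow> nat \<Rightarrow> nat \<Rightarrow> 'k) \<Rightarrow> ('x \<Rightarrow> 'k) set) \<Rightarrow> bool" where
  "rep_to_gr_morphism V Z \<psi> \<longleftrightarrow>
     (\<forall>z\<in>Z. \<exists>S. \<exists>h\<in>polys_over rep_coords. h z \<noteq> 0 \<and>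
        (\<forall>z'\<in>Z. h z' \<noteq> 0 \<longrightarrow> in_chart V S (\<psi> z')) \<and>
        (\<forall>v\<in>V. \<forall>s\<in>S. regular_on rep_coords {z'\<in>Z. h z' \<noteq> 0} (\<lambda>z'. chart_coord S v s (\<psi> z'))))"

end

theory Submission
  imports Defs "HOL-Library.Function_Algebras"
begin

text \<open>Index the standard basis of \<open>M = \<Oplus>\<^sub>i K\<^bsup>d\<^sub>i\<^esup>\<close> by the skeleton \<open>\<sigma>\<close>. For \<open>C \<in> Grass(\<sigma>)\<close> the
  residues of \<open>\<sigma>\<close> form a basis of \<open>P/C\<close>, and writing the arrows in this basis gives a point
  \<open>rep_of C\<close> of \<open>Rep(A, d)\<close>. Conversely a representation \<open>x\<close> determines the homomorphism
  \<open>P \<rightarrow> M\<^sub>x\<close> sending each \<open>z\<^sub>r\<close> to its basis vector, and \<open>Cker x\<close> is its kernel. The image of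
  \<open>rep_of\<close> is cut out by polynomial equations: the skeleton paths go to their own basis vectors,
  and whenever \<open>b \<alpha> \<notin> \<sigma>\<close> for \<open>b \<in> \<sigma>\<close>, the image of \<open>b \<alpha>\<close> has no component at skeleton paths no
  longer than \<open>b\<close>. Under these equations \<open>J\<^bsup>l\<^esup>P\<close> is mapped into the span of the skeleton
  vectors of length \<open>\<ge> l\<close>, which produces the radical layering of \<open>P / Cker x\<close>. In the other
  direction, a descending induction on \<open>l\<close>, which counts dimensions layer by layer, shows that the
  \<open>\<sigma>\<close>-coordinates of \<open>J\<^bsup>l\<^esup>P + C\<close> vanish at paths shorter than \<open>l\<close>; this gives the equations
  for \<open>rep_of C\<close>. Both maps are polynomial in the respective coordinates and mutually inverse.\<close>

section \<open>Linear algebra modulo a subspace\<close>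

definition lin_closed :: "('x \<Rightarrow> 'k::field) set \<Rightarrow> bool" where
  "lin_closed W \<longleftrightarrow> (\<lambda>_. 0) \<in> W \<and> (\<forall>u\<in>W. \<forall>w\<in>W. (\<lambda>y. u y + w y) \<in> W) \<and> (\<forall>u\<in>W. \<forall>c. (\<lambda>y. c * u y) \<in> W)"

lemma lin_closed_zero: "lin_closed W \<Longrightarrow> (\<lambda>_. 0) \<in> W" by (simp add: lin_closed_def)

lemma lin_closed_add: "lin_closed W \<Longrightarrow> u \<in> W \<Longrightarrow> w \<in> W \<Longrightarrow> (\<lambda>y. u y + w y) \<in> W" by (simp add: lin_closed_def)

lemma lin_closed_smult: "lin_closed W \<Longrightarrow> u \<in> W \<Longrightarrow> (\<lambda>y. c * u y) \<in> W" by (simp add: lin_closed_def)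

lemma lin_closed_diff: assumes "lin_closed W" "u \<in> W" "w \<in> W" shows "(\<lambda>y. u y - w y) \<in> W"
proof -
  have "(\<lambda>y. (-1) * w y) \<in> W" using assms lin_closed_smult by blast
  from lin_closed_add[OF assms(1,2) this] show ?thesis by simp
qed

lemma lin_closed_sum:
  assumes "lin_closed W" "finite F" "\<forall>z\<in>F. w z \<in> W"
  shows "(\<lambda>y. \<Sum>z\<in>F. a z * w z y) \<in> W"
  using assms(2,3)
proof (induction F rule: finite_induct)
  case empty then show ?case using lin_closed_zero[OF assms(1)] by simp
next
  case (insert x F)
  have "(\<lambda>y. a x * w x y) \<in> W" using insert lin_closed_smult[OF assms(1)] by blast
  from lin_closed_add[OF assms(1) this insert.IH] insert show ?case by simp
qed

lemma lin_closed_sum_plain: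
  assumes "lin_closed W" "finite F" "\<forall>z\<in>F. w z \<in> W"
  shows "(\<lambda>y. \<Sum>z\<in>F. w z y) \<in> W"
  using lin_closed_sum[OF assms, of "\<lambda>_. 1"] by simp

lemma is_subspace_lin_closed: "is_subspace V W \<Longrightarrow> lin_closed W"
  by (simp add: is_subspace_def lin_closed_def)

lemma set_plusE: "v \<in> set_plus U W \<Longrightarrow> (\<And>u w. u \<in> U \<Longrightarrow> w \<in> W \<Longrightarrow> v = (\<lambda>y. u y + w y) \<Longrightarrow> P) \<Longrightarrow> P"
  unfolding set_plus_def by blast

lemma set_plusI: "u \<in> U \<Longrightarrow> w \<in> W \<Longrightarrow> v = (\<lambda>y. u y + w y) \<Longrightarrow> v \<in> set_plus U W"
  unfolding set_plus_def by blast

lemma lin_closed_set_plus: "lin_closed A \<Longrightarrow> lin_closed B \<Longrightarrow> lin_closed (set_plus A B)"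
proof -
  assume A: "lin_closed A" and B: "lin_closed B"
  have z: "(\<lambda>_. 0) \<in> set_plus A B" by (rule set_plusI[OF lin_closed_zero[OF A] lin_closed_zero[OF B]]) simp
  have a: "(\<lambda>y. u y + w y) \<in> set_plus A B" if hu: "u \<in> set_plus A B" and hw: "w \<in> set_plus A B" for u w
  proof -
    obtain u1 u2 where "u1 \<in> A" "u2 \<in> B" "u = (\<lambda>y. u1 y + u2 y)" using hu by (rule set_plusE)
    moreover obtain w1 w2 where "w1 \<in> A" "w2 \<in> B" "w = (\<lambda>y. w1 y + w2 y)" using hw by (rule set_plusE)
    note h = calculation this
    have A1: "(\<lambda>y. u1 y + w1 y) \<in> A" using lin_closed_add[OF A h(1) h(4)] .
    have B1: "(\<lambda>y. u2 y + w2 y) \<in> B" using lin_closed_add[OF B h(2) h(5)] .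
    show ?thesis by (rule set_plusI[OF A1 B1]) (simp add: h(3,6) add.assoc add.left_commute)
  qed
  have s: "(\<lambda>y. c * u y) \<in> set_plus A B" if hu: "u \<in> set_plus A B" for u c
  proof -
    obtain u1 u2 where "u1 \<in> A" "u2 \<in> B" "u = (\<lambda>y. u1 y + u2 y)" using hu by (rule set_plusE)
    note h = this
    have A1: "(\<lambda>y. c * u1 y) \<in> A" using lin_closed_smult[OF A h(1)] .
    have B1: "(\<lambda>y. c * u2 y) \<in> B" using lin_closed_smult[OF B h(2)] .
    show ?thesis by (rule set_plusI[OF A1 B1]) (simp add: h(3) distrib_left)
  qed
  show ?thesis unfolding lin_closed_def using z a s by blast
qed

lemma lin_closed_at_vertex: "lin_closed U \<Longrightarrow> lin_closed (at_vertex tgt i U)"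
proof -
  assume U: "lin_closed U"
  have z: "(\<lambda>_. 0) \<in> at_vertex tgt i U" using lin_closed_zero[OF U] by (simp add: at_vertex_def)
  have a: "(\<lambda>y. u y + w y) \<in> at_vertex tgt i U" if hu: "u \<in> at_vertex tgt i U" and hw: "w \<in> at_vertex tgt i U" for u w
  proof -
    have "u \<in> U" "w \<in> U" using hu hw by (auto simp: at_vertex_def)
    moreover have "\<forall>r p. u (r, p) + w (r, p) \<noteq> 0 \<longrightarrow> pend tgt p = i"
    proof (intro allI impI)
      fix r p assume "u (r, p) + w (r, p) \<noteq> 0"
      then have "u (r, p) \<noteq> 0 \<or> w (r, p) \<noteq> 0" by auto
      then show "pend tgt p = i" using hu hw unfolding at_vertex_def by blast
    qed
    ultimately show ?thesis using lin_closed_add[OF U] by (simp add: at_vertex_def)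
  qed
  have s: "(\<lambda>y. c * u y) \<in> at_vertex tgt i U" if hu: "u \<in> at_vertex tgt i U" for u c
    using hu lin_closed_smult[OF U] by (auto simp: at_vertex_def)
  show ?thesis unfolding lin_closed_def using z a s by blast
qed

lemma at_vertex_subset: "at_vertex tgt i U \<subseteq> U" by (auto simp: at_vertex_def)

lemma lincomb_cong: "(\<And>b. b \<in> B \<Longrightarrow> c b = c' b) \<Longrightarrow> lincomb c B = lincomb c' B"
  by (auto simp: lincomb_def intro!: sum.cong)

lemma lincomb_diff: "lincomb c B y - lincomb c' B y = lincomb (\<lambda>b. c b - c' b) B y"
  by (simp add: lincomb_def sum_subtractf left_diff_distrib)

lemma chart_coord_eqI:
  assumes W: "lin_closed W" and ind: "indep_mod W B" and v: "(\<lambda>y. v y - lincomb c B y) \<in> W" and s: "s \<in> B"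
  shows "chart_coord B v s W = c s"
proof -
  define c0 where "c0 = (\<lambda>b. if b \<in> B then c b else 0)"
  have lc0: "lincomb c0 B = lincomb c B" by (rule lincomb_cong) (simp add: c0_def)
  let ?P = "\<lambda>c'. (\<forall>b. b \<notin> B \<longrightarrow> c' b = 0) \<and> (\<lambda>y. v y - lincomb c' B y) \<in> W"
  have P0: "?P c0" using v lc0 by (simp add: c0_def)
  have uniq: "c' = c0" if "?P c'" for c'
  proof -
    have "(\<lambda>y. (v y - lincomb c' B y) - (v y - lincomb c0 B y)) \<in> W"
      using lin_closed_diff[OF W] that P0 by blast
    then have "(\<lambda>y. lincomb (\<lambda>b. c0 b - c' b) B y) \<in> W"
      by (simp add: lincomb_diff[symmetric])
    then have "\<forall>b\<in>B. c0 b - c' b = 0" using ind unfolding indep_mod_def by auto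
    then show ?thesis using that by (auto simp: c0_def)
  qed
  have "(THE c'. ?P c') = c0" using P0 uniq by (rule the_equality)
  then show ?thesis unfolding chart_coord_def using s by (simp add: c0_def)
qed

lemma chart_coord_spec:
  assumes W: "lin_closed W" and ind: "indep_mod W B" and sp: "spans_mod W U B" and v: "v \<in> U"
  shows "(\<lambda>y. v y - lincomb (\<lambda>s. chart_coord B v s W) B y) \<in> W"
proof -
  obtain c where c: "(\<lambda>y. v y - lincomb c B y) \<in> W" using sp v unfolding spans_mod_def by blast
  have "lincomb (\<lambda>s. chart_coord B v s W) B = lincomb c B"
    by (rule lincomb_cong) (rule chart_coord_eqI[OF W ind c])
  then show ?thesis using c by simp
qed



lemma sum_fun_apply: "(\<Sum>s\<in>S. f s) b = (\<Sum>s\<in>S. f s b)"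
  by (induction S rule: infinite_finite_induct) auto

definition fun_scale :: "'k::field \<Rightarrow> ('b \<Rightarrow> 'k) \<Rightarrow> ('b \<Rightarrow> 'k)" where
  "fun_scale c f = (\<lambda>z. c * f z)"

interpretation fun_vs: vector_space fun_scale
  by unfold_locales (auto simp: fun_scale_def fun_eq_iff algebra_simps)

lemma fun_scale_apply[simp]: "fun_scale c f z = c * f z" by (simp add: fun_scale_def)

definition unit_funs :: "'x set \<Rightarrow> ('x \<Rightarrow> 'k::field) set" where
  "unit_funs B = (\<lambda>b. \<lambda>b'. if b' = b then 1 else 0) ` B"

definition mod_coords :: "('x \<Rightarrow> 'k::field) set \<Rightarrow> ('x \<Rightarrow> 'k) set \<Rightarrow> ('x \<Rightarrow> 'k) \<Rightarrow> ('x \<Rightarrow> 'k) \<Rightarrow> 'k" where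
  "mod_coords W B v = (\<lambda>b. if b \<in> B then chart_coord B v b W else 0)"

context
  fixes W U B :: "('x \<Rightarrow> 'k::field) set"
  assumes W: "lin_closed W" and indB: "indep_mod W B" and spB: "spans_mod W U B"
begin

lemma mod_coords_spec: "v \<in> U \<Longrightarrow> (\<lambda>y. v y - lincomb (mod_coords W B v) B y) \<in> W"
  using chart_coord_spec[OF W indB spB, of v] lincomb_cong[of B "mod_coords W B v"]
  by (simp add: mod_coords_def)

lemma mod_coords_in_span: "mod_coords W B v \<in> fun_vs.span (unit_funs B)"
proof -
  have finB: "finite B" using indB by (simp add: indep_mod_def)
  have "mod_coords W B v = (\<Sum>b\<in>B. fun_scale (mod_coords W B v b) (\<lambda>b'. if b' = b then 1 else 0))"
    by (rule ext) (auto simp: sum_fun_apply mod_coords_def finB if_distrib cong: if_cong)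
  also have "\<dots> \<in> fun_vs.span (unit_funs B)"
    by (intro fun_vs.span_sum fun_vs.span_scale fun_vs.span_base) (auto simp: unit_funs_def)
  finally show ?thesis .
qed

lemma lincomb_mod_coords:
  assumes finS: "finite S" and SU: "S \<subseteq> U"
  shows "(\<lambda>y. lincomb a S y - lincomb (\<lambda>b. \<Sum>s\<in>S. a s * mod_coords W B s b) B y) \<in> W"
proof -
  have "(\<lambda>y. \<Sum>s\<in>S. a s * (s y - lincomb (mod_coords W B s) B y)) \<in> W"
    by (rule lin_closed_sum[OF W finS]) (use mod_coords_spec SU in auto)
  moreover have "(\<Sum>s\<in>S. a s * lincomb (mod_coords W B s) B y)
      = lincomb (\<lambda>b. \<Sum>s\<in>S. a s * mod_coords W B s b) B y" for y
    unfolding lincomb_def sum_distrib_left sum_distrib_right mult.assoc by (rule sum.swap)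
  ultimately show ?thesis
    by (simp add: right_diff_distrib sum_subtractf lincomb_def)
qed

lemma mod_coords_independent:
  assumes SU: "S \<subseteq> U" and indS: "indep_mod W S"
  shows "inj_on (mod_coords W B) S" and "fun_vs.independent (mod_coords W B ` S)"
proof -
  have finS: "finite S" using indS by (simp add: indep_mod_def)
  have key: "\<forall>s\<in>S. a s = 0" if h: "(\<Sum>s\<in>S. fun_scale (a s) (mod_coords W B s)) = 0" for a
  proof -
    have "(\<Sum>s\<in>S. a s * mod_coords W B s b) = 0" for b
      using fun_cong[OF h, of b] by (simp add: sum_fun_apply)
    then have "lincomb a S \<in> W"
      using lincomb_mod_coords[OF finS SU, of a] by (simp add: lincomb_def)
    then show ?thesis using indS unfolding indep_mod_def by blast
  qed
  show inj: "inj_on (mod_coords W B) S"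
  proof (rule inj_onI, rule ccontr)
    fix s1 s2 assume s: "s1 \<in> S" "s2 \<in> S" "mod_coords W B s1 = mod_coords W B s2" "s1 \<noteq> s2"
    define a where "a s = (if s = s1 then (1::'k) else if s = s2 then -1 else 0)" for s
    have "(\<Sum>s\<in>S. fun_scale (a s) (mod_coords W B s)) = (\<Sum>s\<in>{s1,s2}. fun_scale (a s) (mod_coords W B s))"
      by (rule sum.mono_neutral_right) (use s finS in \<open>auto simp: a_def fun_scale_def fun_eq_iff\<close>)
    also have "\<dots> = 0" using s by (auto simp: a_def fun_scale_def fun_eq_iff)
    finally have "\<forall>s\<in>S. a s = 0" by (rule key)
    then show False using s by (auto simp: a_def)
  qed
  show "fun_vs.independent (mod_coords W B ` S)"
  proof
    assume dep: "fun_vs.dependent (mod_coords W B ` S)"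
    obtain u where u: "\<exists>v\<in>mod_coords W B ` S. u v \<noteq> 0"
        "(\<Sum>v\<in>mod_coords W B ` S. fun_scale (u v) v) = 0"
      using dep fun_vs.dependent_finite[of "mod_coords W B ` S"] finS by auto
    then have "(\<Sum>s\<in>S. fun_scale (u (mod_coords W B s)) (mod_coords W B s)) = 0"
      by (simp add: sum.reindex[OF inj])
    then show False using key[of "\<lambda>s. u (mod_coords W B s)"] u(1) by auto
  qed
qed

lemma indep_mod_card_spans_mod:
  assumes SU: "S \<subseteq> U" and indS: "indep_mod W S" and cardS: "card S = card B"
  shows "spans_mod W U S"
  unfolding spans_mod_def
proof
  fix u assume uU: "u \<in> U"
  let ?\<kappa> = "mod_coords W B" and ?E = "unit_funs B :: (('x \<Rightarrow> 'k) \<Rightarrow> 'k) set"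
  have finB: "finite B" and finS: "finite S" using indB indS by (auto simp: indep_mod_def)
  have finE: "finite ?E" and cardE: "card ?E \<le> card B"
    using finB card_image_le[OF finB] by (simp_all add: unit_funs_def)
  have indK: "fun_vs.independent (?\<kappa> ` S)" and injK: "inj_on ?\<kappa> S"
    using mod_coords_independent[OF SU indS] by auto
  have "?\<kappa> u \<in> fun_vs.span (?\<kappa> ` S)"
  proof (rule ccontr)
    assume nu: "?\<kappa> u \<notin> fun_vs.span (?\<kappa> ` S)"
    have ind: "fun_vs.independent (insert (?\<kappa> u) (?\<kappa> ` S))"
      by (rule fun_vs.independent_insertI[OF nu indK])
    have sub: "insert (?\<kappa> u) (?\<kappa> ` S) \<subseteq> fun_vs.span ?E"
      by (intro insert_subsetI image_subsetI mod_coords_in_span)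
    from fun_vs.independent_span_bound[OF finE ind sub]
    have le: "card (insert (?\<kappa> u) (?\<kappa> ` S)) \<le> card ?E" by (rule conjunct2)
    have "?\<kappa> u \<notin> ?\<kappa> ` S"
    proof
      assume "?\<kappa> u \<in> ?\<kappa> ` S"
      then have "?\<kappa> u \<in> fun_vs.span (?\<kappa> ` S)" by (rule fun_vs.span_base)
      with nu show False by contradiction
    qed
    then have "card (insert (?\<kappa> u) (?\<kappa> ` S)) = Suc (card S)"
      using card_insert_disjoint[OF finite_imageI[OF finS, of ?\<kappa>]] card_image[OF injK] by simp
    then show False using le cardE cardS by linarith
  qed
  then have "?\<kappa> u \<in> range (\<lambda>g. \<Sum>v\<in>?\<kappa> ` S. fun_scale (g v) v)"
    by (simp only: fun_vs.span_finite[OF finite_imageI[OF finS]])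
  then obtain g where g: "?\<kappa> u = (\<Sum>v\<in>?\<kappa> ` S. fun_scale (g v) v)" by (rule rangeE)
  define a where "a s = g (?\<kappa> s)" for s
  have "?\<kappa> u = (\<Sum>s\<in>S. fun_scale (a s) (?\<kappa> s))"
    unfolding g sum.reindex[OF injK] by (simp add: a_def comp_def)
  then have eqc: "(\<lambda>b. \<Sum>s\<in>S. a s * ?\<kappa> s b) = ?\<kappa> u"
    by (simp add: fun_eq_iff sum_fun_apply)
  have "(\<lambda>y. (u y - lincomb (?\<kappa> u) B y) - (lincomb a S y - lincomb (?\<kappa> u) B y)) \<in> W"
    using lin_closed_diff[OF W mod_coords_spec[OF uU] lincomb_mod_coords[OF finS SU, of a]]
    unfolding eqc .
  then show "\<exists>c. (\<lambda>y. u y - lincomb c S y) \<in> W" by (intro exI[of _ a]) simp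
qed

end

section \<open>Paths and the action of the path algebra\<close>

definition supp :: "('x \<Rightarrow> 'k::zero) \<Rightarrow> 'x set" where "supp u = {y. u y \<noteq> 0}"

lemma path_vec_inj: "inj (path_vec :: nat \<times> 'a qpath \<Rightarrow> nat \<times> 'a qpath \<Rightarrow> 'k::field)"
proof (rule injI)
  fix b b' :: "nat \<times> 'a qpath"
  assume "(path_vec b :: nat \<times> 'a qpath \<Rightarrow> 'k) = path_vec b'"
  then have "(path_vec b :: nat \<times> 'a qpath \<Rightarrow> 'k) b = path_vec b' b" by simp
  then show "b = b'" by (auto simp: path_vec_def split: if_splits)
qed

lemma lincomb_path_vec:
  "lincomb c ((path_vec :: nat \<times> 'a qpath \<Rightarrow> nat \<times> 'a qpath \<Rightarrow> 'k::field) ` A)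
     = (\<lambda>z. \<Sum>b\<in>A. c (path_vec b) * path_vec b z)"
proof -
  have "inj_on (path_vec :: nat \<times> 'a qpath \<Rightarrow> nat \<times> 'a qpath \<Rightarrow> 'k) A" using path_vec_inj inj_on_subset by blast
  then show ?thesis unfolding lincomb_def by (intro ext) (simp add: sum.reindex)
qed

lemma lincomb_path_vec_inv:
  "lincomb (\<lambda>w. h (inv_into A path_vec w)) ((path_vec :: nat \<times> 'a qpath \<Rightarrow> nat \<times> 'a qpath \<Rightarrow> 'k::field) ` A)
     = (\<lambda>z. \<Sum>b\<in>A. h b * path_vec b z)"
proof -
  have i: "inj_on (path_vec :: nat \<times> 'a qpath \<Rightarrow> nat \<times> 'a qpath \<Rightarrow> 'k) A"
    using path_vec_inj inj_on_subset by blast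
  show ?thesis unfolding lincomb_path_vec using inv_into_f_f[OF i] by simp
qed

lemma supp_path_vec: "supp (path_vec b :: nat \<times> 'a qpath \<Rightarrow> 'k::field) = {b}"
  by (auto simp: supp_def path_vec_def)

lemma path_vec_expansion:
  assumes "finite F" "supp u \<subseteq> F"
  shows "u = (\<lambda>z. \<Sum>y\<in>F. u y * path_vec y z)"
proof
  fix z
  have "(\<Sum>y\<in>F. u y * path_vec y z) = (\<Sum>y\<in>F. if y = z then u z else 0)"
    by (rule sum.cong) (auto simp: path_vec_def)
  also have "\<dots> = u z" using assms by (auto simp: supp_def)
  finally show "u z = (\<Sum>y\<in>F. u y * path_vec y z)" by simp
qed

definition qvec :: "'a qpath \<Rightarrow> 'a qpath \<Rightarrow> 'k::field" where
  "qvec q = (\<lambda>p. if p = q then 1 else 0)"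

lemma qvec_expansion:
  assumes "finite F" "supp f \<subseteq> F"
  shows "f = (\<lambda>p. \<Sum>q\<in>F. f q * qvec q p)"
proof
  fix p
  have "(\<Sum>q\<in>F. f q * qvec q p) = (\<Sum>q\<in>F. if q = p then f p else 0)"
    by (rule sum.cong) (auto simp: qvec_def)
  also have "\<dots> = f p" using assms by (auto simp: supp_def)
  finally show "f p = (\<Sum>q\<in>F. f q * qvec q p)" by simp
qed

lemma pend_simps[simp]: "pend tgt (i, []) = i" "pend tgt (i, as @ [\<alpha>]) = tgt \<alpha>"
  by (auto simp: pend_def)

lemma pend_append: "pend tgt (i, as @ bs) = pend tgt (pend tgt (i, as), bs)"
  by (cases bs rule: rev_cases) (auto simp: pend_def)

lemma plen_simps[simp]: "plen (i, as) = length as" by (simp add: plen_def)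

lemma valid_nil[simp]: "valid_path n Q1 src tgt (i, []) \<longleftrightarrow> i < n"
  by (simp add: valid_path_def)

lemma valid_snoc:
  "valid_path n Q1 src tgt (i, as @ [\<alpha>]) \<longleftrightarrow>
     valid_path n Q1 src tgt (i, as) \<and> \<alpha> \<in> Q1 \<and> src \<alpha> = pend tgt (i, as)"
proof -
  have A: "(\<forall>k<length as. src ((as @ [\<alpha>]) ! k) = (if k = 0 then i else tgt ((as @ [\<alpha>]) ! (k - 1))))
      \<longleftrightarrow> (\<forall>k<length as. src (as ! k) = (if k = 0 then i else tgt (as ! (k - 1))))"
    by (intro all_cong1 imp_cong refl) (auto simp: nth_append)
  have B: "src ((as @ [\<alpha>]) ! length as) = (if length as = 0 then i else tgt ((as @ [\<alpha>]) ! (length as - 1)))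
      \<longleftrightarrow> src \<alpha> = pend tgt (i, as)"
    by (cases as rule: rev_cases) (simp_all add: pend_def nth_append)
  show ?thesis
    unfolding valid_path_def fst_conv snd_conv length_append_singleton All_less_Suc A B
    by auto
qed

lemma valid_pend_lt:
  assumes arrow_ends: "\<forall>\<alpha>\<in>Q1. src \<alpha> < n \<and> tgt \<alpha> < n" and v: "valid_path n Q1 src tgt p"
  shows "pend tgt p < n"
proof (cases p)
  case (Pair i as)
  then show ?thesis using v arrow_ends
    by (cases as rule: rev_cases) (auto simp: valid_snoc)
qed

lemma valid_append:
  assumes arrow_ends: "\<forall>\<alpha>\<in>Q1. src \<alpha> < n \<and> tgt \<alpha> < n"
  shows "valid_path n Q1 src tgt (i, as @ bs) \<longleftrightarrow>
     valid_path n Q1 src tgt (i, as) \<and> valid_path n Q1 src tgt (pend tgt (i, as), bs)"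
proof (induction bs rule: rev_induct)
  case Nil
  then show ?case using valid_pend_lt[OF arrow_ends, of "(i, as)"] by auto
next
  case (snoc \<alpha> bs)
  then show ?case using pend_append[of tgt i as bs]
    by (simp add: valid_snoc append_assoc[symmetric] del: append_assoc)
qed

definition pconcat :: "nat \<times> 'a qpath \<Rightarrow> 'a qpath \<Rightarrow> nat \<times> 'a qpath" where
  "pconcat y q = (fst y, (fst (snd y), snd (snd y) @ snd q))"

lemma pact_sum_right:
  "pact tgt f (\<lambda>z. \<Sum>w\<in>F. a w * g w z) = (\<lambda>z. \<Sum>w\<in>F. a w * pact tgt f (g w) z)"
  unfolding pact_def pmult_def
  by (rule ext) (simp add: sum_distrib_right sum_distrib_left mult.assoc sum.swap[of _ F])

lemma pact_sum_left:
  "pact tgt (\<lambda>p. \<Sum>q\<in>F. a q * f q p) x = (\<lambda>z. \<Sum>q\<in>F. a q * pact tgt (f q) x z)"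
  unfolding pact_def pmult_def
  by (rule ext) (simp add: sum_distrib_right sum_distrib_left mult.left_commute sum.swap[of _ F])

lemma pact_diff: "pact tgt f (\<lambda>y. u y - w y) = (\<lambda>z. pact tgt f u z - pact tgt f w z)"
  unfolding pact_def pmult_def by (intro ext) (simp add: left_diff_distrib sum_subtractf)

lemma pmult_zero: "pmult tgt f (\<lambda>_. 0) = (\<lambda>_. 0)" by (simp add: pmult_def)

lemma take_drop_split_eq_iff:
  assumes "k \<le> length cs"
  shows "((r', (i', take k cs)) = (r, (i, as)) \<and> (pend tgt (i', take k cs), drop k cs) = (j, bs))
     \<longleftrightarrow> k = length as \<and> (r' = r \<and> i' = i \<and> cs = as @ bs \<and> j = pend tgt (i, as))"
proof
  assume h: "(r', (i', take k cs)) = (r, (i, as)) \<and> (pend tgt (i', take k cs), drop k cs) = (j, bs)"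
  then have "k = length as" using assms by auto
  moreover have "cs = as @ bs" using h append_take_drop_id[of k cs] by simp
  ultimately show "k = length as \<and> (r' = r \<and> i' = i \<and> cs = as @ bs \<and> j = pend tgt (i, as))"
    using h by auto
qed auto

lemma pact_qvec_path_vec:
  "pact tgt (qvec q) (path_vec y) =
     (if fst q = pend tgt (snd y) then path_vec (pconcat y q) else (\<lambda>_. 0))"
proof (rule ext)
  fix z :: "nat \<times> 'a qpath"
  obtain r i as where y: "y = (r, (i, as))" by (cases y) auto
  obtain j bs where q: "q = (j, bs)" by (cases q) auto
  obtain r' i' cs where z: "z = (r', (i', cs))" by (cases z) auto
  let ?c = "r' = r \<and> i' = i \<and> cs = as @ bs \<and> j = pend tgt (i, as)"
  have tm: "path_vec y (r', (i', take k cs)) * qvec q (pend tgt (i', take k cs), drop k cs)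
      = (if k = length as then (if ?c then 1 else 0) else 0)" if "k \<le> length cs" for k
  proof -
    have "path_vec y (r', (i', take k cs)) * qvec q (pend tgt (i', take k cs), drop k cs)
      = (if (r', (i', take k cs)) = y \<and> (pend tgt (i', take k cs), drop k cs) = q then 1 else 0)"
      by (simp add: path_vec_def qvec_def)
    also have "\<dots> = (if k = length as \<and> ?c then 1 else 0)"
      unfolding y q take_drop_split_eq_iff[OF that] ..
    also have "\<dots> = (if k = length as then (if ?c then 1 else 0) else 0)" by simp
    finally show ?thesis .
  qed
  have "pact tgt (qvec q) (path_vec y) z =
      (\<Sum>k\<le>length cs. if k = length as then (if ?c then 1 else 0) else 0)"
    unfolding pact_def pmult_def z by (simp add: tm)
  also have "\<dots> = (if ?c then 1 else 0)" by (auto simp: sum.delta')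
  also have "\<dots> = (if fst q = pend tgt (snd y) then path_vec (pconcat y q) else (\<lambda>_. 0)) z"
    by (auto simp: y q z pconcat_def path_vec_def)
  finally show "pact tgt (qvec q) (path_vec y) z =
      (if fst q = pend tgt (snd y) then path_vec (pconcat y q) else (\<lambda>_. 0)) z" .
qed

definition vertex_part :: "('a \<Rightarrow> nat) \<Rightarrow> nat \<Rightarrow> (nat \<times> 'a qpath \<Rightarrow> 'k::zero) \<Rightarrow> nat \<times> 'a qpath \<Rightarrow> 'k" where
  "vertex_part tgt i u = (\<lambda>y. if pend tgt (snd y) = i then u y else 0)"

lemma foldl_matrix_product:
  fixes M :: "nat \<Rightarrow> nat \<Rightarrow> 'k::field" and x :: "'a \<Rightarrow> nat \<Rightarrow> nat \<Rightarrow> 'k"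
  assumes M: "\<forall>c\<ge>D. M c b = 0"
  shows "foldl (\<lambda>M \<alpha>. \<lambda>j k. \<Sum>l<d (src \<alpha>). x \<alpha> j l * M l k) M bs a b
       = (\<Sum>c<D. foldl (\<lambda>M \<alpha>. \<lambda>j k. \<Sum>l<d (src \<alpha>). x \<alpha> j l * M l k) (\<lambda>j k. if j = k then 1 else 0) bs a c * M c b)"
  (is "?F M bs a b = (\<Sum>c<D. ?F ?Id bs a c * M c b)")
proof (induction bs arbitrary: a rule: rev_induct)
  case Nil
  show ?case
  proof (cases "a < D")
    case True
    then have "(\<Sum>c<D. ?Id a c * M c b) = (\<Sum>c<D. if c = a then M a b else 0)"
      by (intro sum.cong) auto
    then show ?thesis using True by simp
  next
    case False
    then show ?thesis using M by auto
  qed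
next
  case (snoc \<alpha> bs)
  have "?F M (bs @ [\<alpha>]) a b = (\<Sum>l<d (src \<alpha>). x \<alpha> a l * ?F M bs l b)" by simp
  also have "\<dots> = (\<Sum>l<d (src \<alpha>). x \<alpha> a l * (\<Sum>c<D. ?F ?Id bs l c * M c b))"
    using snoc by simp
  also have "\<dots> = (\<Sum>c<D. (\<Sum>l<d (src \<alpha>). x \<alpha> a l * ?F ?Id bs l c) * M c b)"
    by (simp add: sum_distrib_left sum_distrib_right mult.assoc) (rule sum.swap)
  also have "\<dots> = (\<Sum>c<D. ?F ?Id (bs @ [\<alpha>]) a c * M c b)" by simp
  finally show ?case .
qed

lemma eval_path_snoc: "eval_path src d x (i, as @ [\<alpha>]) = (\<lambda>j k. \<Sum>l<d (src \<alpha>). x \<alpha> j l * eval_path src d x (i, as) l k)"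
  by (simp add: eval_path_def)

lemma eval_path_nil: "eval_path src d x (i, []) = (\<lambda>j k. if j = k then 1 else 0)"
  by (simp add: eval_path_def)

lemma eval_path_append:
  assumes "\<forall>c\<ge>D. eval_path src d x (i, as) c b = 0"
  shows "eval_path src d x (i, as @ bs) a b = (\<Sum>c<D. eval_path src d x (j, bs) a c * eval_path src d x (i, as) c b)"
proof -
  let ?F = "\<lambda>M \<alpha>. \<lambda>j k. \<Sum>l<d (src \<alpha>). x \<alpha> j l * M l k"
  have "eval_path src d x (i, as @ bs) a b = foldl ?F (eval_path src d x (i, as)) bs a b"
    by (simp add: eval_path_def)
  also have "\<dots> = (\<Sum>c<D. foldl ?F (\<lambda>j k. if j = k then 1 else 0) bs a c * eval_path src d x (i, as) c b)"
    by (rule foldl_matrix_product) (use assms in simp)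
  finally show ?thesis by (simp add: eval_path_def)
qed

lemma eval_path_rows_zero:
  assumes x: "x \<in> rep_ambient Q1 src tgt d" and c: "c \<ge> d (pend tgt (i, as))" and ne: "as \<noteq> [] \<or> b < d i"
  shows "eval_path src d x (i, as) c b = 0"
proof (cases as rule: rev_cases)
  case Nil
  then show ?thesis using ne c by (simp add: eval_path_nil)
next
  case (snoc bs \<alpha>)
  have "x \<alpha> c l = 0" for l
  proof (rule ccontr)
    assume "x \<alpha> c l \<noteq> 0"
    then have "c < d (tgt \<alpha>)" using x unfolding rep_ambient_def by blast
    then show False using c snoc by simp
  qed
  then show ?thesis using snoc by (simp add: eval_path_snoc)
qed

lemma polys_sum:
  assumes "\<forall>w\<in>F. g w \<in> polys_over A"
  shows "(\<lambda>x. \<Sum>w\<in>F. g w x) \<in> polys_over A"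
proof (cases "finite F")
  case True
  then show ?thesis using assms
  proof (induction F rule: finite_induct)
    case empty then show ?case using polys_over.const[of 0 A] by simp
  next
    case (insert w F)
    then show ?case using polys_over.add[of "g w" A "\<lambda>x. \<Sum>w\<in>F. g w x"] by simp
  qed
next
  case False
  then show ?thesis using polys_over.const[of 0 A] by simp
qed

lemma polys_cmult: "f \<in> polys_over A \<Longrightarrow> (\<lambda>x. c * f x) \<in> polys_over A"
  using polys_over.mult[OF polys_over.const] by blast

lemma polys_diff: "f \<in> polys_over A \<Longrightarrow> g \<in> polys_over A \<Longrightarrow> (\<lambda>x. f x - g x) \<in> polys_over A"
  using polys_over.add[of f A "\<lambda>x. (-1) * g x"] polys_cmult[of g A "-1"] by simp

lemma eval_path_poly:
  "(\<lambda>x :: 'a \<Rightarrow> nat \<Rightarrow> nat \<Rightarrow> 'k::field. eval_path src d x p a b) \<in> polys_over rep_coords"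
proof (cases p)
  case (Pair i as)
  have "(\<lambda>x :: 'a \<Rightarrow> nat \<Rightarrow> nat \<Rightarrow> 'k. eval_path src d x (i, as) a' b) \<in> polys_over rep_coords" for a'
  proof (induction as arbitrary: a' rule: rev_induct)
    case Nil
    show ?case unfolding eval_path_nil by (rule polys_over.const)
  next
    case (snoc \<alpha> as)
    have atom: "(\<lambda>x :: 'a \<Rightarrow> nat \<Rightarrow> nat \<Rightarrow> 'k. x \<alpha> a' l) \<in> polys_over rep_coords" for l
      by (rule polys_over.atom) (auto simp: rep_coords_def)
    have "(\<lambda>x :: 'a \<Rightarrow> nat \<Rightarrow> nat \<Rightarrow> 'k. \<Sum>l<d (src \<alpha>). x \<alpha> a' l * eval_path src d x (i, as) l b)
        \<in> polys_over rep_coords"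
      by (rule polys_sum) (use polys_over.mult[OF atom snoc.IH] in blast)
    then show ?case by (simp add: eval_path_snoc)
  qed
  then show ?thesis using Pair by simp
qed

section \<open>The isomorphism between \<open>Grass(\<sigma>)\<close> and a closed subset of \<open>Rep(A, d)\<close>\<close>

locale skeleton_data =
  fixes n :: nat and Q1 :: "'a set" and src tgt :: "'a \<Rightarrow> nat"
    and I :: "('a qpath \<Rightarrow> 'k::field) set"
    and L t :: nat and e :: "nat \<Rightarrow> nat"
    and m :: "nat \<Rightarrow> nat \<Rightarrow> nat" and d :: "nat \<Rightarrow> nat"
    and \<sigma> :: "(nat \<times> 'a qpath) set"
  assumes finite_arrows: "finite Q1" and arrow_ends: "\<forall>\<alpha>\<in>Q1. src \<alpha> < n \<and> tgt \<alpha> < n"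
    and admissible_I: "admissible n Q1 src tgt I"
    and Loewy_bound: "Rpow n Q1 src tgt (Suc L) \<subseteq> I"
    and top_vertices: "\<forall>r<t. e r < n"
    and skeleton: "is_skeleton n Q1 src tgt t e L m \<sigma>"
    and dim_vector: "\<forall>i<n. d i = (\<Sum>l\<le>L. m l i)"
begin

abbreviation "valid \<equiv> valid_path n Q1 src tgt"

abbreviation "V \<equiv> Phat n Q1 src tgt t e :: (nat \<times> 'a qpath \<Rightarrow> 'k) set"

abbreviation "ptgt \<equiv> pend tgt"

abbreviation "RA \<equiv> rep_ambient Q1 src tgt d :: ('a \<Rightarrow> nat \<Rightarrow> nat \<Rightarrow> 'k) set"

abbreviation "act \<equiv> mact n src tgt d"

abbreviation "ev \<equiv> eval_path src d"

abbreviation "RP \<equiv> RPhat n Q1 src tgt t e :: nat \<Rightarrow> (nat \<times> 'a qpath \<Rightarrow> 'k) set"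

abbreviation "rad_plus C l \<equiv> set_plus (RP l) C"

abbreviation "pv \<equiv> (path_vec :: nat \<times> 'a qpath \<Rightarrow> nat \<times> 'a qpath \<Rightarrow> 'k)"

abbreviation "Gr \<equiv> Grass n Q1 src tgt I t e L m \<sigma>"

definition Phat_path :: "nat \<times> 'a qpath \<Rightarrow> bool" where
  "Phat_path y \<longleftrightarrow> fst y < t \<and> valid (snd y) \<and> fst (snd y) = e (fst y)"

lemma ptgt_lt: "valid p \<Longrightarrow> ptgt p < n" using valid_pend_lt[OF arrow_ends] .

lemma src_lt: "\<alpha> \<in> Q1 \<Longrightarrow> src \<alpha> < n" and tgt_lt: "\<alpha> \<in> Q1 \<Longrightarrow> tgt \<alpha> < n" using arrow_ends by auto

lemma valid_pconcat_iff: "valid (i, as @ bs) \<longleftrightarrow> valid (i, as) \<and> valid (ptgt (i, as), bs)"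
  using valid_append[OF arrow_ends] .

lemma sigma_Phat_path: "b \<in> \<sigma> \<Longrightarrow> Phat_path b \<and> plen (snd b) \<le> L"
  using skeleton unfolding is_skeleton_def Phat_path_def by (cases b) auto

lemma top_in_sigma: "r < t \<Longrightarrow> (r, (e r, [])) \<in> \<sigma>"
  using skeleton unfolding is_skeleton_def by auto

lemma card_sigma_layer: "l \<le> L \<Longrightarrow> i < n \<Longrightarrow> card {b\<in>\<sigma>. plen (snd b) = l \<and> ptgt (snd b) = i} = m l i"
proof -
  assume "l \<le> L" "i < n"
  then have "card {(r, p) \<in> \<sigma>. plen p = l \<and> pend tgt p = i} = m l i"
    using skeleton unfolding is_skeleton_def by blast
  moreover have "{(r, p) \<in> \<sigma>. plen p = l \<and> pend tgt p = i} = {b\<in>\<sigma>. plen (snd b) = l \<and> ptgt (snd b) = i}"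
    by auto
  ultimately show ?thesis by simp
qed

lemma finite_sigma: "finite \<sigma>"
proof -
  have "\<sigma> \<subseteq> {..<t} \<times> ({..<n} \<times> {as. set as \<subseteq> Q1 \<and> length as \<le> L})"
  proof
    fix b assume "b \<in> \<sigma>"
    then show "b \<in> {..<t} \<times> ({..<n} \<times> {as. set as \<subseteq> Q1 \<and> length as \<le> L})"
      using sigma_Phat_path[of b] unfolding Phat_path_def valid_path_def plen_def by (cases b) auto
  qed
  moreover have "finite ({..<t} \<times> ({..<n} \<times> {as. set as \<subseteq> Q1 \<and> length as \<le> L}))"
    using finite_lists_length_le[OF finite_arrows] by auto
  ultimately show ?thesis by (rule finite_subset)
qed

text \<open>The coordinates of \<open>K\<^bsup>d\<^sub>i\<^esup>\<close> are indexed by the skeleton paths ending in \<open>e\<^sub>i\<close>, enumerated by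
  \<open>sbasis i\<close> with inverse \<open>sindex\<close>.\<close>

definition sigma_at :: "nat \<Rightarrow> (nat \<times> 'a qpath) set" where
  "sigma_at i = {b\<in>\<sigma>. ptgt (snd b) = i}"

lemma card_sigma_at: "i < n \<Longrightarrow> card (sigma_at i) = d i"
proof -
  assume i: "i < n"
  have "sigma_at i = (\<Union>l\<in>{..L}. {b\<in>\<sigma>. plen (snd b) = l \<and> ptgt (snd b) = i})"
    using sigma_Phat_path by (auto simp: sigma_at_def)
  then have "card (sigma_at i) = (\<Sum>l\<le>L. card {b\<in>\<sigma>. plen (snd b) = l \<and> ptgt (snd b) = i})"
    by (simp, intro card_UN_disjoint) (auto intro: finite_subset[OF _ finite_sigma])
  also have "\<dots> = (\<Sum>l\<le>L. m l i)" using card_sigma_layer i by simp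
  finally show ?thesis using dim_vector i by simp
qed

definition sbasis :: "nat \<Rightarrow> nat \<Rightarrow> nat \<times> 'a qpath" where
  "sbasis i = (SOME h. bij_betw h {..<card (sigma_at i)} (sigma_at i))"

lemma sbasis_bij: "bij_betw (sbasis i) {..<card (sigma_at i)} (sigma_at i)"
proof -
  have "finite (sigma_at i)" using finite_sigma by (simp add: sigma_at_def)
  then obtain h where "bij_betw h {0..<card (sigma_at i)} (sigma_at i)" using ex_bij_betw_nat_finite by blast
  then have "\<exists>h. bij_betw h {..<card (sigma_at i)} (sigma_at i)" by (auto simp: lessThan_atLeast0)
  then show ?thesis unfolding sbasis_def by (rule someI_ex)
qed

definition sindex :: "nat \<times> 'a qpath \<Rightarrow> nat" where
  "sindex b = inv_into {..<card (sigma_at (ptgt (snd b)))} (sbasis (ptgt (snd b))) b"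

lemma sigma_ptgt_lt: "b \<in> \<sigma> \<Longrightarrow> ptgt (snd b) < n"
  using sigma_Phat_path[of b] ptgt_lt by (auto simp: Phat_path_def)

lemma sindex_lt: "b \<in> \<sigma> \<Longrightarrow> sindex b < d (ptgt (snd b))"
proof -
  assume b: "b \<in> \<sigma>"
  have "b \<in> sigma_at (ptgt (snd b))" using b by (simp add: sigma_at_def)
  then have "sindex b \<in> {..<card (sigma_at (ptgt (snd b)))}"
    unfolding sindex_def using sbasis_bij bij_betw_inv_into bij_betwE by metis
  then show ?thesis using card_sigma_at[OF sigma_ptgt_lt[OF b]] by simp
qed

lemma sbasis_sindex: "b \<in> \<sigma> \<Longrightarrow> sbasis (ptgt (snd b)) (sindex b) = b"
proof -
  assume b: "b \<in> \<sigma>"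
  have "b \<in> sigma_at (ptgt (snd b))" using b by (simp add: sigma_at_def)
  then show ?thesis unfolding sindex_def using sbasis_bij bij_betw_inv_into_right by metis
qed

lemma sbasis_in: "i < n \<Longrightarrow> a < d i \<Longrightarrow> sbasis i a \<in> \<sigma> \<and> ptgt (snd (sbasis i a)) = i"
proof -
  assume i: "i < n" "a < d i"
  then have "sbasis i a \<in> sigma_at i" using sbasis_bij card_sigma_at bij_betwE by fastforce
  then show ?thesis by (simp add: sigma_at_def)
qed

lemma sindex_sbasis: "i < n \<Longrightarrow> a < d i \<Longrightarrow> sindex (sbasis i a) = a"
proof -
  assume i: "i < n" "a < d i"
  have p: "ptgt (snd (sbasis i a)) = i" using sbasis_in[OF i] by simp
  have "a \<in> {..<card (sigma_at i)}" using i card_sigma_at by simp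
  then show ?thesis unfolding sindex_def p using sbasis_bij bij_betw_inv_into_left by metis
qed

lemma sindex_inj: "b \<in> \<sigma> \<Longrightarrow> b' \<in> \<sigma> \<Longrightarrow> ptgt (snd b) = ptgt (snd b') \<Longrightarrow> sindex b = sindex b' \<Longrightarrow> b = b'"
  by (metis sbasis_sindex)

definition top_index :: "nat \<Rightarrow> nat" where "top_index r = sindex (r, (e r, []))"

lemma top_index_lt: "r < t \<Longrightarrow> top_index r < d (e r)"
  using sindex_lt[OF top_in_sigma] by (simp add: top_index_def)

lemma Phat_iff: "u \<in> V \<longleftrightarrow> finite (supp u) \<and> (\<forall>y. u y \<noteq> 0 \<longrightarrow> Phat_path y)"
  unfolding Phat_def supp_def Phat_path_def by auto

lemma KQ_iff: "f \<in> KQ n Q1 src tgt \<longleftrightarrow> finite (supp f) \<and> (\<forall>q. f q \<noteq> 0 \<longrightarrow> valid q)"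
  unfolding KQ_def supp_def by auto

lemma Phat_nonzero_path: "u \<in> V \<Longrightarrow> u y \<noteq> 0 \<Longrightarrow> Phat_path y"
  using Phat_iff by blast

lemma Phat_finite_supp: "u \<in> V \<Longrightarrow> finite (supp u)"
  using Phat_iff by blast

lemma PhatI: "finite (supp u) \<Longrightarrow> (\<And>y. u y \<noteq> 0 \<Longrightarrow> Phat_path y) \<Longrightarrow> u \<in> V"
  using Phat_iff by blast

lemma KQ_valid: "f \<in> KQ n Q1 src tgt \<Longrightarrow> f q \<noteq> 0 \<Longrightarrow> valid q"
  using KQ_iff by blast

lemma KQ_finite_supp: "f \<in> KQ n Q1 src tgt \<Longrightarrow> finite (supp f)"
  using KQ_iff by blast

lemma lin_closed_Phat: "lin_closed V"
proof -
  have z: "(\<lambda>_. 0) \<in> V" by (rule PhatI) (auto simp: supp_def)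
  have a: "(\<lambda>y. u y + w y) \<in> V" if u: "u \<in> V" and w: "w \<in> V" for u w
  proof (rule PhatI)
    have "supp (\<lambda>y. u y + w y) \<subseteq> supp u \<union> supp w" by (auto simp: supp_def)
    then show "finite (supp (\<lambda>y. u y + w y))"
      using Phat_finite_supp[OF u] Phat_finite_supp[OF w] finite_subset by blast
    fix y assume "u y + w y \<noteq> 0"
    then have "u y \<noteq> 0 \<or> w y \<noteq> 0" by auto
    then show "Phat_path y" using Phat_nonzero_path[OF u] Phat_nonzero_path[OF w] by blast
  qed
  have s: "(\<lambda>y. c * u y) \<in> V" if u: "u \<in> V" for u c
  proof (rule PhatI)
    have "supp (\<lambda>y. c * u y) \<subseteq> supp u" by (auto simp: supp_def)
    then show "finite (supp (\<lambda>y. c * u y))" using Phat_finite_supp[OF u] finite_subset by blast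
    fix y assume "c * u y \<noteq> 0"
    then show "Phat_path y" using Phat_nonzero_path[OF u] by simp
  qed
  show ?thesis unfolding lin_closed_def using z a s by blast
qed

lemma Phat_expansion: "u \<in> V \<Longrightarrow> u = (\<lambda>z. \<Sum>y\<in>supp u. u y * path_vec y z)"
  by (rule path_vec_expansion) (auto simp: Phat_iff)

lemma KQ_expansion: "f \<in> KQ n Q1 src tgt \<Longrightarrow> f = (\<lambda>p. \<Sum>q\<in>supp f. f q * qvec q p)"
  by (rule qvec_expansion) (auto simp: KQ_iff)

lemma sum_path_vec_in_Phat:
  assumes "finite F" "\<forall>y\<in>F. Phat_path y"
  shows "(\<lambda>z. \<Sum>y\<in>F. c y * path_vec y z) \<in> V"
proof -
  have s: "supp (\<lambda>z. \<Sum>y\<in>F. c y * path_vec y z) \<subseteq> F"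
  proof
    fix z assume "z \<in> supp (\<lambda>z. \<Sum>y\<in>F. c y * path_vec y z)"
    then have "(\<Sum>y\<in>F. c y * path_vec y z) \<noteq> 0" by (simp add: supp_def)
    then obtain y where "y \<in> F" "c y * path_vec y z \<noteq> 0" by (meson sum.neutral)
    then show "z \<in> F" by (auto simp: path_vec_def split: if_splits)
  qed
  show ?thesis unfolding Phat_iff
    using s assms finite_subset[OF s] by (auto simp: supp_def)
qed

lemma path_vec_in_Phat: "Phat_path y \<Longrightarrow> path_vec y \<in> V"
  using sum_path_vec_in_Phat[of "{y}" "\<lambda>_. 1"] by simp

lemma Phat_path_pconcat:
  assumes "Phat_path y" "valid q" "fst q = ptgt (snd y)"
  shows "Phat_path (pconcat y q)"
  using assms valid_pconcat_iff[of "fst (snd y)" "snd (snd y)" "snd q"]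
  by (cases y; cases q) (auto simp: Phat_path_def pconcat_def)

lemma pconcat_simps[simp]: "fst (pconcat y q) = fst y" "fst (snd (pconcat y q)) = fst (snd y)"
  "plen (snd (pconcat y q)) = plen (snd y) + length (snd q)"
  by (auto simp: pconcat_def plen_def)

lemma ptgt_pconcat: "fst q = ptgt (snd y) \<Longrightarrow> ptgt (snd (pconcat y q)) = ptgt q"
  using pend_append[of tgt "fst (snd y)" "snd (snd y)" "snd q"]
  by (cases y; cases q) (auto simp: pconcat_def)

lemma pact_expansion:
  assumes f: "f \<in> KQ n Q1 src tgt" and u: "u \<in> V"
  shows "pact tgt f u = (\<lambda>z. \<Sum>q\<in>supp f. f q * (\<Sum>y\<in>supp u. u y * pact tgt (qvec q) (path_vec y) z))"
proof -
  have "pact tgt f u = pact tgt (\<lambda>p. \<Sum>q\<in>supp f. f q * qvec q p) u"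
    using KQ_expansion[OF f] by simp
  also have "\<dots> = (\<lambda>z. \<Sum>q\<in>supp f. f q * pact tgt (qvec q) u z)"
    by (rule pact_sum_left)
  also have "\<dots> = (\<lambda>z. \<Sum>q\<in>supp f. f q * (\<Sum>y\<in>supp u. u y * pact tgt (qvec q) (path_vec y) z))"
  proof -
    have "pact tgt (qvec q) u = (\<lambda>z. \<Sum>y\<in>supp u. u y * pact tgt (qvec q) (path_vec y) z)" for q
      by (subst Phat_expansion[OF u]) (rule pact_sum_right)
    then show ?thesis by simp
  qed
  finally show ?thesis .
qed

lemma pact_path_vec_in_Phat:
  assumes "Phat_path y" "valid q"
  shows "pact tgt (qvec q) (path_vec y) \<in> V"
proof (cases "fst q = ptgt (snd y)")
  case True
  then show ?thesis using path_vec_in_Phat[OF Phat_path_pconcat[OF assms True]] by (simp add: pact_qvec_path_vec)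
next
  case False
  then show ?thesis using lin_closed_zero[OF lin_closed_Phat] by (simp add: pact_qvec_path_vec)
qed

lemma pact_in_Phat:
  assumes f: "f \<in> KQ n Q1 src tgt" and u: "u \<in> V"
  shows "pact tgt f u \<in> V"
proof -
  have inner: "(\<lambda>z. \<Sum>y\<in>supp u. u y * pact tgt (qvec q) (path_vec y) z) \<in> V" if q: "q \<in> supp f" for q
  proof (rule lin_closed_sum[OF lin_closed_Phat Phat_finite_supp[OF u]], rule ballI)
    fix y assume "y \<in> supp u"
    then have "Phat_path y" using Phat_nonzero_path[OF u] by (simp add: supp_def)
    moreover have "valid q" using q KQ_valid[OF f] by (simp add: supp_def)
    ultimately show "pact tgt (qvec q) (path_vec y) \<in> V" by (rule pact_path_vec_in_Phat)
  qed
  have "(\<lambda>z. \<Sum>q\<in>supp f. f q * (\<Sum>y\<in>supp u. u y * pact tgt (qvec q) (path_vec y) z)) \<in> V"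
    by (rule lin_closed_sum[OF lin_closed_Phat KQ_finite_supp[OF f]]) (use inner in blast)
  then show ?thesis using pact_expansion[OF f u] by simp
qed

lemma sum_vertex_part: "u \<in> V \<Longrightarrow> u = (\<lambda>y. \<Sum>i<n. vertex_part tgt i u y)"
proof
  fix y assume u: "u \<in> V"
  show "u y = (\<Sum>i<n. vertex_part tgt i u y)"
  proof (cases "u y = 0")
    case True then show ?thesis by (simp add: vertex_part_def)
  next
    case False
    then have "Phat_path y" using Phat_nonzero_path[OF u] by simp
    then have "ptgt (snd y) < n" using ptgt_lt by (simp add: Phat_path_def)
    then show ?thesis by (simp add: vertex_part_def sum.delta'[of "{..<n}"] if_distrib cong: if_cong)
  qed
qed

lemma pact_vertex_idem: "u \<in> V \<Longrightarrow> pact tgt (qvec (i, [])) u = vertex_part tgt i u"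
proof -
  assume u: "u \<in> V"
  have "pact tgt (qvec (i, [])) u = (\<lambda>z. \<Sum>y\<in>supp u. u y * pact tgt (qvec (i, [])) (path_vec y) z)"
    by (subst Phat_expansion[OF u]) (rule pact_sum_right)
  also have "\<dots> = (\<lambda>z. \<Sum>y\<in>supp u. vertex_part tgt i u y * path_vec y z)"
    by (intro ext sum.cong refl) (auto simp: pact_qvec_path_vec vertex_part_def pconcat_def)
  also have "\<dots> = vertex_part tgt i u"
    by (rule path_vec_expansion[symmetric]) (use u in \<open>auto simp: Phat_iff supp_def vertex_part_def\<close>)
  finally show ?thesis .
qed

lemma vertex_part_in_Phat: "u \<in> V \<Longrightarrow> vertex_part tgt i u \<in> V"
  by (auto simp: Phat_iff vertex_part_def supp_def intro: finite_subset)

lemma qvec_in_KQ: "valid q \<Longrightarrow> qvec q \<in> KQ n Q1 src tgt"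
  by (auto simp: KQ_def qvec_def)

definition arrow_path :: "'a \<Rightarrow> 'a qpath" where "arrow_path \<alpha> = (src \<alpha>, [\<alpha>])"

lemma valid_arrow_path: "\<alpha> \<in> Q1 \<Longrightarrow> valid (arrow_path \<alpha>)"
  using valid_snoc[of n Q1 src tgt "src \<alpha>" "[]" \<alpha>] arrow_ends by (simp add: arrow_path_def)

lemma arrow_path_simps[simp]: "ptgt (arrow_path \<alpha>) = tgt \<alpha>" "fst (arrow_path \<alpha>) = src \<alpha>" "snd (arrow_path \<alpha>) = [\<alpha>]"
  using pend_simps(2)[of tgt "src \<alpha>" "[]" \<alpha>] by (simp_all add: arrow_path_def)

lemma eval_path_arrow: "b < d (src \<alpha>) \<Longrightarrow> ev x (arrow_path \<alpha>) a b = x \<alpha> a b"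
proof -
  assume b: "b < d (src \<alpha>)"
  have "ev x (arrow_path \<alpha>) a b = (\<Sum>l<d (src \<alpha>). x \<alpha> a l * (if l = b then 1 else 0))"
    using eval_path_snoc[of src d x "src \<alpha>" "[]" \<alpha>] by (simp add: arrow_path_def eval_path_nil)
  also have "\<dots> = (\<Sum>l<d (src \<alpha>). if l = b then x \<alpha> a b else 0)" by (rule sum.cong) auto
  also have "\<dots> = x \<alpha> a b" using b by simp
  finally show ?thesis .
qed

lemma Phat_path_induct[consumes 1, case_names top arrow]:
  assumes y: "Phat_path y"
    and top: "\<And>r. r < t \<Longrightarrow> P (r, (e r, []))"
    and arrow: "\<And>y \<alpha>. Phat_path y \<Longrightarrow> \<alpha> \<in> Q1 \<Longrightarrow> src \<alpha> = ptgt (snd y) \<Longrightarrow> P y \<Longrightarrow>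
                  P (pconcat y (arrow_path \<alpha>))"
  shows "P y"
proof -
  obtain r i as where yy: "y = (r, (i, as))" by (cases y) auto
  have "Phat_path (r, (i, as)) \<Longrightarrow> P (r, (i, as))"
  proof (induction as rule: rev_induct)
    case Nil
    then show ?case using top by (auto simp: Phat_path_def)
  next
    case (snoc \<alpha> as)
    have "Phat_path (r, (i, as))" "\<alpha> \<in> Q1" "src \<alpha> = ptgt (snd (r, (i, as)))"
      using snoc.prems by (auto simp: Phat_path_def valid_snoc)
    moreover have "pconcat (r, (i, as)) (arrow_path \<alpha>) = (r, (i, as @ [\<alpha>]))"
      by (simp add: pconcat_def arrow_path_def)
    ultimately show ?case using arrow[of "(r, (i, as))" \<alpha>] snoc.IH by metis
  qed
  then show ?thesis using y yy by simp
qed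

lemma RPhat_Phat: "u \<in> RP l \<Longrightarrow> u \<in> V" by (simp add: RPhat_def)

lemma lin_closed_RPhat: "lin_closed (RP l)"
proof -
  have "(\<lambda>_. 0) \<in> RP l" using lin_closed_zero[OF lin_closed_Phat] by (simp add: RPhat_def)
  moreover have "(\<lambda>y. u y + w y) \<in> RP l" if "u \<in> RP l" "w \<in> RP l" for u w
    using that lin_closed_add[OF lin_closed_Phat] by (auto simp: RPhat_def)
  moreover have "(\<lambda>y. c * u y) \<in> RP l" if "u \<in> RP l" for u c
    using that lin_closed_smult[OF lin_closed_Phat] by (auto simp: RPhat_def)
  ultimately show ?thesis unfolding lin_closed_def by blast
qed

lemma sum_sigma_in_Phat: "A \<subseteq> \<sigma> \<Longrightarrow> (\<lambda>z. \<Sum>b\<in>A. h b * path_vec b z) \<in> V"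
  by (rule sum_path_vec_in_Phat) (use finite_sigma sigma_Phat_path in \<open>auto intro: finite_subset\<close>)

lemma sum_sigma_in_RPhat:
  assumes A: "A \<subseteq> \<sigma>" "\<forall>b\<in>A. l \<le> plen (snd b)"
  shows "(\<lambda>z. \<Sum>b\<in>A. h b * pv b z) \<in> RP l"
  unfolding RPhat_def
proof (intro CollectI conjI allI impI)
  show "(\<lambda>z. \<Sum>b\<in>A. h b * pv b z) \<in> V" by (rule sum_sigma_in_Phat[OF A(1)])
  fix r :: nat and p :: "'a qpath" assume "plen p < l"
  then show "(\<Sum>b\<in>A. h b * pv b (r, p)) = 0"
    using A(2) by (intro sum.neutral) (auto simp: path_vec_def)
qed

lemma path_vec_RPhat: "Phat_path y \<Longrightarrow> pv y \<in> RP (plen (snd y))"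
  using path_vec_in_Phat by (auto simp: RPhat_def path_vec_def)

lemma path_vec_sigma_Phat: "pv ` \<sigma> \<subseteq> V" using path_vec_in_Phat sigma_Phat_path by auto

lemma path_vec_at_vertex:
  assumes C: "lin_closed C" and b: "b \<in> \<sigma>" "plen (snd b) = l" "ptgt (snd b) = i"
  shows "pv b \<in> at_vertex tgt i (rad_plus C l)"
proof -
  have "pv b \<in> RP l" using sum_sigma_in_RPhat[of "{b}" l "\<lambda>_. 1"] b by simp
  then have "pv b \<in> rad_plus C l" using set_plusI[OF _ lin_closed_zero[OF C], of "pv b"] by simp
  moreover have "\<forall>r p. pv b (r, p) \<noteq> 0 \<longrightarrow> pend tgt p = i" using b by (auto simp: path_vec_def)
  ultimately show ?thesis by (simp add: at_vertex_def)
qed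

lemma ideal_I: "is_ideal_KQ n Q1 src tgt I" using admissible_I by (simp add: admissible_def)

lemma I_KQ: "I \<subseteq> KQ n Q1 src tgt" using ideal_I by (simp add: is_ideal_KQ_def)

lemma RPhat_Loewy_subset_IPhat: "RP (Suc L) \<subseteq> IPhat n Q1 src tgt t e I"
proof
  fix w assume w: "w \<in> RP (Suc L)"
  have wV: "w \<in> V" using RPhat_Phat[OF w] .
  have "(\<lambda>q. w (r, q)) \<in> Rpow n Q1 src tgt (Suc L)" for r
  proof -
    have "{q. w (r, q) \<noteq> 0} \<subseteq> snd ` supp w" by (force simp: supp_def)
    then have "finite {q. w (r, q) \<noteq> 0}" using Phat_finite_supp[OF wV] finite_subset by blast
    moreover have "valid q" if "w (r, q) \<noteq> 0" for q using Phat_nonzero_path[OF wV that] by (simp add: Phat_path_def)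
    ultimately show ?thesis using w by (auto simp: Rpow_def KQ_def RPhat_def)
  qed
  then show "w \<in> IPhat n Q1 src tgt t e I" using Loewy_bound wV by (auto simp: IPhat_def)
qed

lemma pact_ideal_IPhat:
  assumes rho: "\<rho> \<in> I" and b: "b \<in> \<sigma>"
  shows "pact tgt \<rho> (pv b) \<in> IPhat n Q1 src tgt t e I"
proof -
  have gb: "Phat_path b" using sigma_Phat_path[OF b] by simp
  have rK: "\<rho> \<in> KQ n Q1 src tgt" using rho I_KQ by blast
  have "(\<lambda>q. pact tgt \<rho> (pv b) (r, q)) \<in> I" for r
  proof (cases "r = fst b")
    case True
    have "(\<lambda>q'. pv b (r, q')) = qvec (snd b)" using True by (cases b) (auto simp: path_vec_def qvec_def)
    then have "(\<lambda>q. pact tgt \<rho> (pv b) (r, q)) = pmult tgt \<rho> (qvec (snd b))" by (simp add: pact_def)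
    moreover have "qvec (snd b) \<in> KQ n Q1 src tgt" by (rule qvec_in_KQ) (use gb in \<open>simp add: Phat_path_def\<close>)
    ultimately show ?thesis using ideal_I rho unfolding is_ideal_KQ_def by auto
  next
    case False
    have "(\<lambda>q'. pv b (r, q')) = (\<lambda>_. 0)" using False by (cases b) (auto simp: path_vec_def)
    then have "(\<lambda>q. pact tgt \<rho> (pv b) (r, q)) = (\<lambda>_. 0)" by (simp add: pact_def pmult_zero)
    then show ?thesis using ideal_I by (simp add: is_ideal_KQ_def)
  qed
  moreover have "pact tgt \<rho> (pv b) \<in> V" using pact_in_Phat[OF rK path_vec_in_Phat[OF gb]] .
  ultimately show ?thesis by (simp add: IPhat_def)
qed

subsection \<open>The homomorphism from \<open>P\<close> onto a representation\<close>

text \<open>The image of the path \<open>p z\<^sub>r\<close> is \<open>x\<^sub>p\<close> applied to the basis vector of \<open>z\<^sub>r\<close>.\<close>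
definition proj_path :: "('a \<Rightarrow> nat \<Rightarrow> nat \<Rightarrow> 'k) \<Rightarrow> nat \<times> 'a qpath \<Rightarrow> nat \<Rightarrow> nat \<Rightarrow> 'k" where
  "proj_path x y = (\<lambda>i a. if i = ptgt (snd y) \<and> i < n \<and> a < d i then ev x (snd y) a (top_index (fst y)) else 0)"

definition proj :: "('a \<Rightarrow> nat \<Rightarrow> nat \<Rightarrow> 'k) \<Rightarrow> (nat \<times> 'a qpath \<Rightarrow> 'k) \<Rightarrow> nat \<Rightarrow> nat \<Rightarrow> 'k" where
  "proj x u = (\<lambda>i a. \<Sum>y\<in>supp u. u y * proj_path x y i a)"

lemma proj_eq_sum: "finite F \<Longrightarrow> supp u \<subseteq> F \<Longrightarrow> proj x u = (\<lambda>i a. \<Sum>y\<in>F. u y * proj_path x y i a)"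
  unfolding proj_def by (intro ext sum.mono_neutral_left) (auto simp: supp_def)

lemma proj_path_vec: "proj x (path_vec y) = proj_path x y"
  by (subst proj_eq_sum[of "{y}"]) (auto simp: supp_def path_vec_def)

lemma proj_sum:
  assumes F: "finite F" and g: "\<forall>w\<in>F. finite (supp (g w))"
  shows "proj x (\<lambda>z. \<Sum>w\<in>F. c w * g w z) = (\<lambda>i a. \<Sum>w\<in>F. c w * proj x (g w) i a)"
proof -
  define G where "G = (\<Union>w\<in>F. supp (g w))"
  have fG: "finite G" using F g by (simp add: G_def)
  have "supp (\<lambda>z. \<Sum>w\<in>F. c w * g w z) \<subseteq> G"
    by (auto simp: G_def supp_def intro: ccontr)
  then have "proj x (\<lambda>z. \<Sum>w\<in>F. c w * g w z) = (\<lambda>i a. \<Sum>y\<in>G. (\<Sum>w\<in>F. c w * g w y) * proj_path x y i a)"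
    by (rule proj_eq_sum[OF fG])
  also have "\<dots> = (\<lambda>i a. \<Sum>w\<in>F. c w * (\<Sum>y\<in>G. g w y * proj_path x y i a))"
    by (simp add: sum_distrib_right sum_distrib_left mult.assoc sum.swap[of _ G])
  also have "\<dots> = (\<lambda>i a. \<Sum>w\<in>F. c w * proj x (g w) i a)"
  proof -
    have "proj x (g w) = (\<lambda>i a. \<Sum>y\<in>G. g w y * proj_path x y i a)" if "w \<in> F" for w
      by (rule proj_eq_sum[OF fG]) (use that in \<open>auto simp: G_def\<close>)
    then show ?thesis by (intro ext sum.cong) auto
  qed
  finally show ?thesis .
qed

lemma proj_sum_path_vec:
  assumes "finite A"
  shows "proj x (\<lambda>z. \<Sum>b\<in>A. h b * path_vec b z) = (\<lambda>i a. \<Sum>b\<in>A. h b * proj_path x b i a)"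
  using proj_sum[OF assms, where g = path_vec and c = h and x = x] by (simp add: supp_path_vec proj_path_vec)

lemma proj_zero: "proj x (\<lambda>_. 0) = (\<lambda>_ _. 0)"
  by (simp add: proj_def supp_def)

lemma proj_add:
  assumes "finite (supp u)" "finite (supp w)"
  shows "proj x (\<lambda>y. u y + w y) = (\<lambda>i a. proj x u i a + proj x w i a)"
proof -
  let ?F = "supp u \<union> supp w"
  have f: "finite ?F" using assms by simp
  have "proj x (\<lambda>y. u y + w y) = (\<lambda>i a. \<Sum>y\<in>?F. (u y + w y) * proj_path x y i a)"
    by (rule proj_eq_sum[OF f]) (auto simp: supp_def)
  moreover have "proj x u = (\<lambda>i a. \<Sum>y\<in>?F. u y * proj_path x y i a)" by (rule proj_eq_sum[OF f]) auto
  moreover have "proj x w = (\<lambda>i a. \<Sum>y\<in>?F. w y * proj_path x y i a)" by (rule proj_eq_sum[OF f]) auto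
  ultimately show ?thesis by (simp add: distrib_right sum.distrib)
qed

lemma proj_smult:
  assumes "finite (supp u)"
  shows "proj x (\<lambda>y. c * u y) = (\<lambda>i a. c * proj x u i a)"
proof -
  have "proj x (\<lambda>y. c * u y) = (\<lambda>i a. \<Sum>y\<in>supp u. (c * u y) * proj_path x y i a)"
    by (rule proj_eq_sum[OF assms]) (auto simp: supp_def)
  then show ?thesis by (simp add: proj_def sum_distrib_left mult.assoc)
qed

lemma proj_diff:
  assumes "finite (supp u)" "finite (supp w)"
  shows "proj x (\<lambda>y. u y - w y) = (\<lambda>i a. proj x u i a - proj x w i a)"
proof -
  have fw: "finite (supp (\<lambda>y. (-1) * w y))" using assms(2) by (simp add: supp_def)
  have "(\<lambda>y. u y - w y) = (\<lambda>y. u y + (-1) * w y)" by simp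
  then show ?thesis using proj_add[OF assms(1) fw] proj_smult[OF assms(2), of x "-1"] by simp
qed

lemma proj_in_Mvec: "proj x u \<in> Mvec n d"
  unfolding Mvec_def proj_def proj_path_def
  by (auto intro: ccontr simp: if_distrib cong: if_cong)

lemma mact_eq_sum:
  assumes "finite G" "supp f \<subseteq> G"
  shows "act x f v = (\<lambda>j a. if j < n \<and> a < d j then
      (\<Sum>p\<in>G. if ptgt p = j then f p * (\<Sum>b<d (fst p). ev x p a b * v (fst p) b) else 0) else 0)"
proof (intro ext)
  fix j a
  have "{p. f p \<noteq> 0 \<and> ptgt p = j} = {p\<in>G. f p \<noteq> 0 \<and> ptgt p = j}" using assms(2) by (auto simp: supp_def)
  then have "(\<Sum>p\<in>{p. f p \<noteq> 0 \<and> ptgt p = j}. f p * (\<Sum>b<d (fst p). ev x p a b * v (fst p) b))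
      = (\<Sum>p\<in>G. if f p \<noteq> 0 \<and> ptgt p = j then f p * (\<Sum>b<d (fst p). ev x p a b * v (fst p) b) else 0)"
    using sum.inter_filter[OF assms(1)] by simp
  also have "\<dots> = (\<Sum>p\<in>G. if ptgt p = j then f p * (\<Sum>b<d (fst p). ev x p a b * v (fst p) b) else 0)"
    by (intro sum.cong) auto
  finally show "act x f v j a = (if j < n \<and> a < d j then
      (\<Sum>p\<in>G. if ptgt p = j then f p * (\<Sum>b<d (fst p). ev x p a b * v (fst p) b) else 0) else 0)"
    unfolding mact_def by simp
qed

lemma mact_qvec: "act x (qvec q) v = (\<lambda>j a. if j < n \<and> a < d j \<and> ptgt q = j then
      (\<Sum>b<d (fst q). ev x q a b * v (fst q) b) else 0)"
  by (subst mact_eq_sum[of "{q}"]) (auto simp: supp_def qvec_def intro!: ext)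

lemma mact_sum_left:
  assumes "finite (supp f)"
  shows "act x f v = (\<lambda>j a. \<Sum>q\<in>supp f. f q * act x (qvec q) v j a)"
  by (subst mact_eq_sum[OF assms subset_refl]) (auto simp: mact_qvec sum_distrib_left intro!: ext sum.cong)

lemma mact_sum_right:
  "act x f (\<lambda>i a. \<Sum>w\<in>F. c w * v w i a) = (\<lambda>j a. \<Sum>w\<in>F. c w * act x f (v w) j a)"
  unfolding mact_def
  by (auto simp: sum_distrib_left sum_distrib_right mult.left_commute intro!: ext
      sum.swap[of _ F] trans[OF sum.cong sum.swap[of _ F]])

lemma mact_zero: "act x f (\<lambda>_ _. 0) = (\<lambda>_ _. 0)"
  by (intro ext) (simp add: mact_def)

lemma proj_pact_qvec_path_vec:
  assumes x: "x \<in> RA" and y: "Phat_path y" and q: "valid q"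
  shows "proj x (pact tgt (qvec q) (path_vec y)) = act x (qvec q) (proj_path x y)"
proof -
  obtain r i as where yy: "y = (r, (i, as))" by (cases y) auto
  obtain j bs where qq: "q = (j, bs)" by (cases q) auto
  have r: "r < t" and i: "i = e r" using y by (auto simp: Phat_path_def yy)
  have jn: "j < n" using q by (simp add: qq valid_path_def)
  show ?thesis
  proof (cases "j = ptgt (i, as)")
    case True
    have pc: "ptgt (snd (pconcat y q)) = ptgt (j, bs)" using ptgt_pconcat[of q y] True by (simp add: yy qq)
    have rows: "\<forall>c\<ge>d (ptgt (i, as)). ev x (i, as) c (top_index r) = 0"
      using eval_path_rows_zero[OF x] top_index_lt[OF r] i by auto
    show ?thesis
    proof (intro ext)
      fix k a
      have "proj x (pact tgt (qvec q) (path_vec y)) k a = proj_path x (pconcat y q) k a"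
        using True by (simp add: pact_qvec_path_vec proj_path_vec yy qq)
      also have "\<dots> = (if k = ptgt (j, bs) \<and> k < n \<and> a < d k then ev x (i, as @ bs) a (top_index r) else 0)"
        using pc by (auto simp: proj_path_def pconcat_def yy qq)
      also have "\<dots> = (if k = ptgt (j, bs) \<and> k < n \<and> a < d k then
          (\<Sum>c<d j. ev x (j, bs) a c * ev x (i, as) c (top_index r)) else 0)"
        using eval_path_append[OF rows, of bs a j] True by auto
      also have "\<dots> = act x (qvec q) (proj_path x y) k a"
        unfolding mact_qvec qq fst_conv using True jn
        by (auto simp: proj_path_def yy intro!: sum.cong)
      finally show "proj x (pact tgt (qvec q) (path_vec y)) k a = act x (qvec q) (proj_path x y) k a" .
    qed
  next
    case False
    have "proj x (pact tgt (qvec q) (path_vec y)) = (\<lambda>_ _. 0)"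
      using False by (simp add: pact_qvec_path_vec yy qq proj_zero)
    moreover have "act x (qvec q) (proj_path x y) = (\<lambda>_ _. 0)"
      using False by (auto simp: mact_qvec proj_path_def yy qq intro!: ext)
    ultimately show ?thesis by simp
  qed
qed

lemma proj_pact:
  assumes x: "x \<in> RA" and f: "f \<in> KQ n Q1 src tgt" and u: "u \<in> V"
  shows "proj x (pact tgt f u) = act x f (proj x u)"
proof -
  have fu: "finite (supp u)" using Phat_finite_supp[OF u] .
  have ff: "finite (supp f)" using KQ_finite_supp[OF f] .
  have gy: "Phat_path y" if "y \<in> supp u" for y using Phat_nonzero_path[OF u] that by (simp add: supp_def)
  have vq: "valid q" if "q \<in> supp f" for q using KQ_valid[OF f] that by (simp add: supp_def)
  have fs1: "finite (supp (pact tgt (qvec q) (path_vec y) :: nat \<times> 'a qpath \<Rightarrow> 'k))" if "q \<in> supp f" "y \<in> supp u" for q y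
    using Phat_finite_supp[OF pact_path_vec_in_Phat[OF gy[OF that(2)] vq[OF that(1)]]] .
  have fs2: "finite (supp (\<lambda>z. \<Sum>y\<in>supp u. u y * (pact tgt (qvec q) (path_vec y) :: nat \<times> 'a qpath \<Rightarrow> 'k) z))" if "q \<in> supp f" for q
    using Phat_finite_supp[OF lin_closed_sum[OF lin_closed_Phat fu, of "\<lambda>y. pact tgt (qvec q) (path_vec y)" u]]
      pact_path_vec_in_Phat[OF gy vq[OF that]] by blast
  have "proj x (pact tgt f u) = proj x (\<lambda>z. \<Sum>q\<in>supp f. f q * (\<Sum>y\<in>supp u. u y * pact tgt (qvec q) (path_vec y) z))"
    using pact_expansion[OF f u] by simp
  also have "\<dots> = (\<lambda>i a. \<Sum>q\<in>supp f. f q * proj x (\<lambda>z. \<Sum>y\<in>supp u. u y * pact tgt (qvec q) (path_vec y) z) i a)"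
    by (rule proj_sum[OF ff]) (use fs2 in blast)
  also have "\<dots> = (\<lambda>i a. \<Sum>q\<in>supp f. f q * (\<Sum>y\<in>supp u. u y * act x (qvec q) (proj_path x y) i a))"
  proof -
    have "proj x (\<lambda>z. \<Sum>y\<in>supp u. u y * pact tgt (qvec q) (path_vec y) z) =
        (\<lambda>i a. \<Sum>y\<in>supp u. u y * act x (qvec q) (proj_path x y) i a)" if q: "q \<in> supp f" for q
      by (subst proj_sum[OF fu]) (use fs1[OF q] proj_pact_qvec_path_vec[OF x gy vq[OF q]] in auto)
    then show ?thesis by (intro ext sum.cong) auto
  qed
  also have "\<dots> = act x f (proj x u)"
  proof -
    have "act x f (proj x u) = (\<lambda>j a. \<Sum>q\<in>supp f. f q * act x (qvec q) (proj x u) j a)"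
      by (rule mact_sum_left[OF ff])
    moreover have "act x (qvec q) (proj x u) = (\<lambda>j a. \<Sum>y\<in>supp u. u y * act x (qvec q) (proj_path x y) j a)" for q
      unfolding proj_def by (rule mact_sum_right)
    ultimately show ?thesis by simp
  qed
  finally show ?thesis .
qed

lemma act_arrow_proj_path:
  assumes x: "x \<in> RA" and y: "Phat_path y" and \<alpha>: "\<alpha> \<in> Q1"
  shows "act x (qvec (arrow_path \<alpha>)) (proj_path x y) = (if src \<alpha> = ptgt (snd y) then proj_path x (pconcat y (arrow_path \<alpha>)) else (\<lambda>_ _. 0))"
  using proj_pact_qvec_path_vec[OF x y valid_arrow_path[OF \<alpha>]] by (auto simp: pact_qvec_path_vec proj_path_vec proj_zero)

lemma proj_path_poly: "(\<lambda>x. proj_path x y i a) \<in> polys_over rep_coords"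
proof (cases "i = ptgt (snd y) \<and> i < n \<and> a < d i")
  case True
  then have e: "(\<lambda>x. proj_path x y i a) = (\<lambda>x. ev x (snd y) a (top_index (fst y)))" by (auto simp: proj_path_def)
  show ?thesis unfolding e by (rule eval_path_poly)
next
  case False
  then have e: "(\<lambda>x. proj_path x y i a) = (\<lambda>_. 0)" by (auto simp: proj_path_def)
  show ?thesis unfolding e by (rule polys_over.const)
qed

lemma proj_poly: "(\<lambda>x. proj x u i a) \<in> polys_over rep_coords"
  unfolding proj_def by (rule polys_sum) (auto intro: polys_cmult proj_path_poly)

definition unit_vec :: "nat \<times> 'a qpath \<Rightarrow> nat \<Rightarrow> nat \<Rightarrow> 'k" where
  "unit_vec b = (\<lambda>i a. if i = ptgt (snd b) \<and> a = sindex b then 1 else 0)"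

lemma unit_at_sindex: "b \<in> \<sigma> \<Longrightarrow> b' \<in> \<sigma> \<Longrightarrow> unit_vec b (ptgt (snd b')) (sindex b') = (if b = b' then 1 else 0)"
  using sindex_inj by (auto simp: unit_vec_def)

lemma act_unit_vec_entry:
  assumes f: "finite (supp f)" and i: "i < n" "c < d i" and j: "j < n" "a < d j"
  shows "act x f (unit_vec (sbasis i c)) j a
    = (\<Sum>p\<in>{p. f p \<noteq> 0 \<and> fst p = i \<and> pend tgt p = j}. f p * ev x p a c)"
proof -
  let ?\<beta> = "sbasis i c"
  have \<beta>: "ptgt (snd ?\<beta>) = i" "sindex ?\<beta> = c" using sbasis_in[OF i] sindex_sbasis[OF i] by auto
  have fA: "finite {p. f p \<noteq> 0 \<and> pend tgt p = j}"
    using f by (auto simp: supp_def intro: finite_subset)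
  have inner: "(\<Sum>c'<d (fst p). ev x p a c' * unit_vec ?\<beta> (fst p) c') = (if fst p = i then ev x p a c else 0)" for p
  proof (cases "fst p = i")
    case True
    have "(\<Sum>c'<d (fst p). ev x p a c' * unit_vec ?\<beta> (fst p) c') = (\<Sum>c'<d (fst p). if c' = c then ev x p a c else 0)"
      using True \<beta> by (intro sum.cong) (auto simp: unit_vec_def)
    then show ?thesis using True i by simp
  qed (use \<beta> in \<open>simp add: unit_vec_def\<close>)
  have "act x f (unit_vec ?\<beta>) j a = (\<Sum>p\<in>{p. f p \<noteq> 0 \<and> pend tgt p = j}. f p * (if fst p = i then ev x p a c else 0))"
    using j by (simp add: mact_def inner)
  also have "\<dots> = (\<Sum>p\<in>{p. f p \<noteq> 0 \<and> pend tgt p = j}. if fst p = i then f p * ev x p a c else 0)"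
    by (rule sum.cong) auto
  also have "\<dots> = (\<Sum>p\<in>{p\<in>{p. f p \<noteq> 0 \<and> pend tgt p = j}. fst p = i}. f p * ev x p a c)"
    by (rule sum.inter_filter[OF fA, symmetric])
  also have "{p\<in>{p. f p \<noteq> 0 \<and> pend tgt p = j}. fst p = i} = {p. f p \<noteq> 0 \<and> fst p = i \<and> pend tgt p = j}"
    by auto
  finally show ?thesis .
qed

lemma unit_in_Mvec: "b \<in> \<sigma> \<Longrightarrow> unit_vec b \<in> Mvec n d"
  using sindex_lt sigma_ptgt_lt by (auto simp: Mvec_def unit_vec_def)

lemma Mvec_expansion:
  assumes v: "v \<in> Mvec n d"
  shows "v = (\<lambda>i a. \<Sum>b\<in>\<sigma>. v (ptgt (snd b)) (sindex b) * unit_vec b i a)"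
proof (intro ext)
  fix i a
  show "v i a = (\<Sum>b\<in>\<sigma>. v (ptgt (snd b)) (sindex b) * unit_vec b i a)"
  proof (cases "i < n \<and> a < d i")
    case True
    have "(\<Sum>b\<in>\<sigma>. v (ptgt (snd b)) (sindex b) * unit_vec b i a) = (\<Sum>b\<in>\<sigma>. if b = sbasis i a then v i a else 0)"
    proof (rule sum.cong[OF refl])
      fix b assume b: "b \<in> \<sigma>"
      have "(i = ptgt (snd b) \<and> a = sindex b) \<longleftrightarrow> b = sbasis i a"
        using sbasis_sindex[OF b] sbasis_in[of i a] sindex_sbasis[of i a] True by auto
      then show "v (ptgt (snd b)) (sindex b) * unit_vec b i a = (if b = sbasis i a then v i a else 0)"
        by (auto simp: unit_vec_def)
    qed
    also have "\<dots> = v i a" using sbasis_in True finite_sigma by simp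
    finally show ?thesis by simp
  next
    case False
    then have "v i a = 0" using v by (auto simp: Mvec_def)
    moreover have "unit_vec b i a = 0" if "b \<in> \<sigma>" for b
      using False sindex_lt[OF that] sigma_ptgt_lt[OF that] by (auto simp: unit_vec_def)
    ultimately show ?thesis by simp
  qed
qed

lemma Mvec_sum: "finite F \<Longrightarrow> \<forall>w\<in>F. v w \<in> Mvec n d \<Longrightarrow> (\<lambda>i a. \<Sum>w\<in>F. c w * v w i a) \<in> Mvec n d"
proof -
  assume F: "finite F" and h: "\<forall>w\<in>F. v w \<in> Mvec n d"
  have "(\<Sum>w\<in>F. c w * v w i a) = 0" if "\<not> (i < n \<and> a < d i)" for i a
    using h that by (intro sum.neutral) (auto simp: Mvec_def)
  then show ?thesis unfolding Mvec_def by blast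
qed

lemma proj_path_in_Mvec: "proj_path x y \<in> Mvec n d"
  using proj_in_Mvec[of x "path_vec y"] by (simp add: proj_path_vec)

lemma sum_unit_at_sindex:
  assumes A: "A \<subseteq> \<sigma>" and b0: "b0 \<in> \<sigma>"
  shows "(\<Sum>b\<in>A. h b * unit_vec b (ptgt (snd b0)) (sindex b0)) = (if b0 \<in> A then h b0 else 0)"
proof -
  have fA: "finite A" using A finite_sigma finite_subset by blast
  have "(\<Sum>b\<in>A. h b * unit_vec b (ptgt (snd b0)) (sindex b0)) = (\<Sum>b\<in>A. if b = b0 then h b0 else 0)"
    using A b0 by (intro sum.cong) (auto simp: unit_at_sindex)
  then show ?thesis using fA by simp
qed

subsection \<open>The closed set \<open>Zsig\<close>\<close>

definition Mlayer :: "nat \<Rightarrow> (nat \<Rightarrow> nat \<Rightarrow> 'k) set" where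
  "Mlayer l = {v \<in> Mvec n d. \<forall>b\<in>\<sigma>. plen (snd b) < l \<longrightarrow> v (ptgt (snd b)) (sindex b) = 0}"

lemma Mlayer_sum:
  assumes "finite F" "\<forall>w\<in>F. v w \<in> Mlayer l"
  shows "(\<lambda>i a. \<Sum>w\<in>F. c w * v w i a) \<in> Mlayer l"
  using assms Mvec_sum[OF assms(1), of v c] by (auto simp: Mlayer_def)

lemma Mlayer_antimono: "l \<le> l' \<Longrightarrow> Mlayer l' \<subseteq> Mlayer l"
  by (auto simp: Mlayer_def)

lemma Mlayer_zero: "(\<lambda>_ _. 0) \<in> Mlayer l"
  by (simp add: Mlayer_def Mvec_def)

lemma unit_in_Mlayer: "b \<in> \<sigma> \<Longrightarrow> unit_vec b \<in> Mlayer (plen (snd b))"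
  using unit_in_Mvec unit_at_sindex by (auto simp: Mlayer_def)

lemma proj_other_vertex:
  assumes "\<forall>y. u y \<noteq> 0 \<longrightarrow> ptgt (snd y) = i" "k \<noteq> i"
  shows "proj x u k a = 0"
  unfolding proj_def using assms by (intro sum.neutral) (auto simp: proj_path_def supp_def)

lemma Mlayer_vertex_split:
  assumes x: "x \<in> Zsig" and P: "P \<in> Mlayer l" and Pv: "\<And>k a. k \<noteq> i \<Longrightarrow> P k a = 0"
  shows "P = (\<lambda>k a. (\<Sum>b\<in>{b\<in>\<sigma>. plen (snd b) = l \<and> ptgt (snd b) = i}. P (ptgt (snd b)) (sindex b) * unit_vec b k a)
                + (\<Sum>b\<in>{b\<in>\<sigma>. Suc l \<le> plen (snd b) \<and> ptgt (snd b) = i}. P (ptgt (snd b)) (sindex b) * unit_vec b k a))"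
proof -
  let ?A = "{b\<in>\<sigma>. plen (snd b) = l \<and> ptgt (snd b) = i}" and ?B = "{b\<in>\<sigma>. Suc l \<le> plen (snd b) \<and> ptgt (snd b) = i}"
  have fA: "finite ?A" "finite ?B" using finite_sigma by auto
  have "P = (\<lambda>k a. \<Sum>b\<in>\<sigma>. P (ptgt (snd b)) (sindex b) * unit_vec b k a)"
    using Mvec_expansion P by (simp add: Mlayer_def)
  also have "\<dots> = (\<lambda>k a. \<Sum>b\<in>?A \<union> ?B. P (ptgt (snd b)) (sindex b) * unit_vec b k a)"
  proof (intro ext)
    fix k a
    show "(\<Sum>b\<in>\<sigma>. P (ptgt (snd b)) (sindex b) * unit_vec b k a) = (\<Sum>b\<in>?A \<union> ?B. P (ptgt (snd b)) (sindex b) * unit_vec b k a)"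
      by (rule sum.mono_neutral_right[OF finite_sigma]) (use P Pv in \<open>auto simp: Mlayer_def\<close>)
  qed
  also have "\<dots> = (\<lambda>k a. (\<Sum>b\<in>?A. P (ptgt (snd b)) (sindex b) * unit_vec b k a) + (\<Sum>b\<in>?B. P (ptgt (snd b)) (sindex b) * unit_vec b k a))"
    by (intro ext sum.union_disjoint fA) auto
  finally show ?thesis .
qed

definition skeleton_units :: "('a \<Rightarrow> nat \<Rightarrow> nat \<Rightarrow> 'k) \<Rightarrow> bool" where
  "skeleton_units x \<longleftrightarrow> (\<forall>b\<in>\<sigma>. proj_path x b = unit_vec b)"

definition skeleton_gaps :: "('a \<Rightarrow> nat \<Rightarrow> nat \<Rightarrow> 'k) \<Rightarrow> bool" where
  "skeleton_gaps x \<longleftrightarrow> (\<forall>b\<in>\<sigma>. \<forall>\<alpha>\<in>Q1. src \<alpha> = ptgt (snd b) \<longrightarrow> pconcat b (arrow_path \<alpha>) \<notin> \<sigma> \<longrightarrow>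
      (\<forall>b'\<in>\<sigma>. ptgt (snd b') = tgt \<alpha> \<longrightarrow> plen (snd b') \<le> plen (snd b) \<longrightarrow>
          proj_path x (pconcat b (arrow_path \<alpha>)) (tgt \<alpha>) (sindex b') = 0))"

definition Zsig :: "('a \<Rightarrow> nat \<Rightarrow> nat \<Rightarrow> 'k) set" where
  "Zsig = {x \<in> Rep n Q1 src tgt I d. skeleton_units x \<and> skeleton_gaps x}"

lemma Zsig_rep_ambient: "x \<in> Zsig \<Longrightarrow> x \<in> RA" by (simp add: Zsig_def Rep_def)

lemma skeleton_unitsD: "x \<in> Zsig \<Longrightarrow> b \<in> \<sigma> \<Longrightarrow> proj_path x b = unit_vec b"
  by (simp add: Zsig_def skeleton_units_def)

text \<open>This is where the gap equations of \<open>Zsig\<close> enter.\<close>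
lemma act_arrow_unit_vec_Mlayer:
  assumes x: "x \<in> Zsig" and b: "b \<in> \<sigma>" and \<alpha>: "\<alpha> \<in> Q1"
  shows "act x (qvec (arrow_path \<alpha>)) (unit_vec b) \<in> Mlayer (Suc (plen (snd b)))"
proof -
  let ?b\<alpha> = "pconcat b (arrow_path \<alpha>)"
  have units: "proj_path x b = unit_vec b" if "b \<in> \<sigma>" for b
    using x that by (simp add: Zsig_def skeleton_units_def)
  have act: "act x (qvec (arrow_path \<alpha>)) (unit_vec b)
      = (if src \<alpha> = ptgt (snd b) then proj_path x ?b\<alpha> else (\<lambda>_ _. 0))"
    using act_arrow_proj_path[OF Zsig_rep_ambient[OF x] conjunct1[OF sigma_Phat_path[OF b]] \<alpha>] units[OF b] by simp
  consider "src \<alpha> \<noteq> ptgt (snd b)" | "src \<alpha> = ptgt (snd b)" "?b\<alpha> \<in> \<sigma>"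
    | "src \<alpha> = ptgt (snd b)" "?b\<alpha> \<notin> \<sigma>" by blast
  then show ?thesis
  proof cases
    case 1
    then show ?thesis using act Mlayer_zero by simp
  next
    case 2
    then show ?thesis using act units[of ?b\<alpha>] unit_in_Mlayer[of ?b\<alpha>] by simp
  next
    case 3
    have tgt: "ptgt (snd ?b\<alpha>) = tgt \<alpha>" using ptgt_pconcat[of "arrow_path \<alpha>" b] 3 by simp
    have "proj_path x ?b\<alpha> (ptgt (snd b')) (sindex b') = 0"
      if b': "b' \<in> \<sigma>" "plen (snd b') < Suc (plen (snd b))" for b'
    proof (cases "ptgt (snd b') = tgt \<alpha>")
      case True
      then show ?thesis using x b \<alpha> 3 b' unfolding Zsig_def skeleton_gaps_def by auto
    next
      case False
      then show ?thesis using tgt by (simp add: proj_path_def)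
    qed
    then show ?thesis using act 3 proj_path_in_Mvec by (simp add: Mlayer_def)
  qed
qed

lemma Mlayer_expansion:
  assumes v: "v \<in> Mlayer l"
  shows "v = (\<lambda>i a. \<Sum>b\<in>{b\<in>\<sigma>. l \<le> plen (snd b)}. v (ptgt (snd b)) (sindex b) * unit_vec b i a)"
proof -
  have "v = (\<lambda>i a. \<Sum>b\<in>\<sigma>. v (ptgt (snd b)) (sindex b) * unit_vec b i a)"
    using Mvec_expansion v by (simp add: Mlayer_def)
  also have "\<dots> = (\<lambda>i a. \<Sum>b\<in>{b\<in>\<sigma>. l \<le> plen (snd b)}. v (ptgt (snd b)) (sindex b) * unit_vec b i a)"
    using v by (intro ext sum.mono_neutral_right) (auto simp: Mlayer_def finite_sigma)
  finally show ?thesis .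
qed

lemma act_arrow_Mlayer:
  assumes x: "x \<in> Zsig" and v: "v \<in> Mlayer l" and \<alpha>: "\<alpha> \<in> Q1"
  shows "act x (qvec (arrow_path \<alpha>)) v \<in> Mlayer (Suc l)"
proof -
  let ?F = "{b\<in>\<sigma>. l \<le> plen (snd b)}"
  have finF: "finite ?F" using finite_sigma by simp
  have "act x (qvec (arrow_path \<alpha>)) v = (\<lambda>j a. \<Sum>b\<in>?F. v (ptgt (snd b)) (sindex b) *
      act x (qvec (arrow_path \<alpha>)) (unit_vec b) j a)"
    by (subst Mlayer_expansion[OF v]) (rule mact_sum_right)
  also have "\<dots> \<in> Mlayer (Suc l)"
  proof (rule Mlayer_sum[OF finF], rule ballI)
    fix b assume "b \<in> ?F"
    then show "act x (qvec (arrow_path \<alpha>)) (unit_vec b) \<in> Mlayer (Suc l)"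
      using act_arrow_unit_vec_Mlayer[OF x _ \<alpha>, of b] Mlayer_antimono[of "Suc l"] by auto
  qed
  finally show ?thesis .
qed

lemma proj_path_in_Mlayer:
  assumes x: "x \<in> Zsig"
  shows "Phat_path y \<Longrightarrow> proj_path x y \<in> Mlayer (plen (snd y))"
proof (induction y rule: Phat_path_induct)
  case (top r)
  then have "(r, (e r, [])) \<in> \<sigma>" by (rule top_in_sigma)
  then show ?case using x unit_in_Mlayer[of "(r, (e r, []))"] by (auto simp: Zsig_def skeleton_units_def)
next
  case (arrow y \<alpha>)
  then show ?case
    using act_arrow_proj_path[OF Zsig_rep_ambient[OF x] arrow(1,2)] act_arrow_Mlayer[OF x arrow(4,2)] by simp
qed

lemma proj_RPhat_Mlayer:
  assumes x: "x \<in> Zsig" and u: "u \<in> RP l"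
  shows "proj x u \<in> Mlayer l"
proof -
  have uV: "u \<in> V" and ul: "\<forall>r p. plen p < l \<longrightarrow> u (r, p) = 0" using u by (auto simp: RPhat_def)
  have "(\<lambda>i a. \<Sum>y\<in>supp u. u y * proj_path x y i a) \<in> Mlayer l"
  proof (rule Mlayer_sum[OF Phat_finite_supp[OF uV]], rule ballI)
    fix y assume y: "y \<in> supp u"
    then have gy: "Phat_path y" using Phat_nonzero_path[OF uV] by (simp add: supp_def)
    have "l \<le> plen (snd y)" using y ul by (cases y) (auto simp: supp_def not_less[symmetric])
    then show "proj_path x y \<in> Mlayer l" using proj_path_in_Mlayer[OF x gy] Mlayer_antimono by blast
  qed
  then show ?thesis by (simp add: proj_def)
qed

lemma proj_sum_sigma:
  assumes x: "x \<in> Zsig" and A: "A \<subseteq> \<sigma>"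
  shows "proj x (\<lambda>z. \<Sum>b\<in>A. h b * path_vec b z) = (\<lambda>i a. \<Sum>b\<in>A. h b * unit_vec b i a)"
proof -
  have fA: "finite A" using A finite_sigma finite_subset by blast
  show ?thesis using proj_sum_path_vec[OF fA, of x h] skeleton_unitsD[OF x] A by (auto intro!: ext sum.cong)
qed

definition relation_eqns :: "(('a \<Rightarrow> nat \<Rightarrow> nat \<Rightarrow> 'k) \<Rightarrow> 'k) set" where
  "relation_eqns = {(\<lambda>x. \<Sum>p\<in>{p. \<rho> p \<noteq> 0 \<and> fst p = i \<and> pend tgt p = j}. \<rho> p * ev x p a b) | \<rho> i j a b.
      \<rho> \<in> I \<and> i < n \<and> j < n \<and> a < d j \<and> b < d i}"

definition skeleton_eqns :: "(('a \<Rightarrow> nat \<Rightarrow> nat \<Rightarrow> 'k) \<Rightarrow> 'k) set" where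
  "skeleton_eqns = {(\<lambda>x. proj_path x b i a - unit_vec b i a) | b i a. b \<in> \<sigma>} \<union>
     {(\<lambda>x. proj_path x (pconcat b (arrow_path \<alpha>)) (tgt \<alpha>) (sindex b')) | b \<alpha> b'.
        b \<in> \<sigma> \<and> \<alpha> \<in> Q1 \<and> src \<alpha> = ptgt (snd b) \<and> pconcat b (arrow_path \<alpha>) \<notin> \<sigma> \<and> b' \<in> \<sigma> \<and>
        ptgt (snd b') = tgt \<alpha> \<and> plen (snd b') \<le> plen (snd b)}"

lemma Rep_eq_zeros: "Rep n Q1 src tgt I d = {x \<in> RA. \<forall>g\<in>relation_eqns. g x = 0}"
proof (intro set_eqI iffI)
  fix x assume "x \<in> Rep n Q1 src tgt I d"
  then show "x \<in> {x \<in> RA. \<forall>g\<in>relation_eqns. g x = 0}"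
    unfolding Rep_def relation_eqns_def by auto
next
  fix x assume x: "x \<in> {x \<in> RA. \<forall>g\<in>relation_eqns. g x = 0}"
  show "x \<in> Rep n Q1 src tgt I d"
    unfolding Rep_def
  proof (intro CollectI conjI ballI allI impI)
    show "x \<in> RA" using x by blast
    fix \<rho> i j a b assume "\<rho> \<in> I" "i < n" "j < n" "a < d j" "b < d i"
    then have "(\<lambda>x. \<Sum>p\<in>{p. \<rho> p \<noteq> 0 \<and> fst p = i \<and> pend tgt p = j}. \<rho> p * ev x p a b) \<in> relation_eqns"
      unfolding relation_eqns_def by blast
    then show "(\<Sum>p\<in>{p. \<rho> p \<noteq> 0 \<and> fst p = i \<and> pend tgt p = j}. \<rho> p * ev x p a b) = 0"
      using x by fastforce
  qed
qed

lemma skeleton_eqns_zero_iff: "(\<forall>g\<in>skeleton_eqns. g x = 0) \<longleftrightarrow> skeleton_units x \<and> skeleton_gaps x"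
proof
  assume z: "\<forall>g\<in>skeleton_eqns. g x = 0"
  have "skeleton_units x" unfolding skeleton_units_def
  proof (intro ballI ext)
    fix b i a assume "b \<in> \<sigma>"
    then have "(\<lambda>x. proj_path x b i a - unit_vec b i a) \<in> skeleton_eqns"
      unfolding skeleton_eqns_def by blast
    then show "proj_path x b i a = unit_vec b i a" using z by fastforce
  qed
  moreover have "skeleton_gaps x" unfolding skeleton_gaps_def
  proof (intro ballI impI)
    fix b \<alpha> b' assume "b \<in> \<sigma>" "\<alpha> \<in> Q1" "src \<alpha> = ptgt (snd b)" "pconcat b (arrow_path \<alpha>) \<notin> \<sigma>"
      "b' \<in> \<sigma>" "ptgt (snd b') = tgt \<alpha>" "plen (snd b') \<le> plen (snd b)"
    then have "(\<lambda>x. proj_path x (pconcat b (arrow_path \<alpha>)) (tgt \<alpha>) (sindex b')) \<in> skeleton_eqns"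
      unfolding skeleton_eqns_def by blast
    then show "proj_path x (pconcat b (arrow_path \<alpha>)) (tgt \<alpha>) (sindex b') = 0" using z by fastforce
  qed
  ultimately show "skeleton_units x \<and> skeleton_gaps x" ..
next
  assume "skeleton_units x \<and> skeleton_gaps x"
  then show "\<forall>g\<in>skeleton_eqns. g x = 0"
    unfolding skeleton_eqns_def skeleton_units_def skeleton_gaps_def by auto
qed

lemma eqns_polys: "relation_eqns \<union> skeleton_eqns \<subseteq> polys_over rep_coords"
  unfolding relation_eqns_def skeleton_eqns_def
  by (auto intro!: polys_sum polys_cmult eval_path_poly polys_diff[OF proj_path_poly polys_over.const]
      proj_path_poly)

lemma Zsig_closed: "zariski_closed_rep Q1 src tgt d Zsig"
proof -
  have "Zsig = {x \<in> RA. \<forall>g\<in>relation_eqns \<union> skeleton_eqns. g x = 0}"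
    unfolding Zsig_def Rep_eq_zeros using skeleton_eqns_zero_iff by blast
  then show ?thesis unfolding zariski_closed_rep_def using eqns_polys by blast
qed

subsection \<open>From \<open>Zsig\<close> to \<open>Grass(\<sigma>)\<close>\<close>

definition Cker :: "('a \<Rightarrow> nat \<Rightarrow> nat \<Rightarrow> 'k) \<Rightarrow> (nat \<times> 'a qpath \<Rightarrow> 'k) set" where
  "Cker x = {u \<in> V. proj x u = (\<lambda>_ _. 0)}"

lemma Cker_subspace: "is_subspace V (Cker x)"
proof -
  have "(\<lambda>_. 0) \<in> Cker x" using lin_closed_zero[OF lin_closed_Phat] by (simp add: Cker_def proj_zero)
  moreover have "(\<lambda>y. u y + w y) \<in> Cker x" if "u \<in> Cker x" "w \<in> Cker x" for u w
    using that lin_closed_add[OF lin_closed_Phat] proj_add[OF Phat_finite_supp Phat_finite_supp] by (auto simp: Cker_def)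
  moreover have "(\<lambda>y. c * u y) \<in> Cker x" if "u \<in> Cker x" for u c
    using that lin_closed_smult[OF lin_closed_Phat] proj_smult[OF Phat_finite_supp] by (auto simp: Cker_def)
  ultimately show ?thesis unfolding is_subspace_def Cker_def by blast
qed

lemma Cker_lin_closed: "lin_closed (Cker x)"
  using is_subspace_lin_closed[OF Cker_subspace] .

lemma Cker_submodule: "x \<in> RA \<Longrightarrow> is_submodule n Q1 src tgt t e (Cker x)"
  unfolding is_submodule_def
  using Cker_subspace pact_in_Phat proj_pact mact_zero by (auto simp: Cker_def)

lemma proj_eq_sum_tops:
  assumes uV: "u \<in> V" and ia: "i < n" "a < d i"
  shows "proj x u i a = (\<Sum>r<t. \<Sum>p\<in>{p. u (r, p) \<noteq> 0 \<and> fst p = e r \<and> pend tgt p = i}.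
                          u (r, p) * ev x p a (top_index r))"
proof -
  define B where "B r = {q. u (r, q) \<noteq> 0}" for r
  have S: "supp u = Sigma {..<t} B"
    using Phat_nonzero_path[OF uV] by (auto simp: supp_def B_def Phat_path_def)
  have fB: "finite (B r)" for r
  proof -
    have "B r \<subseteq> snd ` supp u" by (force simp: B_def supp_def)
    then show ?thesis using Phat_finite_supp[OF uV] finite_subset by blast
  qed
  have "proj x u i a = (\<Sum>r<t. \<Sum>q\<in>B r. u (r, q) * proj_path x (r, q) i a)"
    unfolding proj_def S using sum.Sigma[of "{..<t}" B "\<lambda>r q. u (r, q) * proj_path x (r, q) i a"] fB by simp
  also have "\<dots> = (\<Sum>r<t. \<Sum>q\<in>{q\<in>B r. ptgt q = i}. u (r, q) * ev x q a (top_index r))"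
  proof (rule sum.cong[OF refl])
    fix r
    have "(\<Sum>q\<in>B r. u (r, q) * proj_path x (r, q) i a)
        = (\<Sum>q\<in>B r. if ptgt q = i then u (r, q) * ev x q a (top_index r) else 0)"
      using ia by (intro sum.cong) (auto simp: proj_path_def)
    also have "\<dots> = (\<Sum>q\<in>{q\<in>B r. ptgt q = i}. u (r, q) * ev x q a (top_index r))"
      by (rule sum.inter_filter[OF fB, symmetric])
    finally show "(\<Sum>q\<in>B r. u (r, q) * proj_path x (r, q) i a)
        = (\<Sum>q\<in>{q\<in>B r. ptgt q = i}. u (r, q) * ev x q a (top_index r))" .
  qed
  also have "\<dots> = (\<Sum>r<t. \<Sum>p\<in>{p. u (r, p) \<noteq> 0 \<and> fst p = e r \<and> pend tgt p = i}.
                          u (r, p) * ev x p a (top_index r))"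
  proof (rule sum.cong[OF refl])
    fix r assume "r \<in> {..<t}"
    then have "{q\<in>B r. ptgt q = i} = {p. u (r, p) \<noteq> 0 \<and> fst p = e r \<and> pend tgt p = i}"
      using Phat_nonzero_path[OF uV] by (auto simp: B_def Phat_path_def)
    then show "(\<Sum>q\<in>{q\<in>B r. ptgt q = i}. u (r, q) * ev x q a (top_index r))
        = (\<Sum>p\<in>{p. u (r, p) \<noteq> 0 \<and> fst p = e r \<and> pend tgt p = i}. u (r, p) * ev x p a (top_index r))"
      by simp
  qed
  finally show ?thesis .
qed

lemma IPhat_subset_Cker:
  assumes x: "x \<in> Zsig"
  shows "IPhat n Q1 src tgt t e I \<subseteq> Cker x"
proof
  fix u assume u: "u \<in> IPhat n Q1 src tgt t e I"
  have uV: "u \<in> V" and rows: "\<forall>r. (\<lambda>q. u (r, q)) \<in> I" using u by (auto simp: IPhat_def)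
  have rel: "\<forall>\<rho>\<in>I. \<forall>i<n. \<forall>j<n. \<forall>a<d j. \<forall>b<d i.
        (\<Sum>p\<in>{p. \<rho> p \<noteq> 0 \<and> fst p = i \<and> pend tgt p = j}. \<rho> p * ev x p a b) = 0"
    using x by (simp add: Zsig_def Rep_def)
  have "proj x u i a = 0" for i a
  proof (cases "i < n \<and> a < d i")
    case False
    then show ?thesis unfolding proj_def by (intro sum.neutral) (auto simp: proj_path_def)
  next
    case True
    have "(\<Sum>p\<in>{p. u (r, p) \<noteq> 0 \<and> fst p = e r \<and> pend tgt p = i}. u (r, p) * ev x p a (top_index r)) = 0"
      if "r < t" for r
      using rel rows top_vertices True top_index_lt[of r] that by auto
    then show ?thesis using proj_eq_sum_tops[OF uV] True by simp
  qed
  then show "u \<in> Cker x" using uV by (auto simp: Cker_def)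
qed

lemma Cker_indep:
  assumes x: "x \<in> Zsig"
  shows "indep_mod (Cker x) (path_vec ` \<sigma>)"
  unfolding indep_mod_def
proof (intro conjI allI impI ballI)
  show "finite (path_vec ` \<sigma>)" using finite_sigma by simp
  fix c and w :: "nat \<times> 'a qpath \<Rightarrow> 'k" assume c: "lincomb c (path_vec ` \<sigma>) \<in> Cker x" and w: "w \<in> path_vec ` \<sigma>"
  then obtain b0 where b0: "b0 \<in> \<sigma>" "w = path_vec b0" by auto
  have "proj x (\<lambda>z. \<Sum>b\<in>\<sigma>. c (path_vec b) * path_vec b z) = (\<lambda>_ _. 0)"
    using c by (simp add: Cker_def lincomb_path_vec)
  then have "(\<lambda>i a. \<Sum>b\<in>\<sigma>. c (path_vec b) * unit_vec b i a) = (\<lambda>_ _. 0)"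
    using proj_sum_sigma[OF x subset_refl] by simp
  then have "(\<Sum>b\<in>\<sigma>. c (path_vec b) * unit_vec b (ptgt (snd b0)) (sindex b0)) = 0" by metis
  then show "c w = 0" using sum_unit_at_sindex[OF subset_refl b0(1)] b0 by simp
qed

lemma Phat_expansion_mod_Cker:
  assumes x: "x \<in> Zsig" and u: "u \<in> V"
  shows "(\<lambda>y. u y - (\<Sum>b\<in>\<sigma>. proj x u (ptgt (snd b)) (sindex b) * path_vec b y)) \<in> Cker x"
proof -
  let ?w = "\<lambda>y. \<Sum>b\<in>\<sigma>. proj x u (ptgt (snd b)) (sindex b) * path_vec b y"
  have wV: "?w \<in> V" by (rule sum_sigma_in_Phat) simp
  have "proj x (\<lambda>y. u y - ?w y) = (\<lambda>i a. proj x u i a - proj x ?w i a)"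
    by (rule proj_diff[OF Phat_finite_supp[OF u] Phat_finite_supp[OF wV]])
  also have "\<dots> = (\<lambda>_ _. 0)"
    using proj_sum_sigma[OF x subset_refl] Mvec_expansion[OF proj_in_Mvec, of x u] by (auto intro!: ext)
  finally show ?thesis using lin_closed_diff[OF lin_closed_Phat u wV] by (simp add: Cker_def)
qed

lemma Cker_spans:
  assumes x: "x \<in> Zsig"
  shows "spans_mod (Cker x) V (path_vec ` \<sigma>)"
  unfolding spans_mod_def
proof
  fix u assume u: "u \<in> V"
  let ?h = "\<lambda>b. proj x u (ptgt (snd b)) (sindex b)"
  have "lincomb (\<lambda>w. ?h (inv_into \<sigma> path_vec w)) ((path_vec :: _ \<Rightarrow> _ \<Rightarrow> 'k) ` \<sigma>) = (\<lambda>z. \<Sum>b\<in>\<sigma>. ?h b * path_vec b z)"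
    by (rule lincomb_path_vec_inv)
  then show "\<exists>c. (\<lambda>y. u y - lincomb c (path_vec ` \<sigma>) y) \<in> Cker x"
    using Phat_expansion_mod_Cker[OF x u] by metis
qed

lemma rad_plus_Cker_proj:
  assumes x: "x \<in> Zsig" and u0: "u0 \<in> rad_plus (Cker x) l"
  shows "u0 \<in> V" and "proj x u0 \<in> Mlayer l"
proof -
  obtain u w where u: "u \<in> RP l" and w: "w \<in> Cker x" and e: "u0 = (\<lambda>y. u y + w y)"
    using u0 by (rule set_plusE)
  have wV: "w \<in> V" using w by (simp add: Cker_def)
  show "u0 \<in> V" using e lin_closed_add[OF lin_closed_Phat RPhat_Phat[OF u] wV] by simp
  have "proj x u0 = proj x u"
    using e proj_add[OF Phat_finite_supp[OF RPhat_Phat[OF u]] Phat_finite_supp[OF wV], of x] w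
    by (simp add: Cker_def)
  then show "proj x u0 \<in> Mlayer l" using proj_RPhat_Mlayer[OF x u] by simp
qed

lemma Cker_layer_indep:
  assumes x: "x \<in> Zsig"
  shows "indep_mod (at_vertex tgt i (rad_plus (Cker x) (Suc l)))
           (pv ` {b\<in>\<sigma>. plen (snd b) = l \<and> ptgt (snd b) = i})"
  unfolding indep_mod_def
proof (intro conjI allI impI ballI)
  let ?A = "{b\<in>\<sigma>. plen (snd b) = l \<and> ptgt (snd b) = i}"
  show "finite (pv ` ?A)" using finite_sigma by simp
  fix c and v :: "nat \<times> 'a qpath \<Rightarrow> 'k"
  assume c: "lincomb c (pv ` ?A) \<in> at_vertex tgt i (rad_plus (Cker x) (Suc l))" and v: "v \<in> pv ` ?A"
  then obtain b0 where b0: "b0 \<in> ?A" "v = pv b0" by auto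
  have "lincomb c (pv ` ?A) \<in> rad_plus (Cker x) (Suc l)" using c by (simp add: at_vertex_def)
  then have "proj x (lincomb c (pv ` ?A)) \<in> Mlayer (Suc l)" by (rule rad_plus_Cker_proj[OF x])
  moreover have "proj x (lincomb c (pv ` ?A)) = (\<lambda>k a. \<Sum>b\<in>?A. c (pv b) * unit_vec b k a)"
    unfolding lincomb_path_vec by (rule proj_sum_sigma[OF x]) auto
  ultimately have "(\<Sum>b\<in>?A. c (pv b) * unit_vec b (ptgt (snd b0)) (sindex b0)) = 0"
    using b0 by (auto simp: Mlayer_def)
  then show "c v = 0" using sum_unit_at_sindex[of ?A b0] b0 by auto
qed

text \<open>The coordinates that remain belong to longer skeleton paths.\<close>
lemma Cker_layer_step:
  assumes x: "x \<in> Zsig" and u0V: "u0 \<in> V" and PM: "proj x u0 \<in> Mlayer l"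
    and Pv: "\<And>k a. k \<noteq> i \<Longrightarrow> proj x u0 k a = 0"
  shows "(\<lambda>y. u0 y - (\<Sum>b\<in>{b\<in>\<sigma>. plen (snd b) = l \<and> ptgt (snd b) = i}.
            proj x u0 (ptgt (snd b)) (sindex b) * pv b y)) \<in> rad_plus (Cker x) (Suc l)"
proof -
  let ?A = "{b\<in>\<sigma>. plen (snd b) = l \<and> ptgt (snd b) = i}"
  let ?H = "{b\<in>\<sigma>. Suc l \<le> plen (snd b) \<and> ptgt (snd b) = i}"
  define h where "h b = proj x u0 (ptgt (snd b)) (sindex b)" for b
  define S0 where "S0 = (\<lambda>z. \<Sum>b\<in>?A. h b * pv b z)"
  define R where "R = (\<lambda>z. \<Sum>b\<in>?H. h b * pv b z)"
  define k' where "k' = (\<lambda>y. u0 y - S0 y - R y)"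
  have S0V: "S0 \<in> V" unfolding S0_def by (rule sum_sigma_in_Phat) auto
  have RR: "R \<in> RP (Suc l)" unfolding R_def by (rule sum_sigma_in_RPhat) auto
  have RV: "R \<in> V" using RPhat_Phat[OF RR] .
  have u0S0: "(\<lambda>y. u0 y - S0 y) \<in> V" by (rule lin_closed_diff[OF lin_closed_Phat u0V S0V])
  have k'V: "k' \<in> V" unfolding k'_def by (rule lin_closed_diff[OF lin_closed_Phat u0S0 RV])
  have "proj x k' = (\<lambda>k a. proj x u0 k a - proj x S0 k a - proj x R k a)"
    unfolding k'_def proj_diff[OF Phat_finite_supp[OF u0S0] Phat_finite_supp[OF RV]]
      proj_diff[OF Phat_finite_supp[OF u0V] Phat_finite_supp[OF S0V]] ..
  also have "\<dots> = (\<lambda>_ _. 0)"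
  proof -
    have "proj x S0 = (\<lambda>k a. \<Sum>b\<in>?A. h b * unit_vec b k a)"
      unfolding S0_def by (rule proj_sum_sigma[OF x]) auto
    moreover have "proj x R = (\<lambda>k a. \<Sum>b\<in>?H. h b * unit_vec b k a)"
      unfolding R_def by (rule proj_sum_sigma[OF x]) auto
    moreover have "proj x u0 = (\<lambda>k a. (\<Sum>b\<in>?A. h b * unit_vec b k a) + (\<Sum>b\<in>?H. h b * unit_vec b k a))"
      unfolding h_def by (rule Mlayer_vertex_split[OF x PM Pv])
    ultimately show ?thesis by (auto intro!: ext)
  qed
  finally have k'C: "k' \<in> Cker x" using k'V by (simp add: Cker_def)
  show ?thesis by (rule set_plusI[OF RR k'C]) (simp add: k'_def S0_def h_def)
qed

lemma Cker_layer_spans: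
  assumes x: "x \<in> Zsig"
  shows "spans_mod (at_vertex tgt i (rad_plus (Cker x) (Suc l))) (at_vertex tgt i (rad_plus (Cker x) l))
           (pv ` {b\<in>\<sigma>. plen (snd b) = l \<and> ptgt (snd b) = i})"
  unfolding spans_mod_def
proof
  let ?A = "{b\<in>\<sigma>. plen (snd b) = l \<and> ptgt (snd b) = i}"
  fix u0 assume u0: "u0 \<in> at_vertex tgt i (rad_plus (Cker x) l)"
  then have u0N: "u0 \<in> rad_plus (Cker x) l" and u0i: "\<forall>r p. u0 (r, p) \<noteq> 0 \<longrightarrow> pend tgt p = i"
    by (auto simp: at_vertex_def)
  define h where "h b = proj x u0 (ptgt (snd b)) (sindex b)" for b
  define S0 where "S0 = (\<lambda>z. \<Sum>b\<in>?A. h b * pv b z)"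
  have "(\<lambda>y. u0 y - S0 y) \<in> rad_plus (Cker x) (Suc l)"
    unfolding S0_def h_def
    by (rule Cker_layer_step[OF x rad_plus_Cker_proj[OF x u0N]], rule proj_other_vertex) (use u0i in auto)
  moreover have "\<forall>r p. u0 (r, p) - S0 (r, p) \<noteq> 0 \<longrightarrow> pend tgt p = i"
  proof (intro allI impI)
    fix r p assume "u0 (r, p) - S0 (r, p) \<noteq> 0"
    then consider "u0 (r, p) \<noteq> 0" | "S0 (r, p) \<noteq> 0" by fastforce
    then show "pend tgt p = i"
    proof cases
      case 2
      then obtain b where "b \<in> ?A" "h b * pv b (r, p) \<noteq> 0" unfolding S0_def by (meson sum.neutral)
      then show ?thesis by (auto simp: path_vec_def split: if_splits)
    qed (use u0i in blast)
  qed
  ultimately have "(\<lambda>y. u0 y - lincomb (\<lambda>v. h (inv_into ?A pv v)) (pv ` ?A) y)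
      \<in> at_vertex tgt i (rad_plus (Cker x) (Suc l))"
    unfolding lincomb_path_vec_inv S0_def[symmetric] by (simp add: at_vertex_def)
  then show "\<exists>c. (\<lambda>y. u0 y - lincomb c (pv ` ?A) y) \<in> at_vertex tgt i (rad_plus (Cker x) (Suc l))"
    by blast
qed

lemma Cker_layer:
  assumes x: "x \<in> Zsig" and l: "l \<le> L" and i: "i < n"
  shows "quot_dim (at_vertex tgt i (rad_plus (Cker x) l)) (at_vertex tgt i (rad_plus (Cker x) (Suc l))) (m l i)"
proof -
  let ?A = "{b\<in>\<sigma>. plen (snd b) = l \<and> ptgt (snd b) = i}"
  have "pv ` ?A \<subseteq> at_vertex tgt i (rad_plus (Cker x) l)"
    using path_vec_at_vertex[OF Cker_lin_closed] by auto
  moreover have "card (pv ` ?A) = m l i"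
    using card_image[OF inj_on_subset[OF path_vec_inj, of ?A]] card_sigma_layer[OF l i] by simp
  ultimately show ?thesis unfolding quot_dim_def
    by (intro exI[of _ "pv ` ?A"] conjI Cker_layer_indep[OF x] Cker_layer_spans[OF x])
      (use finite_sigma in auto)
qed

lemma Cker_in_Grass:
  assumes x: "x \<in> Zsig"
  shows "Cker x \<in> Grass n Q1 src tgt I t e L m \<sigma>"
  unfolding Grass_def radical_layering_is_def
  using Cker_submodule[OF Zsig_rep_ambient[OF x]] IPhat_subset_Cker[OF x] Cker_layer[OF x] Cker_indep[OF x] Cker_spans[OF x]
  by blast

lemma Cker_quot_iso_rep:
  assumes x: "x \<in> Zsig"
  shows "quot_iso_rep n Q1 src tgt t e d (Cker x) x"
  unfolding quot_iso_rep_def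
proof (intro exI[of _ "proj x"] conjI ballI allI)
  show "\<And>u w. u \<in> V \<Longrightarrow> w \<in> V \<Longrightarrow> proj x (\<lambda>y. u y + w y) = (\<lambda>i a. proj x u i a + proj x w i a)"
    using proj_add Phat_finite_supp by blast
  show "\<And>u c. u \<in> V \<Longrightarrow> proj x (\<lambda>y. c * u y) = (\<lambda>i a. c * proj x u i a)"
    using proj_smult Phat_finite_supp by blast
  show "proj x ` V = Mvec n d"
  proof
    show "proj x ` V \<subseteq> Mvec n d" using proj_in_Mvec by blast
    show "Mvec n d \<subseteq> proj x ` V"
    proof
      fix v :: "nat \<Rightarrow> nat \<Rightarrow> 'k" assume v: "v \<in> Mvec n d"
      let ?w = "\<lambda>z. \<Sum>b\<in>\<sigma>. v (ptgt (snd b)) (sindex b) * pv b z"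
      have "proj x ?w = v" using proj_sum_sigma[OF x subset_refl] Mvec_expansion[OF v] by simp
      moreover have "?w \<in> V" by (rule sum_sigma_in_Phat) simp
      ultimately show "v \<in> proj x ` V" by force
    qed
  qed
  show "\<And>u. u \<in> V \<Longrightarrow> (proj x u = (\<lambda>_ _. 0)) = (u \<in> Cker x)"
    by (simp add: Cker_def)
  show "\<And>f u. f \<in> KQ n Q1 src tgt \<Longrightarrow> u \<in> V \<Longrightarrow> proj x (pact tgt f u) = act x f (proj x u)"
    using proj_pact[OF Zsig_rep_ambient[OF x]] by blast
qed

subsection \<open>Coordinates on \<open>Grass(\<sigma>)\<close>\<close>

definition scoord :: "(nat \<times> 'a qpath \<Rightarrow> 'k) set \<Rightarrow> (nat \<times> 'a qpath \<Rightarrow> 'k) \<Rightarrow> nat \<times> 'a qpath \<Rightarrow> 'k" where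
  "scoord C v b = chart_coord (pv ` \<sigma>) v (pv b) C"

lemma GrassD:
  assumes "C \<in> Gr"
  shows "is_submodule n Q1 src tgt t e C" "IPhat n Q1 src tgt t e I \<subseteq> C"
    "radical_layering_is n Q1 src tgt t e L m C" "indep_mod C (pv ` \<sigma>)" "spans_mod C V (pv ` \<sigma>)"
  using assms by (auto simp: Grass_def)

lemma Grass_lin_closed: "C \<in> Gr \<Longrightarrow> lin_closed C"
proof -
  assume C: "C \<in> Gr"
  have "is_subspace V C" using GrassD(1)[OF C] by (simp add: is_submodule_def)
  then show ?thesis by (rule is_subspace_lin_closed)
qed

lemma path_vec_inv: "b \<in> A \<Longrightarrow> inv_into A pv (pv b) = b"
  by (rule inv_into_f_f[OF inj_on_subset[OF path_vec_inj subset_UNIV]])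

lemma Grass_subset_Phat: "C \<in> Gr \<Longrightarrow> C \<subseteq> V"
  using GrassD(1) by (auto simp: is_submodule_def is_subspace_def)

lemma Grass_pact: "C \<in> Gr \<Longrightarrow> f \<in> KQ n Q1 src tgt \<Longrightarrow> u \<in> C \<Longrightarrow> pact tgt f u \<in> C"
  using GrassD(1) by (auto simp: is_submodule_def)

lemma scoord_spec:
  assumes C: "C \<in> Gr" and v: "v \<in> V"
  shows "(\<lambda>y. v y - (\<Sum>b\<in>\<sigma>. scoord C v b * pv b y)) \<in> C"
  using chart_coord_spec[OF Grass_lin_closed[OF C] GrassD(4)[OF C] GrassD(5)[OF C] v]
  unfolding lincomb_path_vec scoord_def .

lemma scoord_eqI:
  assumes C: "C \<in> Gr" and h: "(\<lambda>y. v y - (\<Sum>b\<in>\<sigma>. h b * pv b y)) \<in> C" and b0: "b0 \<in> \<sigma>"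
  shows "scoord C v b0 = h b0"
proof -
  have "(\<lambda>y. v y - lincomb (\<lambda>w. h (inv_into \<sigma> pv w)) (pv ` \<sigma>) y) \<in> C"
    using h by (simp add: lincomb_path_vec_inv)
  from chart_coord_eqI[OF Grass_lin_closed[OF C] GrassD(4)[OF C] this] b0
  show ?thesis using path_vec_inv[OF b0] by (simp add: scoord_def)
qed

lemma scoord_zero: "C \<in> Gr \<Longrightarrow> u \<in> C \<Longrightarrow> b0 \<in> \<sigma> \<Longrightarrow> scoord C u b0 = 0"
  using scoord_eqI[of C u "\<lambda>_. 0" b0] by simp

lemma scoord_zero_imp_in:
  assumes C: "C \<in> Gr" and u: "u \<in> V" and z: "\<forall>b\<in>\<sigma>. scoord C u b = 0"
  shows "u \<in> C"
  using scoord_spec[OF C u] z by simp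

lemma scoord_path_vec: "C \<in> Gr \<Longrightarrow> b \<in> \<sigma> \<Longrightarrow> b0 \<in> \<sigma> \<Longrightarrow> scoord C (pv b) b0 = (if b0 = b then 1 else 0)"
proof -
  assume C: "C \<in> Gr" and b: "b \<in> \<sigma>" and b0: "b0 \<in> \<sigma>"
  have "(\<Sum>b'\<in>\<sigma>. (if b' = b then 1 else 0) * pv b' y) = (\<Sum>b'\<in>\<sigma>. if b' = b then pv b y else 0)" for y
    by (rule sum.cong) auto
  then have "(\<lambda>y. pv b y - (\<Sum>b'\<in>\<sigma>. (if b' = b then 1 else 0) * pv b' y)) = (\<lambda>_. 0)"
    using b finite_sigma by simp
  then have "(\<lambda>y. pv b y - (\<Sum>b'\<in>\<sigma>. (if b' = b then 1 else 0) * pv b' y)) \<in> C"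
    using lin_closed_zero[OF Grass_lin_closed[OF C]] by simp
  from scoord_eqI[OF C this b0] show ?thesis .
qed

lemma scoord_sum:
  assumes C: "C \<in> Gr" and F: "finite F" and g: "\<forall>w\<in>F. g w \<in> V" and b0: "b0 \<in> \<sigma>"
  shows "scoord C (\<lambda>z. \<Sum>w\<in>F. a w * g w z) b0 = (\<Sum>w\<in>F. a w * scoord C (g w) b0)"
proof -
  have "(\<lambda>y. \<Sum>w\<in>F. a w * (g w y - (\<Sum>b\<in>\<sigma>. scoord C (g w) b * pv b y))) \<in> C"
    by (rule lin_closed_sum[OF Grass_lin_closed[OF C] F]) (use scoord_spec[OF C] g in blast)
  moreover have "(\<lambda>y. \<Sum>w\<in>F. a w * (g w y - (\<Sum>b\<in>\<sigma>. scoord C (g w) b * pv b y)))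
      = (\<lambda>y. (\<Sum>w\<in>F. a w * g w y) - (\<Sum>b\<in>\<sigma>. (\<Sum>w\<in>F. a w * scoord C (g w) b) * pv b y))"
  proof
    fix y
    have "(\<Sum>w\<in>F. a w * (\<Sum>b\<in>\<sigma>. scoord C (g w) b * pv b y)) = (\<Sum>b\<in>\<sigma>. (\<Sum>w\<in>F. a w * scoord C (g w) b) * pv b y)"
      unfolding sum_distrib_left sum_distrib_right mult.assoc by (rule sum.swap)
    then show "(\<Sum>w\<in>F. a w * (g w y - (\<Sum>b\<in>\<sigma>. scoord C (g w) b * pv b y)))
      = (\<Sum>w\<in>F. a w * g w y) - (\<Sum>b\<in>\<sigma>. (\<Sum>w\<in>F. a w * scoord C (g w) b) * pv b y)"
      by (simp add: right_diff_distrib sum_subtractf)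
  qed
  ultimately show ?thesis using scoord_eqI[OF C _ b0] by simp
qed

lemma scoord_coeff_zero:
  assumes C: "C \<in> Gr" and h: "(\<lambda>y. \<Sum>b\<in>\<sigma>. g b * pv b y) \<in> C" and b0: "b0 \<in> \<sigma>"
  shows "g b0 = 0"
proof -
  have "(\<lambda>y. (\<lambda>_. 0) y - (\<Sum>b\<in>\<sigma>. (- g b) * pv b y)) \<in> C" using h by (simp add: sum_negf)
  from scoord_eqI[OF C this b0] scoord_zero[OF C lin_closed_zero[OF Grass_lin_closed[OF C]] b0] show ?thesis by simp
qed

lemma scoord_other_vertex:
  assumes C: "C \<in> Gr" and u: "u \<in> V" and i: "i < n" and ui: "\<forall>y. u y \<noteq> 0 \<longrightarrow> ptgt (snd y) = i"
    and b0: "b0 \<in> \<sigma>" "ptgt (snd b0) \<noteq> i"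
  shows "scoord C u b0 = 0"
proof -
  let ?h = "\<lambda>b. if ptgt (snd b) = i then scoord C u b else 0"
  let ?w = "\<lambda>y. u y - (\<Sum>b\<in>\<sigma>. scoord C u b * pv b y)"
  have wC: "?w \<in> C" by (rule scoord_spec[OF C u])
  have wV: "?w \<in> V" using wC Grass_subset_Phat[OF C] by blast
  have "pact tgt (qvec (i, [])) ?w \<in> C" by (rule Grass_pact[OF C qvec_in_KQ wC]) (simp add: i)
  then have "vertex_part tgt i ?w \<in> C" using pact_vertex_idem[OF wV] by simp
  moreover have "vertex_part tgt i ?w = (\<lambda>y. u y - (\<Sum>b\<in>\<sigma>. ?h b * pv b y))"
  proof
    fix y
    show "vertex_part tgt i ?w y = u y - (\<Sum>b\<in>\<sigma>. ?h b * pv b y)"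
    proof (cases "ptgt (snd y) = i")
      case True
      then show ?thesis by (auto simp: vertex_part_def path_vec_def intro!: sum.cong)
    next
      case False
      then have "u y = 0" using ui by blast
      moreover have "(\<Sum>b\<in>\<sigma>. ?h b * pv b y) = 0" using False by (intro sum.neutral) (auto simp: path_vec_def)
      ultimately show ?thesis using False by (simp add: vertex_part_def)
    qed
  qed
  ultimately show ?thesis using scoord_eqI[OF C _ b0(1), of u ?h] b0 by simp
qed

lemma rad_plus_Phat: "C \<in> Gr \<Longrightarrow> u \<in> rad_plus C l \<Longrightarrow> u \<in> V"
  by (erule set_plusE[of u]) (use Grass_subset_Phat RPhat_Phat lin_closed_add[OF lin_closed_Phat] in blast)

definition low_coords_vanish :: "(nat \<times> 'a qpath \<Rightarrow> 'k) set \<Rightarrow> nat \<Rightarrow> bool" where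
  "low_coords_vanish C l \<longleftrightarrow> (\<forall>u\<in>rad_plus C l. \<exists>h. (\<forall>b\<in>\<sigma>. plen (snd b) < l \<longrightarrow> h b = 0) \<and>
      (\<lambda>y. u y - (\<Sum>b\<in>\<sigma>. h b * pv b y)) \<in> C)"

lemma lincomb_path_vec_subset:
  assumes "A \<subseteq> \<sigma>"
  shows "lincomb c (pv ` A) = (\<lambda>y. \<Sum>b\<in>\<sigma>. (if b \<in> A then c (pv b) else 0) * pv b y)"
  unfolding lincomb_path_vec
  by (intro ext sum.mono_neutral_cong_left finite_sigma assms) auto

lemma layer_indep_mod:
  assumes C: "C \<in> Gr" and IH: "low_coords_vanish C (Suc l)"
  shows "indep_mod (at_vertex tgt i (rad_plus C (Suc l))) (pv ` {b\<in>\<sigma>. plen (snd b) = l \<and> ptgt (snd b) = i})"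
  unfolding indep_mod_def
proof (intro conjI allI impI ballI)
  let ?A = "{b\<in>\<sigma>. plen (snd b) = l \<and> ptgt (snd b) = i}"
  show "finite (pv ` ?A)" using finite_sigma by simp
  fix c and v :: "nat \<times> 'a qpath \<Rightarrow> 'k"
  assume c: "lincomb c (pv ` ?A) \<in> at_vertex tgt i (rad_plus C (Suc l))" and v: "v \<in> pv ` ?A"
  then obtain b0 where b0: "b0 \<in> ?A" "v = pv b0" by auto
  have "lincomb c (pv ` ?A) \<in> rad_plus C (Suc l)" by (rule subsetD[OF at_vertex_subset c])
  from IH[unfolded low_coords_vanish_def, rule_format, OF this] obtain h'
    where h': "\<forall>b\<in>\<sigma>. plen (snd b) < Suc l \<longrightarrow> h' b = 0"
      "(\<lambda>y. lincomb c (pv ` ?A) y - (\<Sum>b\<in>\<sigma>. h' b * pv b y)) \<in> C"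
    by blast
  let ?g = "\<lambda>b. if b \<in> ?A then c (pv b) else 0"
  have ls: "lincomb c (pv ` ?A) = (\<lambda>y. \<Sum>b\<in>\<sigma>. ?g b * pv b y)" by (rule lincomb_path_vec_subset) auto
  have eq: "(\<lambda>y. (\<Sum>b\<in>\<sigma>. ?g b * pv b y) - (\<Sum>b\<in>\<sigma>. h' b * pv b y)) = (\<lambda>y. \<Sum>b\<in>\<sigma>. (?g b - h' b) * pv b y)"
    by (simp only: left_diff_distrib sum_subtractf)
  have "(\<lambda>y. \<Sum>b\<in>\<sigma>. (?g b - h' b) * pv b y) \<in> C"
    using h'(2) unfolding ls eq .
  then have "?g b0 - h' b0 = 0" by (rule scoord_coeff_zero[OF C]) (use b0 in simp)
  then show "c v = 0" using h' b0 by auto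
qed

text \<open>The skeleton paths of length \<open>l\<close> ending in \<open>e\<^sub>i\<close> are independent modulo \<open>J\<^bsup>l+1\<^esup>P + C\<close>, and
  there are exactly \<open>m l i\<close> of them, the dimension of the layer; so they span it.\<close>
lemma low_coords_vanish_vertex:
  assumes C: "C \<in> Gr" and l: "l \<le> L" and i: "i < n" and IH: "low_coords_vanish C (Suc l)"
    and r: "r \<in> at_vertex tgt i (rad_plus C l)"
  shows "\<exists>H. (\<forall>b\<in>\<sigma>. plen (snd b) < l \<longrightarrow> H b = 0) \<and> (\<lambda>y. r y - (\<Sum>b\<in>\<sigma>. H b * pv b y)) \<in> C"
proof -
  let ?A = "{b\<in>\<sigma>. plen (snd b) = l \<and> ptgt (snd b) = i}"
  let ?S = "pv ` ?A"
  let ?U = "at_vertex tgt i (rad_plus C l)" and ?W = "at_vertex tgt i (rad_plus C (Suc l))"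
  have sC: "lin_closed C" using Grass_lin_closed[OF C] .
  have sW: "lin_closed ?W" by (intro lin_closed_at_vertex lin_closed_set_plus lin_closed_RPhat sC)
  have "quot_dim ?U ?W (m l i)" using GrassD(3)[OF C] l i by (simp add: radical_layering_is_def)
  then obtain B' where B': "card B' = m l i" "indep_mod ?W B'" "spans_mod ?W ?U B'"
    by (auto simp: quot_dim_def)
  have SU: "?S \<subseteq> ?U" using path_vec_at_vertex[OF sC] by auto
  have cardS: "card ?S = card B'"
    using card_image[OF inj_on_subset[OF path_vec_inj, of ?A]] card_sigma_layer[OF l i] B'(1) by simp
  have "spans_mod ?W ?U ?S"
    using indep_mod_card_spans_mod[OF sW B'(2,3) SU layer_indep_mod[OF C IH] cardS] .
  from this[unfolded spans_mod_def, rule_format, OF r] obtain c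
    where "(\<lambda>y. r y - lincomb c ?S y) \<in> ?W" by blast
  then have "(\<lambda>y. r y - lincomb c ?S y) \<in> rad_plus C (Suc l)" by (rule subsetD[OF at_vertex_subset])
  from IH[unfolded low_coords_vanish_def, rule_format, OF this] obtain h'
    where h': "\<forall>b\<in>\<sigma>. plen (snd b) < Suc l \<longrightarrow> h' b = 0"
      "(\<lambda>y. (r y - lincomb c ?S y) - (\<Sum>b\<in>\<sigma>. h' b * pv b y)) \<in> C"
    by blast
  let ?H = "\<lambda>b. (if b \<in> ?A then c (pv b) else 0) + h' b"
  have ls: "lincomb c ?S = (\<lambda>y. \<Sum>b\<in>\<sigma>. (if b \<in> ?A then c (pv b) else 0) * pv b y)"
    by (rule lincomb_path_vec_subset) auto
  have eq: "(\<lambda>y. (r y - (\<Sum>b\<in>\<sigma>. (if b \<in> ?A then c (pv b) else 0) * pv b y)) - (\<Sum>b\<in>\<sigma>. h' b * pv b y))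
     = (\<lambda>y. r y - (\<Sum>b\<in>\<sigma>. ?H b * pv b y))"
    by (simp only: distrib_right sum.distrib diff_diff_add)
  have "(\<lambda>y. r y - (\<Sum>b\<in>\<sigma>. ?H b * pv b y)) \<in> C" using h'(2) unfolding ls eq .
  moreover have "\<forall>b\<in>\<sigma>. plen (snd b) < l \<longrightarrow> ?H b = 0" using h'(1) by auto
  ultimately show ?thesis by (intro exI[of _ ?H] conjI)
qed

lemma low_coords_vanish_Loewy: "C \<in> Gr \<Longrightarrow> low_coords_vanish C (Suc L)"
  unfolding low_coords_vanish_def
proof
  fix u assume C: "C \<in> Gr" and "u \<in> rad_plus C (Suc L)"
  then obtain w k where w: "w \<in> RP (Suc L)" and k: "k \<in> C" and u: "u = (\<lambda>y. w y + k y)"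
    by (elim set_plusE)
  have "w \<in> C" using w RPhat_Loewy_subset_IPhat GrassD(2)[OF C] by blast
  then have "u \<in> C" using lin_closed_add[OF Grass_lin_closed[OF C] _ k] u by simp
  then show "\<exists>h. (\<forall>b\<in>\<sigma>. plen (snd b) < Suc L \<longrightarrow> h b = 0) \<and> (\<lambda>y. u y - (\<Sum>b\<in>\<sigma>. h b * pv b y)) \<in> C"
    by (intro exI[of _ "\<lambda>_. 0"]) simp
qed

lemma vertex_part_rad_plus:
  assumes C: "C \<in> Gr" and u: "u \<in> rad_plus C l" and i: "i < n"
  shows "vertex_part tgt i u \<in> at_vertex tgt i (rad_plus C l)"
proof -
  obtain w k where w: "w \<in> RP l" and k: "k \<in> C" and u: "u = (\<lambda>y. w y + k y)"
    using u by (rule set_plusE)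
  have kV: "k \<in> V" using k Grass_subset_Phat[OF C] by blast
  have "vertex_part tgt i w \<in> RP l" using w vertex_part_in_Phat by (auto simp: RPhat_def vertex_part_def)
  moreover have "vertex_part tgt i k \<in> C"
    using Grass_pact[OF C qvec_in_KQ k, of "(i, [])"] pact_vertex_idem[OF kV] i by simp
  moreover have "vertex_part tgt i u = (\<lambda>y. vertex_part tgt i w y + vertex_part tgt i k y)"
    by (auto simp: vertex_part_def u)
  ultimately have "vertex_part tgt i u \<in> rad_plus C l" by (rule set_plusI)
  then show ?thesis by (auto simp: at_vertex_def vertex_part_def)
qed

lemma low_coords_vanish_step:
  assumes C: "C \<in> Gr" and l: "l \<le> L" and IH: "low_coords_vanish C (Suc l)"
  shows "low_coords_vanish C l"
  unfolding low_coords_vanish_def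
proof
  fix u assume uN: "u \<in> rad_plus C l"
  have uV: "u \<in> V" using rad_plus_Phat[OF C uN] .
  have "\<forall>i\<in>{..<n}. \<exists>H. (\<forall>b\<in>\<sigma>. plen (snd b) < l \<longrightarrow> H b = 0) \<and>
      (\<lambda>y. vertex_part tgt i u y - (\<Sum>b\<in>\<sigma>. H b * pv b y)) \<in> C"
    using low_coords_vanish_vertex[OF C l _ IH vertex_part_rad_plus[OF C uN]] by blast
  then obtain H where H: "\<forall>i\<in>{..<n}. (\<forall>b\<in>\<sigma>. plen (snd b) < l \<longrightarrow> H i b = 0) \<and>
      (\<lambda>y. vertex_part tgt i u y - (\<Sum>b\<in>\<sigma>. H i b * pv b y)) \<in> C"
    by (rule bchoice[THEN exE]) blast
  have "(\<lambda>y. \<Sum>i<n. (vertex_part tgt i u y - (\<Sum>b\<in>\<sigma>. H i b * pv b y))) \<in> C"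
    by (rule lin_closed_sum_plain[OF Grass_lin_closed[OF C]]) (use H in auto)
  moreover have "(\<lambda>y. \<Sum>i<n. (vertex_part tgt i u y - (\<Sum>b\<in>\<sigma>. H i b * pv b y)))
      = (\<lambda>y. u y - (\<Sum>b\<in>\<sigma>. (\<Sum>i<n. H i b) * pv b y))"
  proof
    fix y
    have "(\<Sum>i<n. \<Sum>b\<in>\<sigma>. H i b * pv b y) = (\<Sum>b\<in>\<sigma>. (\<Sum>i<n. H i b) * pv b y)"
      unfolding sum_distrib_right by (rule sum.swap)
    moreover have "(\<Sum>i<n. vertex_part tgt i u y) = u y"
      using fun_cong[OF sum_vertex_part[OF uV], of y] by simp
    ultimately show "(\<Sum>i<n. (vertex_part tgt i u y - (\<Sum>b\<in>\<sigma>. H i b * pv b y)))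
      = u y - (\<Sum>b\<in>\<sigma>. (\<Sum>i<n. H i b) * pv b y)" by (simp add: sum_subtractf)
  qed
  moreover have "\<forall>b\<in>\<sigma>. plen (snd b) < l \<longrightarrow> (\<Sum>i<n. H i b) = 0" using H by simp
  ultimately show "\<exists>h. (\<forall>b\<in>\<sigma>. plen (snd b) < l \<longrightarrow> h b = 0) \<and> (\<lambda>y. u y - (\<Sum>b\<in>\<sigma>. h b * pv b y)) \<in> C"
    by auto
qed

lemma low_coords_vanish_all:
  assumes C: "C \<in> Gr" and l: "l \<le> Suc L"
  shows "low_coords_vanish C l"
  using l
proof (induction l rule: inc_induct)
  case base
  show ?case by (rule low_coords_vanish_Loewy[OF C])
next
  case (step l)
  then show ?case using low_coords_vanish_step[OF C] by simp
qed

lemma scoord_RPhat_short: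
  assumes C: "C \<in> Gr" and u: "u \<in> RP l" and l: "l \<le> Suc L" and b0: "b0 \<in> \<sigma>" "plen (snd b0) < l"
  shows "scoord C u b0 = 0"
proof -
  have "u \<in> rad_plus C l" using set_plusI[OF u lin_closed_zero[OF Grass_lin_closed[OF C]], of u] by simp
  then obtain h where h: "\<forall>b\<in>\<sigma>. plen (snd b) < l \<longrightarrow> h b = 0" "(\<lambda>y. u y - (\<Sum>b\<in>\<sigma>. h b * pv b y)) \<in> C"
    using low_coords_vanish_all[OF C l] unfolding low_coords_vanish_def by blast
  show ?thesis using scoord_eqI[OF C h(2) b0(1)] h(1) b0 by simp
qed

subsection \<open>From \<open>Grass(\<sigma>)\<close> to \<open>Zsig\<close>\<close>

text \<open>The matrix of \<open>\<alpha>\<close> in the basis \<open>\<sigma>\<close> of \<open>P/C\<close>.\<close>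
definition rep_of :: "(nat \<times> 'a qpath \<Rightarrow> 'k) set \<Rightarrow> 'a \<Rightarrow> nat \<Rightarrow> nat \<Rightarrow> 'k" where
  "rep_of C = (\<lambda>\<alpha> j k. if \<alpha> \<in> Q1 \<and> j < d (tgt \<alpha>) \<and> k < d (src \<alpha>) then
      chart_coord (pv ` \<sigma>) (pact tgt (qvec (arrow_path \<alpha>)) (pv (sbasis (src \<alpha>) k))) (pv (sbasis (tgt \<alpha>) j)) C else 0)"

lemma rep_of_eq: "\<alpha> \<in> Q1 \<Longrightarrow> j < d (tgt \<alpha>) \<Longrightarrow> k < d (src \<alpha>) \<Longrightarrow>
    rep_of C \<alpha> j k = scoord C (pact tgt (qvec (arrow_path \<alpha>)) (pv (sbasis (src \<alpha>) k))) (sbasis (tgt \<alpha>) j)"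
  by (simp add: rep_of_def scoord_def)

lemma rep_of_rep_ambient: "rep_of C \<in> RA"
  by (auto simp: rep_of_def rep_ambient_def)

definition coord_vec :: "(nat \<times> 'a qpath \<Rightarrow> 'k) set \<Rightarrow> (nat \<times> 'a qpath \<Rightarrow> 'k) \<Rightarrow> nat \<Rightarrow> nat \<Rightarrow> 'k" where
  "coord_vec C u = (\<lambda>i a. if i < n \<and> a < d i then scoord C u (sbasis i a) else 0)"

lemma scoord_pact:
  assumes C: "C \<in> Gr" and f: "f \<in> KQ n Q1 src tgt" and u: "u \<in> V" and b': "b' \<in> \<sigma>"
  shows "scoord C (pact tgt f u) b' = (\<Sum>b\<in>\<sigma>. scoord C u b * scoord C (pact tgt f (pv b)) b')"
proof -
  let ?A = "\<lambda>v. pact tgt f v"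
  have sC: "lin_closed C" using Grass_lin_closed[OF C] .
  have AV: "?A (pv b) \<in> V" if "b \<in> \<sigma>" for b
    using pact_in_Phat[OF f path_vec_in_Phat] sigma_Phat_path that by blast
  have "?A (\<lambda>y. u y - (\<Sum>b\<in>\<sigma>. scoord C u b * pv b y)) \<in> C"
    by (rule Grass_pact[OF C f scoord_spec[OF C u]])
  then have w: "(\<lambda>z. ?A u z - (\<Sum>b\<in>\<sigma>. scoord C u b * ?A (pv b) z)) \<in> C"
    unfolding pact_diff pact_sum_right .
  have s2: "(\<lambda>z. \<Sum>b\<in>\<sigma>. scoord C u b * (?A (pv b) z - (\<Sum>b''\<in>\<sigma>. scoord C (?A (pv b)) b'' * pv b'' z))) \<in> C"
    by (rule lin_closed_sum[OF sC finite_sigma]) (use scoord_spec[OF C AV] in blast)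
  have "(\<Sum>b\<in>\<sigma>. scoord C u b * (\<Sum>b''\<in>\<sigma>. scoord C (?A (pv b)) b'' * pv b'' z))
      = (\<Sum>b''\<in>\<sigma>. (\<Sum>b\<in>\<sigma>. scoord C u b * scoord C (?A (pv b)) b'') * pv b'' z)" for z
    unfolding sum_distrib_left sum_distrib_right mult.assoc by (rule sum.swap)
  then have "(\<lambda>z. (?A u z - (\<Sum>b\<in>\<sigma>. scoord C u b * ?A (pv b) z)) +
      (\<Sum>b\<in>\<sigma>. scoord C u b * (?A (pv b) z - (\<Sum>b''\<in>\<sigma>. scoord C (?A (pv b)) b'' * pv b'' z))))
    = (\<lambda>z. ?A u z - (\<Sum>b''\<in>\<sigma>. (\<Sum>b\<in>\<sigma>. scoord C u b * scoord C (?A (pv b)) b'') * pv b'' z))"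
    by (simp add: right_diff_distrib sum_subtractf)
  with lin_closed_add[OF sC w s2] show ?thesis using scoord_eqI[OF C _ b'] by simp
qed

lemma scoord_pact_arrow:
  assumes C: "C \<in> Gr" and u: "u \<in> V" and \<alpha>: "\<alpha> \<in> Q1" and b': "b' \<in> \<sigma>"
  shows "scoord C (pact tgt (qvec (arrow_path \<alpha>)) u) b' =
     (\<Sum>k<d (src \<alpha>). scoord C u (sbasis (src \<alpha>) k) *
        scoord C (pact tgt (qvec (arrow_path \<alpha>)) (pv (sbasis (src \<alpha>) k))) b')"
proof -
  let ?A = "\<lambda>v. pact tgt (qvec (arrow_path \<alpha>)) v"
  have "scoord C (?A u) b' = (\<Sum>b\<in>\<sigma>. scoord C u b * scoord C (?A (pv b)) b')"
    by (rule scoord_pact[OF C qvec_in_KQ[OF valid_arrow_path[OF \<alpha>]] u b'])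
  also have "\<dots> = (\<Sum>b\<in>sigma_at (src \<alpha>). scoord C u b * scoord C (?A (pv b)) b')"
  proof (rule sum.mono_neutral_right[OF finite_sigma])
    show "sigma_at (src \<alpha>) \<subseteq> \<sigma>" by (auto simp: sigma_at_def)
    show "\<forall>b\<in>\<sigma> - sigma_at (src \<alpha>). scoord C u b * scoord C (?A (pv b)) b' = 0"
    proof
      fix b assume "b \<in> \<sigma> - sigma_at (src \<alpha>)"
      then have "?A (pv b) = (\<lambda>_. 0)" by (auto simp: sigma_at_def pact_qvec_path_vec)
      then show "scoord C u b * scoord C (?A (pv b)) b' = 0"
        using scoord_zero[OF C lin_closed_zero[OF Grass_lin_closed[OF C]] b'] by simp
    qed
  qed
  also have "\<dots> = (\<Sum>k<d (src \<alpha>). scoord C u (sbasis (src \<alpha>) k) * scoord C (?A (pv (sbasis (src \<alpha>) k))) b')"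
    using sum.reindex_bij_betw[OF sbasis_bij[of "src \<alpha>"], of "\<lambda>b. scoord C u b * scoord C (?A (pv b)) b'"]
      card_sigma_at[OF src_lt[OF \<alpha>]] by simp
  finally show ?thesis .
qed

lemma act_arrow_coord_vec:
  assumes C: "C \<in> Gr" and y: "Phat_path y" and \<alpha>: "\<alpha> \<in> Q1" and s: "src \<alpha> = ptgt (snd y)"
  shows "act (rep_of C) (qvec (arrow_path \<alpha>)) (coord_vec C (pv y)) = coord_vec C (pv (pconcat y (arrow_path \<alpha>)))"
proof (intro ext)
  fix j a
  let ?y\<alpha> = "pconcat y (arrow_path \<alpha>)"
  have pA: "pact tgt (qvec (arrow_path \<alpha>)) (pv y) = pv ?y\<alpha>" using s by (simp add: pact_qvec_path_vec)
  have gy: "Phat_path ?y\<alpha>" using Phat_path_pconcat[OF y valid_arrow_path[OF \<alpha>]] s by simp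
  show "act (rep_of C) (qvec (arrow_path \<alpha>)) (coord_vec C (pv y)) j a = coord_vec C (pv ?y\<alpha>) j a"
  proof (cases "j < n \<and> a < d j")
    case False then show ?thesis by (auto simp: mact_qvec coord_vec_def)
  next
    case True
    show ?thesis
    proof (cases "j = tgt \<alpha>")
      case True2: True
      have "act (rep_of C) (qvec (arrow_path \<alpha>)) (coord_vec C (pv y)) j a =
          (\<Sum>b<d (src \<alpha>). ev (rep_of C) (arrow_path \<alpha>) a b * coord_vec C (pv y) (src \<alpha>) b)"
        using True True2 by (simp add: mact_qvec)
      also have "\<dots> = (\<Sum>b<d (src \<alpha>). scoord C (pv y) (sbasis (src \<alpha>) b) *
          scoord C (pact tgt (qvec (arrow_path \<alpha>)) (pv (sbasis (src \<alpha>) b))) (sbasis j a))"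
        using True True2 \<alpha> src_lt[OF \<alpha>]
        by (intro sum.cong refl) (simp add: eval_path_arrow rep_of_eq coord_vec_def)
      also have "\<dots> = scoord C (pv ?y\<alpha>) (sbasis j a)"
        using scoord_pact_arrow[OF C path_vec_in_Phat[OF y] \<alpha> sbasis_in[of j a, THEN conjunct1]] True pA
        by simp
      also have "\<dots> = coord_vec C (pv ?y\<alpha>) j a" using True by (simp add: coord_vec_def)
      finally show ?thesis .
    next
      case False2: False
      have "coord_vec C (pv ?y\<alpha>) j a = scoord C (pv ?y\<alpha>) (sbasis j a)" using True by (simp add: coord_vec_def)
      also have "\<dots> = 0"
      proof (rule scoord_other_vertex[OF C path_vec_in_Phat[OF gy] tgt_lt[OF \<alpha>]])
        show "\<forall>z. pv ?y\<alpha> z \<noteq> 0 \<longrightarrow> ptgt (snd z) = tgt \<alpha>"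
        proof (intro allI impI)
          fix z assume "pv ?y\<alpha> z \<noteq> 0"
          then have "z = ?y\<alpha>" by (simp add: path_vec_def split: if_splits)
          then show "ptgt (snd z) = tgt \<alpha>" using ptgt_pconcat[of "arrow_path \<alpha>" y] s by simp
        qed
        show "sbasis j a \<in> \<sigma>" "ptgt (snd (sbasis j a)) \<noteq> tgt \<alpha>" using sbasis_in[of j a] True False2 by auto
      qed
      finally show ?thesis using False2 by (simp add: mact_qvec)
    qed
  qed
qed

lemma proj_path_rep_of_top:
  assumes C: "C \<in> Gr" and r: "r < t"
  shows "proj_path (rep_of C) (r, (e r, [])) = coord_vec C (pv (r, (e r, [])))"
proof (intro ext)
  fix k a
  have z: "(r, (e r, [])) \<in> \<sigma>" using top_in_sigma[OF r] .
  show "proj_path (rep_of C) (r, (e r, [])) k a = coord_vec C (pv (r, (e r, []))) k a"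
  proof (cases "k < n \<and> a < d k")
    case True
    have "(sbasis k a = (r, (e r, []))) \<longleftrightarrow> (k = e r \<and> a = top_index r)"
      using sbasis_sindex[OF z] sbasis_in[of k a] sindex_sbasis[of k a] True by (auto simp: top_index_def)
    then show ?thesis using True scoord_path_vec[OF C z, of "sbasis k a"] sbasis_in[of k a]
      by (auto simp: proj_path_def coord_vec_def eval_path_nil)
  qed (auto simp: proj_path_def coord_vec_def)
qed

lemma proj_path_rep_of:
  assumes C: "C \<in> Gr"
  shows "Phat_path y \<Longrightarrow> proj_path (rep_of C) y = coord_vec C (pv y)"
proof (induction y rule: Phat_path_induct)
  case (top r)
  then show ?case by (rule proj_path_rep_of_top[OF C])
next
  case (arrow y \<alpha>)
  have "proj_path (rep_of C) (pconcat y (arrow_path \<alpha>))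
      = act (rep_of C) (qvec (arrow_path \<alpha>)) (proj_path (rep_of C) y)"
    using act_arrow_proj_path[OF rep_of_rep_ambient arrow(1,2)] arrow(3) by simp
  also have "\<dots> = coord_vec C (pv (pconcat y (arrow_path \<alpha>)))"
    using act_arrow_coord_vec[OF C arrow(1,2,3)] arrow(4) by simp
  finally show ?case .
qed

lemma proj_rep_of:
  assumes C: "C \<in> Gr" and u: "u \<in> V"
  shows "proj (rep_of C) u = coord_vec C u"
proof (intro ext)
  fix i a
  have gy: "Phat_path y" if "y \<in> supp u" for y using Phat_nonzero_path[OF u] that by (simp add: supp_def)
  have "proj (rep_of C) u i a = (\<Sum>y\<in>supp u. u y * coord_vec C (pv y) i a)"
    unfolding proj_def using proj_path_rep_of[OF C gy] by simp
  also have "\<dots> = coord_vec C u i a"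
  proof (cases "i < n \<and> a < d i")
    case True
    have "scoord C (\<lambda>z. \<Sum>y\<in>supp u. u y * pv y z) (sbasis i a) = (\<Sum>y\<in>supp u. u y * scoord C (pv y) (sbasis i a))"
      by (rule scoord_sum[OF C Phat_finite_supp[OF u]]) (use path_vec_in_Phat gy sbasis_in True in auto)
    then show ?thesis using True Phat_expansion[OF u] by (simp add: coord_vec_def)
  next
    case False then show ?thesis by (auto simp: coord_vec_def)
  qed
  finally show "proj (rep_of C) u i a = coord_vec C u i a" .
qed

lemma Cker_rep_of:
  assumes C: "C \<in> Gr"
  shows "Cker (rep_of C) = C"
proof
  show "Cker (rep_of C) \<subseteq> C"
  proof
    fix u assume "u \<in> Cker (rep_of C)"
    then have u: "u \<in> V" and z: "coord_vec C u = (\<lambda>_ _. 0)" using proj_rep_of[OF C] by (auto simp: Cker_def)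
    have "scoord C u b = 0" if b: "b \<in> \<sigma>" for b
    proof -
      have "coord_vec C u (ptgt (snd b)) (sindex b) = 0" using z by simp
      then show ?thesis using b sigma_ptgt_lt sindex_lt sbasis_sindex by (simp add: coord_vec_def)
    qed
    then show "u \<in> C" using scoord_zero_imp_in[OF C u] by blast
  qed
  show "C \<subseteq> Cker (rep_of C)"
  proof
    fix u assume uC: "u \<in> C"
    then have u: "u \<in> V" using Grass_subset_Phat[OF C] by blast
    have "scoord C u (sbasis i a) = 0" if "i < n" "a < d i" for i a
      using scoord_zero[OF C uC sbasis_in[OF that, THEN conjunct1]] .
    then have "coord_vec C u = (\<lambda>_ _. 0)" by (auto simp: coord_vec_def intro!: ext)
    then show "u \<in> Cker (rep_of C)" using proj_rep_of[OF C u] u by (simp add: Cker_def)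
  qed
qed

lemma coord_vec_path_vec:
  assumes C: "C \<in> Gr" and b: "b \<in> \<sigma>"
  shows "coord_vec C (pv b) = unit_vec b"
proof (intro ext)
  fix k a
  show "coord_vec C (pv b) k a = unit_vec b k a"
  proof (cases "k < n \<and> a < d k")
    case True
    have "(sbasis k a = b) \<longleftrightarrow> (k = ptgt (snd b) \<and> a = sindex b)"
      using sbasis_sindex[OF b] sbasis_in[of k a] sindex_sbasis[of k a] True by auto
    then show ?thesis using True scoord_path_vec[OF C b, of "sbasis k a"] sbasis_in[of k a]
      by (auto simp: coord_vec_def unit_vec_def)
  next
    case False
    then show ?thesis using sindex_lt[OF b] sigma_ptgt_lt[OF b] by (auto simp: coord_vec_def unit_vec_def)
  qed
qed

text \<open>Since \<open>\<rho> \<cdot> b \<in> C\<close> for every skeleton path \<open>b\<close>, the relation \<open>\<rho>\<close> acts as zero on the basis of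
  \<open>M\<close> through \<open>rep_of C\<close>.\<close>
lemma rep_of_in_Rep:
  assumes C: "C \<in> Gr"
  shows "rep_of C \<in> Rep n Q1 src tgt I d"
  unfolding Rep_def
proof (intro CollectI conjI rep_of_rep_ambient ballI allI impI)
  let ?x = "rep_of C"
  fix \<rho> i j a b
  assume rho: "\<rho> \<in> I" and i: "i < n" and j: "j < n" and a: "a < d j" and b: "b < d i"
  let ?\<beta> = "sbasis i b"
  have \<beta>: "?\<beta> \<in> \<sigma>" using sbasis_in[OF i b] by auto
  have rK: "\<rho> \<in> KQ n Q1 src tgt" using rho I_KQ by blast
  have g\<beta>: "Phat_path ?\<beta>" using sigma_Phat_path[OF \<beta>] by simp
  have uC: "pact tgt \<rho> (pv ?\<beta>) \<in> C" using pact_ideal_IPhat[OF rho \<beta>] GrassD(2)[OF C] by blast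
  have uV: "pact tgt \<rho> (pv ?\<beta>) \<in> V" using uC Grass_subset_Phat[OF C] by blast
  have "act ?x \<rho> (unit_vec ?\<beta>) = proj ?x (pact tgt \<rho> (pv ?\<beta>))"
    using proj_pact[OF rep_of_rep_ambient rK path_vec_in_Phat[OF g\<beta>]] proj_path_vec
      proj_path_rep_of[OF C g\<beta>] coord_vec_path_vec[OF C \<beta>] by simp
  also have "\<dots> = coord_vec C (pact tgt \<rho> (pv ?\<beta>))" by (rule proj_rep_of[OF C uV])
  also have "\<dots> = (\<lambda>_ _. 0)"
    using scoord_zero[OF C uC sbasis_in[THEN conjunct1]] by (auto simp: coord_vec_def intro!: ext)
  finally have "act ?x \<rho> (unit_vec ?\<beta>) j a = 0" by simp
  then show "(\<Sum>p\<in>{p. \<rho> p \<noteq> 0 \<and> fst p = i \<and> pend tgt p = j}. \<rho> p * ev ?x p a b) = 0"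
    using act_unit_vec_entry[OF KQ_finite_supp[OF rK] i b j a] by simp
qed

lemma rep_of_in_Zsig:
  assumes C: "C \<in> Gr"
  shows "rep_of C \<in> Zsig"
proof -
  have skeleton_units: "skeleton_units (rep_of C)" unfolding skeleton_units_def
    using proj_path_rep_of[OF C] sigma_Phat_path coord_vec_path_vec[OF C] by auto
  have skeleton_gaps: "skeleton_gaps (rep_of C)" unfolding skeleton_gaps_def
  proof (intro ballI impI)
    fix b \<alpha> b'
    assume b: "b \<in> \<sigma>" and \<alpha>: "\<alpha> \<in> Q1" and s: "src \<alpha> = ptgt (snd b)" and b': "b' \<in> \<sigma>"
      and pb': "ptgt (snd b') = tgt \<alpha>" and lb': "plen (snd b') \<le> plen (snd b)"
    let ?y = "pconcat b (arrow_path \<alpha>)"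
    have gy: "Phat_path ?y" using Phat_path_pconcat[OF _ valid_arrow_path[OF \<alpha>]] sigma_Phat_path[OF b] s by simp
    have ly: "plen (snd ?y) = Suc (plen (snd b))" by simp
    have "proj_path (rep_of C) ?y (tgt \<alpha>) (sindex b') = coord_vec C (pv ?y) (tgt \<alpha>) (sindex b')"
      using proj_path_rep_of[OF C gy] by simp
    also have "\<dots> = scoord C (pv ?y) b'"
      using tgt_lt[OF \<alpha>] sindex_lt[OF b'] pb' sbasis_sindex[OF b'] by (simp add: coord_vec_def)
    also have "\<dots> = 0"
      by (rule scoord_RPhat_short[OF C path_vec_RPhat[OF gy]]) (use sigma_Phat_path[OF b] b' lb' ly in auto)
    finally show "proj_path (rep_of C) ?y (tgt \<alpha>) (sindex b') = 0" .
  qed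
  show ?thesis using rep_of_in_Rep[OF C] skeleton_units skeleton_gaps by (simp add: Zsig_def)
qed

lemma chart_coord_Cker:
  assumes x: "x \<in> Zsig" and v: "v \<in> V" and b0: "b0 \<in> \<sigma>"
  shows "chart_coord (pv ` \<sigma>) v (pv b0) (Cker x) = proj x v (ptgt (snd b0)) (sindex b0)"
proof -
  let ?h = "\<lambda>b. proj x v (ptgt (snd b)) (sindex b)"
  have lc: "lincomb (\<lambda>w. ?h (inv_into \<sigma> pv w)) (pv ` \<sigma>) = (\<lambda>z. \<Sum>b\<in>\<sigma>. ?h b * pv b z)"
    by (rule lincomb_path_vec_inv)
  have "(\<lambda>y. v y - lincomb (\<lambda>w. ?h (inv_into \<sigma> pv w)) (pv ` \<sigma>) y) \<in> Cker x"
    unfolding lc using Phat_expansion_mod_Cker[OF x v] .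
  from chart_coord_eqI[OF Cker_lin_closed Cker_indep[OF x] this] b0 path_vec_inv[OF b0]
  show ?thesis by simp
qed

lemma rep_of_Cker:
  assumes x: "x \<in> Zsig"
  shows "rep_of (Cker x) = x"
proof (intro ext)
  fix \<alpha> j k
  show "rep_of (Cker x) \<alpha> j k = x \<alpha> j k"
  proof (cases "\<alpha> \<in> Q1 \<and> j < d (tgt \<alpha>) \<and> k < d (src \<alpha>)")
    case False
    then have "x \<alpha> j k = 0" using Zsig_rep_ambient[OF x] by (auto simp: rep_ambient_def)
    then show ?thesis using False by (auto simp: rep_of_def)
  next
    case True
    then have \<alpha>: "\<alpha> \<in> Q1" and j: "j < d (tgt \<alpha>)" and k: "k < d (src \<alpha>)" by auto
    let ?bk = "sbasis (src \<alpha>) k" and ?bj = "sbasis (tgt \<alpha>) j"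
    have bk: "?bk \<in> \<sigma>" "ptgt (snd ?bk) = src \<alpha>" "sindex ?bk = k"
      using sbasis_in[OF src_lt[OF \<alpha>] k] sindex_sbasis[OF src_lt[OF \<alpha>] k] by auto
    have bj: "?bj \<in> \<sigma>" "ptgt (snd ?bj) = tgt \<alpha>" "sindex ?bj = j"
      using sbasis_in[OF tgt_lt[OF \<alpha>] j] sindex_sbasis[OF tgt_lt[OF \<alpha>] j] by auto
    have gk: "Phat_path ?bk" using sigma_Phat_path[OF bk(1)] by simp
    have AV: "pact tgt (qvec (arrow_path \<alpha>)) (pv ?bk) \<in> V"
      using pact_path_vec_in_Phat[OF gk valid_arrow_path[OF \<alpha>]] .
    have "rep_of (Cker x) \<alpha> j k = proj x (pact tgt (qvec (arrow_path \<alpha>)) (pv ?bk)) (tgt \<alpha>) j"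
      using chart_coord_Cker[OF x AV bj(1)] bj True by (simp add: rep_of_def)
    also have "\<dots> = act x (qvec (arrow_path \<alpha>)) (unit_vec ?bk) (tgt \<alpha>) j"
      using proj_pact_qvec_path_vec[OF Zsig_rep_ambient[OF x] gk valid_arrow_path[OF \<alpha>]] skeleton_unitsD[OF x bk(1)] by simp
    also have "\<dots> = (\<Sum>b<d (src \<alpha>). ev x (arrow_path \<alpha>) j b * unit_vec ?bk (src \<alpha>) b)"
      using tgt_lt[OF \<alpha>] j by (simp add: mact_qvec)
    also have "\<dots> = (\<Sum>b<d (src \<alpha>). if b = k then x \<alpha> j k else 0)"
      using bk by (intro sum.cong refl) (auto simp: eval_path_arrow unit_vec_def)
    also have "\<dots> = x \<alpha> j k" using k by simp
    finally show ?thesis .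
  qed
qed

lemma Cker_morphism: "rep_to_gr_morphism V Zsig Cker"
  unfolding rep_to_gr_morphism_def
proof (intro ballI)
  fix z assume z: "z \<in> Zsig"
  let ?h = "\<lambda>_::'a \<Rightarrow> nat \<Rightarrow> nat \<Rightarrow> 'k. (1::'k)"
  have h: "?h \<in> polys_over rep_coords" by (rule polys_over.const)
  have ic: "\<forall>z'\<in>Zsig. ?h z' \<noteq> 0 \<longrightarrow> in_chart V (pv ` \<sigma>) (Cker z')"
    using path_vec_sigma_Phat Cker_indep Cker_spans by (auto simp: in_chart_def)
  have rg: "\<forall>v\<in>V. \<forall>s\<in>pv ` \<sigma>. regular_on rep_coords {z'\<in>Zsig. ?h z' \<noteq> 0} (\<lambda>z'. chart_coord (pv ` \<sigma>) v s (Cker z'))"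
  proof (intro ballI)
    fix v s assume v: "v \<in> V" and s: "s \<in> pv ` \<sigma>"
    then obtain b0 where b0: "b0 \<in> \<sigma>" "s = pv b0" by auto
    have eqf: "\<forall>y\<in>{z'\<in>Zsig. ?h z' \<noteq> 0}. ?h y \<noteq> 0 \<longrightarrow> chart_coord (pv ` \<sigma>) v s (Cker y) = proj y v (ptgt (snd b0)) (sindex b0) / ?h y"
      using chart_coord_Cker[OF _ v b0(1)] b0 by simp
    show "regular_on rep_coords {z'\<in>Zsig. ?h z' \<noteq> 0} (\<lambda>z'. chart_coord (pv ` \<sigma>) v s (Cker z'))"
      unfolding regular_on_def
      using proj_poly[of v "ptgt (snd b0)" "sindex b0"] h eqf
      by (intro ballI bexI[of _ "\<lambda>x. proj x v (ptgt (snd b0)) (sindex b0)"] bexI[of _ ?h] conjI) auto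
  qed
  show "\<exists>S. \<exists>h\<in>polys_over rep_coords. h z \<noteq> 0 \<and> (\<forall>z'\<in>Zsig. h z' \<noteq> 0 \<longrightarrow> in_chart V S (Cker z')) \<and>
          (\<forall>v\<in>V. \<forall>s\<in>S. regular_on rep_coords {z' \<in> Zsig. h z' \<noteq> 0} (\<lambda>z'. chart_coord S v s (Cker z')))"
    using h ic rg by (intro exI[of _ "pv ` \<sigma>"] bexI[of _ ?h]) auto
qed

lemma rep_of_morphism: "gr_to_rep_morphism V Gr rep_of"
  unfolding gr_to_rep_morphism_def gr_regular_on_def
proof (intro allI ballI)
  fix \<alpha> j k and W assume W: "W \<in> Gr"
  let ?S = "pv ` \<sigma>"
  let ?h = "\<lambda>_::(nat \<times> 'a qpath \<Rightarrow> 'k) set. (1::'k)"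
  have icW: "in_chart V ?S W" using GrassD(4,5)[OF W] path_vec_sigma_Phat by (simp add: in_chart_def)
  have h: "?h \<in> polys_over (chart_atoms V ?S)" by (rule polys_over.const)
  show "\<exists>S. in_chart V S W \<and> (\<exists>g\<in>polys_over (chart_atoms V S). \<exists>h\<in>polys_over (chart_atoms V S).
      h W \<noteq> 0 \<and> (\<forall>W'\<in>Gr. in_chart V S W' \<longrightarrow> h W' \<noteq> 0 \<longrightarrow> rep_of W' \<alpha> j k = g W' / h W'))"
  proof (cases "\<alpha> \<in> Q1 \<and> j < d (tgt \<alpha>) \<and> k < d (src \<alpha>)")
    case True
    let ?v = "pact tgt (qvec (arrow_path \<alpha>)) (pv (sbasis (src \<alpha>) k))" and ?s = "pv (sbasis (tgt \<alpha>) j)"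
    have vV: "?v \<in> V"
      using pact_path_vec_in_Phat[OF _ valid_arrow_path] sigma_Phat_path sbasis_in[OF src_lt] True by blast
    have sS: "?s \<in> ?S" using sbasis_in[OF tgt_lt] True by blast
    have g: "chart_coord ?S ?v ?s \<in> polys_over (chart_atoms V ?S)"
      by (rule polys_over.atom) (use vV sS in \<open>auto simp: chart_atoms_def\<close>)
    show ?thesis using icW g h True
      by (intro exI[of _ ?S] conjI bexI[of _ "chart_coord ?S ?v ?s"] bexI[of _ ?h]) (auto simp: rep_of_def)
  next
    case False
    have g: "(\<lambda>_. 0) \<in> polys_over (chart_atoms V ?S)" by (rule polys_over.const)
    show ?thesis using icW g h False
      by (intro exI[of _ ?S] conjI bexI[of _ "\<lambda>_. 0"] bexI[of _ ?h]) (auto simp: rep_of_def)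
  qed
qed

end

theorem lemma3p1:
  fixes n :: nat and Q1 :: "'a set" and src tgt :: "'a \<Rightarrow> nat"
    and I :: "('a qpath \<Rightarrow> 'k::field) set"
    and L t :: nat and e :: "nat \<Rightarrow> nat"
    and m :: "nat \<Rightarrow> nat \<Rightarrow> nat" and d :: "nat \<Rightarrow> nat"
    and \<sigma> :: "(nat \<times> 'a qpath) set"
  assumes K_alg_closed: "alg_closed_field TYPE('k)"
    and quiver: "finite Q1" "\<forall>\<alpha>\<in>Q1. src \<alpha> < n \<and> tgt \<alpha> < n"
    and adm: "admissible n Q1 src tgt I"
    and loewy: "Rpow n Q1 src tgt (Suc L) \<subseteq> I" "\<not> Rpow n Q1 src tgt L \<subseteq> I"
    and top: "\<forall>r<t. e r < n" "\<forall>i<n. card {r. r < t \<and> e r = i} = m 0 i"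
    and skel: "is_skeleton n Q1 src tgt t e L m \<sigma>"
    and dimvec: "\<forall>i<n. d i = (\<Sum>l\<le>L. m l i)"
    and nonempty: "Grass n Q1 src tgt I t e L m \<sigma> \<noteq> {}"
  shows "\<exists>(\<phi> :: (nat \<times> 'a qpath \<Rightarrow> 'k) set \<Rightarrow> 'a \<Rightarrow> nat \<Rightarrow> nat \<Rightarrow> 'k) Z \<psi>.
           zariski_closed_rep Q1 src tgt d Z \<and> Z \<subseteq> Rep n Q1 src tgt I d \<and>
           (\<forall>C\<in>Grass n Q1 src tgt I t e L m \<sigma>. \<phi> C \<in> Z \<and> \<psi> (\<phi> C) = C) \<and>
           (\<forall>z\<in>Z. \<psi> z \<in> Grass n Q1 src tgt I t e L m \<sigma> \<and> \<phi> (\<psi> z) = z) \<and>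
           gr_to_rep_morphism (Phat n Q1 src tgt t e) (Grass n Q1 src tgt I t e L m \<sigma>) \<phi> \<and>
           rep_to_gr_morphism (Phat n Q1 src tgt t e) Z \<psi> \<and>
           (\<forall>C\<in>Grass n Q1 src tgt I t e L m \<sigma>. quot_iso_rep n Q1 src tgt t e d C (\<phi> C))"
proof -
  interpret skeleton_data n Q1 src tgt I L t e m d \<sigma>
    using quiver adm loewy(1) top(1) skel dimvec by unfold_locales auto
  show ?thesis
  proof (intro exI[of _ rep_of] exI[of _ Zsig] exI[of _ Cker] conjI ballI)
    show "zariski_closed_rep Q1 src tgt d Zsig" by (rule Zsig_closed)
    show "Zsig \<subseteq> Rep n Q1 src tgt I d" by (auto simp: Zsig_def)
    fix C assume C: "C \<in> Grass n Q1 src tgt I t e L m \<sigma>"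
    show "rep_of C \<in> Zsig" by (rule rep_of_in_Zsig[OF C])
    show "Cker (rep_of C) = C" by (rule Cker_rep_of[OF C])
    show "quot_iso_rep n Q1 src tgt t e d C (rep_of C)"
      using Cker_quot_iso_rep[OF rep_of_in_Zsig[OF C]] Cker_rep_of[OF C] by simp
  next
    fix z assume z: "z \<in> Zsig"
    show "Cker z \<in> Grass n Q1 src tgt I t e L m \<sigma>" by (rule Cker_in_Grass[OF z])
    show "rep_of (Cker z) = z" by (rule rep_of_Cker[OF z])
  next
    show "gr_to_rep_morphism (Phat n Q1 src tgt t e) (Grass n Q1 src tgt I t e L m \<sigma>) rep_of"
      by (rule rep_of_morphism)
    show "rep_to_gr_morphism (Phat n Q1 src tgt t e) Zsig Cker" by (rule Cker_morphism)
  qed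
qed

end
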